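(* Let $(\mathcal C_t)_{t\in\mathbb N}$ be a family of Clifford circuits, each with linear outcome code, whose qubits are placed (injectively) on the $D$-dimensional grid $\mathbb Z^D$. Suppose the family is bounded, i.e. there is a constant $c$ such that for every $t$ the dual code $\mathcal O(\mathcal C_t)^\perp$ is spanned by vectors each of Hamming weight at most $c$ and depth at most $c$, and suppose every operation of every $\mathcal C_t$ acts on qubits pairwise separated by distance at most $c$ in the grid. Then the spacetime codes of the circuits are $(D+1)$-dimensional local: there is a constant $c'$ such that for every $t$ the qubits of the spacetime code of $\mathcal C_t$ can be mapped injectively to $\mathbb Z^{D+1}$ so that its stabilizer group $\{\overleftarrow{F(u)}:u\in\mathcal O(\mathcal C_t)^\perp\}$ has a generating set whose elements are each supported in a ball of radius $c'$.
   Context: A Clifford circuit on $n$ qubits is a finite sequence of operations, each a unitary Clifford gate or the measurement of a Hermitian $n$-qubit Pauli, each with a level in $\{1,2,\dots\}$; operations of equal level have disjoint supports and levels are nondecreasing; depth $\Delta$ = maximal level. In circuit order the $j$-th measurement measures $S_j$ at level $\ell_j$ ($j=1,\dots,m$); outcome $o_j=0$ for eigenvalue $+1$, $1$ for $-1$. The outcome code $\mathcal O(\mathcal C)\subseteq\mathbb Z_2^m$ is the set of outcome bit-strings occurring with nonzero probability for some input state; $\perp$ refers to $(u|v)=\sum u_iv_i\bmod2$. The depth of $u\in\mathbb Z_2^m$ is $\max\{\ell_j:u_j=1\}-\min\{\ell_j:u_j=1\}+1$. $\overline{\mathcal P}_N$ is the $N$-qubit Pauli group modulo phases; $U_\ell$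 is the product of unitary gates of level $\ell$. Fault operators $F\in\overline{\mathcal P}_{n(\Delta+1)}$ act on qubits $(\ell+0.5,q)$, $0\le\ell\le\Delta$, $1\le q\le n$, with level components $F_{\ell+0.5}$; $\eta_{\ell+0.5}(P)$ is $P$ at level $\ell+0.5$ and $I$ elsewhere. Back-cumulant $\overleftarrow F$: start with $F$; for $\ell=\Delta,\dots,1$ replace $\overleftarrow F_{\ell-0.5}$ by $\overleftarrow F_{\ell-0.5}\cdot U_\ell^{-1}\overleftarrow F_{\ell+0.5}U_\ell$. $F(u)=\prod_j\eta_{\ell_j-0.5}(S_j^{u_j})$. The spacetime code of $\mathcal C$ is the stabilizer code on the $n(\Delta+1)$ qubits with stabilizer group $\{\overleftarrow{F(u)}:u\in\mathcal O(\mathcal C)^\perp\}$. *)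

theory Defs
  imports "Jordan_Normal_Form.Matrix"
begin

text \<open>An n-qubit Pauli modulo phases X^x Z^z is represented by the pair (X, Z) of
  qubit sets (subsets of {..<n}) on which x resp. z is 1.  Multiplication modulo
  phases is componentwise symmetric difference.\<close>

type_synonym pauli = "nat set \<times> nat set"

definition pmul :: "pauli \<Rightarrow> pauli \<Rightarrow> pauli" where
  "pmul P Q = (fst P - fst Q \<union> (fst Q - fst P), snd P - snd Q \<union> (snd Q - snd P))"

definition psupp :: "pauli \<Rightarrow> nat set" where
  "psupp P = fst P \<union> snd P"

definition is_pauli :: "nat \<Rightarrow> pauli \<Rightarrow> bool" where
  "is_pauli n P \<longleftrightarrow> fst P \<subseteq> {..<n} \<and> snd P \<subseteq> {..<n}"

text \<open>Computational basis states of n qubits are indexed by b < 2^n, qubit q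
  being bit q of b.  The matrix X^x Z^z maps |b> to (-1)^(z.b) |b xor x>.\<close>

definition pauli_mat :: "nat \<Rightarrow> pauli \<Rightarrow> complex mat" where
  "pauli_mat n P = mat (2^n) (2^n) (\<lambda>(a, b).
     if (\<forall>q<n. bit a q \<longleftrightarrow> (bit b q \<noteq> (q \<in> fst P)))
     then (-1) ^ card {q \<in> snd P. q < n \<and> bit b q} else 0)"

text \<open>A Hermitian n-qubit Pauli: a sign bit s and P = (X,Z); its matrix is
  (-1)^s i^|X \<inter> Z| X^x Z^z.\<close>

type_synonym herm_pauli = "bool \<times> pauli"

definition herm_pauli_mat :: "nat \<Rightarrow> herm_pauli \<Rightarrow> complex mat" where
  "herm_pauli_mat n S = ((if fst S then -1 else 1) * \<i> ^ card (fst (snd S) \<inter> snd (snd S)))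
      \<cdot>\<^sub>m pauli_mat n (snd S)"

definition adj :: "complex mat \<Rightarrow> complex mat" where
  "adj A = mat (dim_col A) (dim_row A) (\<lambda>(i, j). cnj (A $$ (j, i)))"

definition unitary_mat :: "nat \<Rightarrow> complex mat \<Rightarrow> bool" where
  "unitary_mat N U \<longleftrightarrow> U \<in> carrier_mat N N \<and> U * adj U = 1\<^sub>m N \<and> adj U * U = 1\<^sub>m N"

definition clifford :: "nat \<Rightarrow> complex mat \<Rightarrow> bool" where
  "clifford n U \<longleftrightarrow> unitary_mat (2^n) U \<and>
     (\<forall>P. is_pauli n P \<longrightarrow>
        (\<exists>a Q. is_pauli n Q \<and> U * pauli_mat n P * adj U = a \<cdot>\<^sub>m pauli_mat n Q))"

definition conj_mod_phase :: "nat \<Rightarrow> complex mat \<Rightarrow> pauli \<Rightarrow> pauli" where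
  "conj_mod_phase n U P = (THE Q. is_pauli n Q \<and>
      (\<exists>a. adj U * pauli_mat n P * U = a \<cdot>\<^sub>m pauli_mat n Q))"

definition mat_supp :: "nat \<Rightarrow> complex mat \<Rightarrow> nat set" where
  "mat_supp n U = {q. q < n \<and>
     \<not> (U * pauli_mat n ({q}, {}) = pauli_mat n ({q}, {}) * U \<and>
        U * pauli_mat n ({}, {q}) = pauli_mat n ({}, {q}) * U)}"

datatype operation =
    Gate nat "complex mat"
  | Meas nat herm_pauli

fun op_level :: "operation \<Rightarrow> nat" where
  "op_level (Gate l U) = l"
| "op_level (Meas l S) = l"

fun op_supp :: "nat \<Rightarrow> operation \<Rightarrow> nat set" where
  "op_supp n (Gate l U) = mat_supp n U"
| "op_supp n (Meas l S) = psupp (snd S)"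

type_synonym circuit = "nat \<times> operation list"

definition nqubits :: "circuit \<Rightarrow> nat" where "nqubits C = fst C"
definition ops :: "circuit \<Rightarrow> operation list" where "ops C = snd C"

fun op_ok :: "nat \<Rightarrow> operation \<Rightarrow> bool" where
  "op_ok n (Gate l U) \<longleftrightarrow> clifford n U"
| "op_ok n (Meas l S) \<longleftrightarrow> is_pauli n (snd S)"

definition clifford_circuit :: "circuit \<Rightarrow> bool" where
  "clifford_circuit C \<longleftrightarrow>
     (\<forall>w \<in> set (ops C). op_ok (nqubits C) w \<and> op_level w \<ge> 1) \<and>
     sorted (map op_level (ops C)) \<and>
     (\<forall>i j. i < length (ops C) \<and> j < length (ops C) \<and> i \<noteq> j \<and>
        op_level (ops C ! i) = op_level (ops C ! j) \<longrightarrow>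
        op_supp (nqubits C) (ops C ! i) \<inter> op_supp (nqubits C) (ops C ! j) = {})"

definition depth :: "circuit \<Rightarrow> nat" where
  "depth C = foldr max (map op_level (ops C)) 0"

fun is_meas :: "operation \<Rightarrow> bool" where
  "is_meas (Gate l U) = False"
| "is_meas (Meas l S) = True"

text \<open>The measurements in circuit order: j-th measurement (j < m, 0-based).\<close>

definition meas_ops :: "circuit \<Rightarrow> operation list" where
  "meas_ops C = filter is_meas (ops C)"

definition nmeas :: "circuit \<Rightarrow> nat" where
  "nmeas C = length (meas_ops C)"

definition meas_level :: "circuit \<Rightarrow> nat \<Rightarrow> nat" where
  "meas_level C j = op_level (meas_ops C ! j)"

fun meas_pauli :: "operation \<Rightarrow> herm_pauli" where
  "meas_pauli (Meas l S) = S"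
| "meas_pauli (Gate l U) = (False, ({}, {}))"

definition meas_S :: "circuit \<Rightarrow> nat \<Rightarrow> herm_pauli" where
  "meas_S C j = meas_pauli (meas_ops C ! j)"

text \<open>Vectors in Z_2^m are represented by their supports, subsets of {..<m}.
  An outcome string w: w_j = 1 iff j \<in> w.\<close>

text \<open>Run the circuit on an (unnormalised) state vector, projecting each
  measurement onto the eigenspace of the prescribed outcome.  The argument j
  counts the measurements already performed.\<close>

fun run :: "nat \<Rightarrow> nat set \<Rightarrow> nat \<Rightarrow> operation list \<Rightarrow> complex vec \<Rightarrow> complex vec" where
  "run n w j [] \<psi> = \<psi>"
| "run n w j (Gate l U # rest) \<psi> = run n w j rest (U *\<^sub>v \<psi>)"
| "run n w j (Meas l S # rest) \<psi> =
     run n w (Suc j) rest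
       (((1/2::complex) \<cdot>\<^sub>m (1\<^sub>m (2^n) + (if j \<in> w then -1 else 1) \<cdot>\<^sub>m herm_pauli_mat n S)) *\<^sub>v \<psi>)"

text \<open>For a (nonzero) pure input, the probability of w is the squared norm of
  the (renormalised) projected vector, hence nonzero iff that vector is nonzero.\<close>

definition outcome_code :: "circuit \<Rightarrow> nat set set" where
  "outcome_code C = {w. w \<subseteq> {..<nmeas C} \<and>
     (\<exists>\<psi> \<in> carrier_vec (2 ^ nqubits C). \<psi> \<noteq> 0\<^sub>v (2 ^ nqubits C) \<and>
        run (nqubits C) w 0 (ops C) \<psi> \<noteq> 0\<^sub>v (2 ^ nqubits C))}"

definition symdiff :: "nat set \<Rightarrow> nat set \<Rightarrow> nat set" where
  "symdiff A B = (A - B) \<union> (B - A)"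

definition linear_code :: "nat \<Rightarrow> nat set set \<Rightarrow> bool" where
  "linear_code m Oc \<longleftrightarrow> Oc \<subseteq> Pow {..<m} \<and> {} \<in> Oc \<and> (\<forall>u\<in>Oc. \<forall>v\<in>Oc. symdiff u v \<in> Oc)"

definition dual_code :: "nat \<Rightarrow> nat set set \<Rightarrow> nat set set" where
  "dual_code m Oc = {u. u \<subseteq> {..<m} \<and> (\<forall>v\<in>Oc. even (card (u \<inter> v)))}"

inductive_set z2span :: "nat set set \<Rightarrow> nat set set" for B where
  zero: "{} \<in> z2span B"
| add: "u \<in> z2span B \<Longrightarrow> b \<in> B \<Longrightarrow> symdiff u b \<in> z2span B"

definition vec_depth :: "circuit \<Rightarrow> nat set \<Rightarrow> nat" where
  "vec_depth C u = (if u = {} then 0 else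
     Max (meas_level C ` u) - Min (meas_level C ` u) + 1)"

text \<open>Fault operators: slot k (0 \<le> k \<le> depth) stands for level k + 0.5; the value
  at slot k is the level component F_{k+0.5}, an n-qubit Pauli modulo phases.\<close>

type_synonym fault = "nat \<Rightarrow> pauli"

definition fmul :: "fault \<Rightarrow> fault \<Rightarrow> fault" where
  "fmul F G = (\<lambda>k. pmul (F k) (G k))"

definition fone :: fault where "fone = (\<lambda>k. ({}, {}))"

definition level_unitary :: "circuit \<Rightarrow> nat \<Rightarrow> complex mat" where
  "level_unitary C l = foldr (\<lambda>w M. case w of Gate l' U \<Rightarrow> (if l' = l then M * U else M) | Meas _ _ \<Rightarrow> M)
      (ops C) (1\<^sub>m (2 ^ nqubits C))"

text \<open>Back-cumulant: bc C F i is the final value at slot (depth - i).\<close>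

fun bc :: "circuit \<Rightarrow> fault \<Rightarrow> nat \<Rightarrow> pauli" where
  "bc C F 0 = F (depth C)"
| "bc C F (Suc i) = pmul (F (depth C - Suc i))
      (conj_mod_phase (nqubits C) (level_unitary C (depth C - i)) (bc C F i))"

definition back_cumulant :: "circuit \<Rightarrow> fault \<Rightarrow> fault" where
  "back_cumulant C F = (\<lambda>k. if k \<le> depth C then bc C F (depth C - k) else ({}, {}))"

text \<open>F(u) = prod_j eta_{l_j - 0.5}(S_j^{u_j}); level l_j - 0.5 is slot l_j - 1.\<close>

definition F_of :: "circuit \<Rightarrow> nat set \<Rightarrow> fault" where
  "F_of C u = (\<lambda>k. foldr pmul
      (map (\<lambda>j. if j \<in> u \<and> meas_level C j - 1 = k then snd (meas_S C j) else ({}, {}))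
           [0..<nmeas C]) ({}, {}))"

definition spacetime_stabilizers :: "circuit \<Rightarrow> fault set" where
  "spacetime_stabilizers C =
     {back_cumulant C (F_of C u) | u. u \<in> dual_code (nmeas C) (outcome_code C)}"

inductive_set fspan :: "fault set \<Rightarrow> fault set" for G where
  one: "fone \<in> fspan G"
| mul: "F \<in> fspan G \<Longrightarrow> g \<in> G \<Longrightarrow> fmul F g \<in> fspan G"

definition spacetime_qubits :: "circuit \<Rightarrow> (nat \<times> nat) set" where
  "spacetime_qubits C = {..depth C} \<times> {..<nqubits C}"

definition fsupp :: "circuit \<Rightarrow> fault \<Rightarrow> (nat \<times> nat) set" where
  "fsupp C F = {(k, q). k \<le> depth C \<and> q \<in> psupp (F k)}"

text \<open>Points of Z^D: functions nat \<Rightarrow> int vanishing at coordinates \<ge> D.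
  Distance: the sup (l-infinity) metric.\<close>

definition grid :: "nat \<Rightarrow> (nat \<Rightarrow> int) set" where
  "grid D = {p. \<forall>i\<ge>D. p i = 0}"

definition grid_dist_le :: "nat \<Rightarrow> (nat \<Rightarrow> int) \<Rightarrow> (nat \<Rightarrow> int) \<Rightarrow> int \<Rightarrow> bool" where
  "grid_dist_le D p p' r \<longleftrightarrow> (\<forall>i<D. \<bar>p i - p' i\<bar> \<le> r)"

end

(*
  Propagating the measured Paulis selected by u backwards through the circuit shows that u lies
  in the dual of the outcome code exactly when, at every level l, the measurements of level l
  commute with U_l^-1 Y_l U_l and Y_0 = I, where Y is the back-cumulant of F(u): the product of
  the selected outcomes then has a deterministic sign, and otherwise both signs occur.  Every gate
  moves supports by at most c, so Y_k lies within c times the number of intervening levels of the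
  measurements of u (light cone).  A generator u of weight and depth at most c splits into
  clusters whose measurement supports are pairwise more than 2c^2 + 3c apart; then the light
  cones of different clusters never meet, so by the criterion each cluster is again a dual
  vector, and its diameter is O(c^3).  Placing the spacetime qubit (k, q) at (pos q, k), the
  back-cumulants of the clusters generate the spacetime stabilizer group, and each lies in a ball
  of radius c^2 + O(c^3) + c.
*)

theory Submission
  imports Defs
begin

section \<open>Pauli matrices\<close>

abbreviation pone :: pauli where "pone \<equiv> ({}, {})"

definition nat_of_bits :: "nat \<Rightarrow> (nat \<Rightarrow> bool) \<Rightarrow> nat" where
  "nat_of_bits n f = horner_sum of_bool 2 (map f [0..<n])"

lemma bit_nat_of_bits: "bit (nat_of_bits n f) q \<longleftrightarrow> q < n \<and> f q"
  unfolding nat_of_bits_def bit_horner_sum_bit_iff by (cases "q < n") simp_all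

lemma nat_of_bits_less: "nat_of_bits n f < 2 ^ n"
proof -
  have "take_bit n (nat_of_bits n f) = nat_of_bits n f"
    unfolding nat_of_bits_def take_bit_horner_sum_bit_eq by simp
  then show ?thesis by (simp add: take_bit_nat_eq_self_iff)
qed

lemma nat_eq_if_low_bits_eq:
  fixes a b :: nat
  assumes "a < 2 ^ n" "b < 2 ^ n" "\<And>q. q < n \<Longrightarrow> bit a q = bit b q"
  shows "a = b"
proof -
  have "take_bit n a = a" "take_bit n b = b"
    using assms(1,2) by (simp_all add: take_bit_nat_eq_self_iff)
  moreover have "take_bit n a = take_bit n b"
    by (rule bit_eqI) (use assms(3) in \<open>auto simp: bit_take_bit_iff\<close>)
  ultimately show ?thesis by metis
qed

lemma card_symdiff:
  assumes "finite A" "finite B"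
  shows "card (A - B \<union> (B - A)) + 2 * card (A \<inter> B) = card A + card B"
proof -
  have "card (A - B \<union> (B - A)) = card (A - B) + card (B - A)"
    using assms by (subst card_Un_disjoint) auto
  moreover have "card A = card (A - B) + card (A \<inter> B)" "card B = card (B - A) + card (A \<inter> B)"
    using card_Int_Diff[OF assms(1), of B] card_Int_Diff[OF assms(2), of A] by (auto simp: Int_commute)
  ultimately show ?thesis by simp
qed

lemma even_card_symdiff:
  assumes "finite A" "finite B"
  shows "even (card (A - B \<union> (B - A))) \<longleftrightarrow> (even (card A) \<longleftrightarrow> even (card B))"
  using card_symdiff[OF assms] by (metis even_add even_mult_iff even_numeral)

lemma neg_one_power_card_symdiff:
  assumes "finite A" "finite B"
  shows "(-1::complex) ^ card (A - B \<union> (B - A)) = (-1) ^ card A * (-1) ^ card B"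
  using even_card_symdiff[OF assms]
  by (cases "even (card A)"; cases "even (card B)") (auto simp: neg_one_even_power neg_one_odd_power)

lemma pmul_comm: "pmul P Q = pmul Q P"
  by (auto simp: pmul_def)

lemma pmul_assoc: "pmul (pmul P Q) R = pmul P (pmul Q R)"
  by (auto simp: pmul_def)

lemma pmul_pone [simp]: "pmul P pone = P" "pmul pone P = P"
  by (auto simp: pmul_def)

lemma pmul_self [simp]: "pmul P P = pone"
  by (auto simp: pmul_def)

lemma pmul_eq_pone_iff: "pmul P Q = pone \<longleftrightarrow> P = Q"
  by (auto simp: pmul_def prod_eq_iff)

lemma pmul_pmul_swap: "pmul (pmul a b) (pmul c d) = pmul (pmul a c) (pmul b d)"
  by (auto simp: pmul_def)

lemma is_pauli_pmul [simp]: "is_pauli n P \<Longrightarrow> is_pauli n Q \<Longrightarrow> is_pauli n (pmul P Q)"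
  by (auto simp: is_pauli_def pmul_def)

lemma is_pauli_pone [simp]: "is_pauli n pone"
  by (simp add: is_pauli_def)

lemma is_pauli_finite: "is_pauli n P \<Longrightarrow> finite (fst P) \<and> finite (snd P)"
  unfolding is_pauli_def using finite_subset by blast

lemma psupp_pmul: "psupp (pmul P Q) \<subseteq> psupp P \<union> psupp Q"
  by (auto simp: psupp_def pmul_def)

lemma psupp_pone [simp]: "psupp pone = {}"
  by (simp add: psupp_def)

lemma psupp_eq_empty_iff: "psupp P = {} \<longleftrightarrow> P = pone"
  by (auto simp: psupp_def prod_eq_iff)

lemma psupp_foldr_pmul: "psupp (foldr pmul Ps pone) \<subseteq> (\<Union>P\<in>set Ps. psupp P)"
proof (induction Ps)
  case (Cons P Ps)
  then show ?case using psupp_pmul[of P "foldr pmul Ps pone"] by auto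
qed simp

lemma pauli_mat_carrier [simp]: "pauli_mat n P \<in> carrier_mat (2 ^ n) (2 ^ n)"
  by (simp add: pauli_mat_def)

lemma pauli_mat_dim [simp]: "dim_row (pauli_mat n P) = 2 ^ n" "dim_col (pauli_mat n P) = 2 ^ n"
  by (simp_all add: pauli_mat_def)

lemma pauli_mat_index:
  "a < 2 ^ n \<Longrightarrow> b < 2 ^ n \<Longrightarrow> pauli_mat n P $$ (a, b) =
     (if \<forall>q<n. bit a q \<longleftrightarrow> (bit b q \<noteq> (q \<in> fst P))
      then (-1) ^ card {q \<in> snd P. q < n \<and> bit b q} else 0)"
  by (simp add: pauli_mat_def)

lemma pauli_mat_flip_index:
  assumes "b < 2 ^ n"
  shows "pauli_mat n P $$ (nat_of_bits n (\<lambda>q. bit b q \<noteq> (q \<in> fst P)), b) =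
    (-1) ^ card {q \<in> snd P. q < n \<and> bit b q}"
  using assms nat_of_bits_less[of n] by (simp add: pauli_mat_index bit_nat_of_bits)

lemma pauli_mat_index_eq_0:
  assumes "a < 2 ^ n" "b < 2 ^ n" "a \<noteq> nat_of_bits n (\<lambda>q. bit b q \<noteq> (q \<in> fst P))"
  shows "pauli_mat n P $$ (a, b) = 0"
proof -
  have "\<not> (\<forall>q<n. bit a q \<longleftrightarrow> (bit b q \<noteq> (q \<in> fst P)))"
  proof
    assume "\<forall>q<n. bit a q \<longleftrightarrow> (bit b q \<noteq> (q \<in> fst P))"
    then have "a = nat_of_bits n (\<lambda>q. bit b q \<noteq> (q \<in> fst P))"
      by (intro nat_eq_if_low_bits_eq[OF assms(1) nat_of_bits_less]) (simp add: bit_nat_of_bits)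
    then show False using assms(3) by contradiction
  qed
  then show ?thesis using assms by (simp add: pauli_mat_index)
qed

lemma sum_eq_single_nonzero:
  assumes "finite A" "x \<in> A" "\<And>y. y \<in> A \<Longrightarrow> y \<noteq> x \<Longrightarrow> f y = (0::'a::comm_monoid_add)"
  shows "sum f A = f x"
proof -
  have "sum f A = f x + sum f (A - {x})" using assms(1,2) by (simp add: sum.remove)
  also have "sum f (A - {x}) = 0" using assms(3) by (intro sum.neutral) auto
  finally show ?thesis by simp
qed

lemma pauli_mat_mult:
  assumes P: "is_pauli n P" and Q: "is_pauli n Q"
  shows "pauli_mat n P * pauli_mat n Q = ((-1) ^ card (snd P \<inter> fst Q)) \<cdot>\<^sub>m pauli_mat n (pmul P Q)"
proof (rule eq_matI)
  fix a b assume "a < dim_row (((-1) ^ card (snd P \<inter> fst Q)) \<cdot>\<^sub>m pauli_mat n (pmul P Q))"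
    and "b < dim_col (((-1) ^ card (snd P \<inter> fst Q)) \<cdot>\<^sub>m pauli_mat n (pmul P Q))"
  then have a: "a < 2 ^ n" and b: "b < 2 ^ n" by simp_all
  define c where "c = nat_of_bits n (\<lambda>q. bit b q \<noteq> (q \<in> fst Q))"
  have c: "c < 2 ^ n" unfolding c_def by (rule nat_of_bits_less)
  have bit_c: "\<And>q. q < n \<Longrightarrow> bit c q = (bit b q \<noteq> (q \<in> fst Q))"
    unfolding c_def bit_nat_of_bits by simp
  have fin: "finite (fst P)" "finite (snd P)" "finite (fst Q)" "finite (snd Q)"
    using is_pauli_finite[OF P] is_pauli_finite[OF Q] by auto
  have "(pauli_mat n P * pauli_mat n Q) $$ (a, b) =
      (\<Sum>c'\<in>{0..<2 ^ n}. pauli_mat n P $$ (a, c') * pauli_mat n Q $$ (c', b))"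
    using a b by (simp add: scalar_prod_def)
  also have "\<dots> = pauli_mat n P $$ (a, c) * pauli_mat n Q $$ (c, b)"
    using c b pauli_mat_index_eq_0[OF _ b, of _ Q] unfolding c_def
    by (intro sum_eq_single_nonzero) auto
  also have "\<dots> = (-1) ^ card (snd P \<inter> fst Q) * pauli_mat n (pmul P Q) $$ (a, b)"
  proof -
    have flips: "(\<forall>q<n. bit a q \<longleftrightarrow> (bit c q \<noteq> (q \<in> fst P))) \<longleftrightarrow>
                 (\<forall>q<n. bit a q \<longleftrightarrow> (bit b q \<noteq> (q \<in> fst (pmul P Q))))"
      using bit_c by (auto simp: pmul_def)
    have "{q \<in> snd P. q < n \<and> bit c q} =
        {q \<in> snd P. q < n \<and> bit b q} - (snd P \<inter> fst Q) \<union> ((snd P \<inter> fst Q) - {q \<in> snd P. q < n \<and> bit b q})"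
      using bit_c P Q unfolding is_pauli_def by auto
    then have sign_P: "(-1::complex) ^ card {q \<in> snd P. q < n \<and> bit c q} =
        (-1) ^ card {q \<in> snd P. q < n \<and> bit b q} * (-1) ^ card (snd P \<inter> fst Q)"
      using fin by (simp add: neg_one_power_card_symdiff)
    have "{q \<in> snd (pmul P Q). q < n \<and> bit b q} =
        {q \<in> snd P. q < n \<and> bit b q} - {q \<in> snd Q. q < n \<and> bit b q} \<union>
        ({q \<in> snd Q. q < n \<and> bit b q} - {q \<in> snd P. q < n \<and> bit b q})"
      by (auto simp: pmul_def)
    then have sign_PQ: "(-1::complex) ^ card {q \<in> snd (pmul P Q). q < n \<and> bit b q} =
        (-1) ^ card {q \<in> snd P. q < n \<and> bit b q} * (-1) ^ card {q \<in> snd Q. q < n \<and> bit b q}"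
      using fin by (simp add: neg_one_power_card_symdiff)
    have "pauli_mat n Q $$ (c, b) = (-1) ^ card {q \<in> snd Q. q < n \<and> bit b q}"
      unfolding c_def by (rule pauli_mat_flip_index[OF b])
    then show ?thesis
      unfolding pauli_mat_index[OF a c] pauli_mat_index[OF a b] flips sign_P sign_PQ by simp
  qed
  finally show "(pauli_mat n P * pauli_mat n Q) $$ (a, b) =
      (((-1) ^ card (snd P \<inter> fst Q)) \<cdot>\<^sub>m pauli_mat n (pmul P Q)) $$ (a, b)"
    using a b by simp
qed simp_all

lemma pauli_mat_pone: "pauli_mat n pone = 1\<^sub>m (2 ^ n)"
proof (rule eq_matI)
  fix a b assume "a < dim_row (1\<^sub>m (2 ^ n) :: complex mat)" "b < dim_col (1\<^sub>m (2 ^ n) :: complex mat)"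
  then have a: "a < 2 ^ n" and b: "b < 2 ^ n" by simp_all
  have "(\<forall>q<n. bit a q = bit b q) \<longleftrightarrow> a = b"
    using nat_eq_if_low_bits_eq[OF a b] by auto
  then show "pauli_mat n pone $$ (a, b) = (1\<^sub>m (2 ^ n) :: complex mat) $$ (a, b)"
    using a b by (simp add: pauli_mat_index)
qed simp_all

text \<open>The X-part is read off from column 0, the Z-part from the diagonal-flipped entries of the
  columns of weight one.\<close>

lemma pauli_mat_smult_inj:
  assumes P: "is_pauli n P" and Q: "is_pauli n Q"
    and eq: "a \<cdot>\<^sub>m pauli_mat n P = b \<cdot>\<^sub>m pauli_mat n Q" and a: "a \<noteq> 0"
  shows "P = Q \<and> a = b"
proof -
  have entry: "a * pauli_mat n P $$ (x, y) = b * pauli_mat n Q $$ (x, y)"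
    if "x < 2 ^ n" "y < 2 ^ n" for x y
    using arg_cong[OF eq, of "\<lambda>M. M $$ (x, y)"] that by (simp add: pauli_mat_def)
  define x where "x = nat_of_bits n (\<lambda>q. bit (0::nat) q \<noteq> (q \<in> fst P))"
  have x: "x < 2 ^ n" unfolding x_def by (rule nat_of_bits_less)
  have "pauli_mat n P $$ (x, 0) = 1"
    unfolding x_def by (subst pauli_mat_flip_index) simp_all
  then have a_eq: "a = b * pauli_mat n Q $$ (x, 0)" using entry[OF x, of 0] by simp
  then have "pauli_mat n Q $$ (x, 0) \<noteq> 0" using a by auto
  then have "\<forall>q<n. bit x q \<longleftrightarrow> q \<in> fst Q" using x by (simp add: pauli_mat_index split: if_splits)
  then have "\<forall>q<n. q \<in> fst P \<longleftrightarrow> q \<in> fst Q" unfolding x_def bit_nat_of_bits by simp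
  then have X: "fst P = fst Q" using P Q unfolding is_pauli_def by blast
  have "pauli_mat n Q $$ (x, 0) = 1"
    unfolding x_def X by (subst pauli_mat_flip_index) simp_all
  with a_eq have ab: "a = b" by simp
  have "q \<in> snd P \<longleftrightarrow> q \<in> snd Q" if q: "q < n" for q
  proof -
    define e where "e = nat_of_bits n (\<lambda>r. r = q)"
    have e: "e < 2 ^ n" unfolding e_def by (rule nat_of_bits_less)
    have bit_e: "\<And>r. bit e r \<longleftrightarrow> r = q" unfolding e_def bit_nat_of_bits using q by auto
    define r where "r = nat_of_bits n (\<lambda>r. bit e r \<noteq> (r \<in> fst P))"
    have r: "r < 2 ^ n" unfolding r_def by (rule nat_of_bits_less)
    have "{r \<in> snd P. r < n \<and> bit e r} = snd P \<inter> {q}" "{r \<in> snd Q. r < n \<and> bit e r} = snd Q \<inter> {q}"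
      using bit_e q by auto
    then have "pauli_mat n P $$ (r, e) = (-1) ^ card (snd P \<inter> {q})"
      "pauli_mat n Q $$ (r, e) = (-1) ^ card (snd Q \<inter> {q})"
      unfolding r_def using pauli_mat_flip_index[OF e, of P] pauli_mat_flip_index[OF e, of Q] X
      by simp_all
    then have "(-1::complex) ^ card (snd P \<inter> {q}) = (-1) ^ card (snd Q \<inter> {q})"
      using entry[OF r e] ab a by simp
    then show ?thesis
      by (cases "q \<in> snd P"; cases "q \<in> snd Q") (auto simp: Int_insert_right)
  qed
  then have "snd P = snd Q" using P Q unfolding is_pauli_def by blast
  with X ab show ?thesis by (simp add: prod_eq_iff)
qed

lemma smult_pauli_mat_eq_0D: "a \<cdot>\<^sub>m pauli_mat n P = 0\<^sub>m (2 ^ n) (2 ^ n) \<Longrightarrow> a = 0"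
proof -
  let ?x = "nat_of_bits n (\<lambda>q. bit (0::nat) q \<noteq> (q \<in> fst P))"
  assume h: "a \<cdot>\<^sub>m pauli_mat n P = 0\<^sub>m (2 ^ n) (2 ^ n)"
  have "(0::nat) < 2 ^ n" by simp
  then have "a * pauli_mat n P $$ (?x, 0) = 0"
    using arg_cong[OF h, of "\<lambda>M. M $$ (?x, 0)"] nat_of_bits_less[of n] by simp
  then show "a = 0" by (subst (asm) pauli_mat_flip_index) simp_all
qed

lemma smult_pauli_mat_cancel:
  assumes "a \<cdot>\<^sub>m pauli_mat n R = b \<cdot>\<^sub>m pauli_mat n R" "is_pauli n R"
  shows "a = b"
proof (cases "a = 0")
  case True
  have "0 \<cdot>\<^sub>m pauli_mat n R = 0\<^sub>m (2 ^ n) (2 ^ n)" by (intro eq_matI) auto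
  then have "b \<cdot>\<^sub>m pauli_mat n R = 0\<^sub>m (2 ^ n) (2 ^ n)" using assms(1) True by simp
  then show ?thesis using True smult_pauli_mat_eq_0D by metis
next
  case False
  then show ?thesis using pauli_mat_smult_inj[OF assms(2) assms(2) assms(1)] by simp
qed

definition pcommute :: "pauli \<Rightarrow> pauli \<Rightarrow> bool" where
  "pcommute P Q \<longleftrightarrow> even (card (snd P \<inter> fst Q) + card (snd Q \<inter> fst P))"

lemma pcommute_pone [simp]: "pcommute P pone" "pcommute pone P"
  by (simp_all add: pcommute_def)

lemma pcommute_if_disjoint: "psupp P \<inter> psupp Q = {} \<Longrightarrow> pcommute P Q"
proof -
  assume "psupp P \<inter> psupp Q = {}"
  then have "snd P \<inter> fst Q = {}" "snd Q \<inter> fst P = {}" by (auto simp: psupp_def)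
  then show "pcommute P Q" by (simp add: pcommute_def)
qed

lemma pcommute_pmul:
  assumes "is_pauli n S" "is_pauli n A" "is_pauli n B"
  shows "pcommute S (pmul A B) \<longleftrightarrow> (pcommute S A \<longleftrightarrow> pcommute S B)"
proof -
  have fin: "finite (fst S)" "finite (snd S)" "finite (fst A)" "finite (snd A)" "finite (fst B)" "finite (snd B)"
    using is_pauli_finite assms by blast+
  have "snd S \<inter> fst (pmul A B) = (snd S \<inter> fst A) - (snd S \<inter> fst B) \<union> ((snd S \<inter> fst B) - (snd S \<inter> fst A))"
    "snd (pmul A B) \<inter> fst S = (snd A \<inter> fst S) - (snd B \<inter> fst S) \<union> ((snd B \<inter> fst S) - (snd A \<inter> fst S))"
    by (auto simp: pmul_def)
  then show ?thesis
    unfolding pcommute_def using fin by (simp add: even_card_symdiff) blast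
qed

lemma pcommute_single:
  "pcommute P ({q}, {}) \<longleftrightarrow> q \<notin> snd P" "pcommute P ({}, {q}) \<longleftrightarrow> q \<notin> fst P"
  by (auto simp: pcommute_def Int_insert_right)

lemma smult_smult_mat [simp]: "a \<cdot>\<^sub>m (b \<cdot>\<^sub>m A) = (a * b) \<cdot>\<^sub>m (A :: 'a :: comm_semiring_1 mat)"
  by (rule eq_matI) (auto simp: mult.assoc)

lemma zero_smult_mat [simp]: "A \<in> carrier_mat nr nc \<Longrightarrow> (0 :: 'a :: comm_semiring_1) \<cdot>\<^sub>m A = 0\<^sub>m nr nc"
  by (rule eq_matI) auto

lemma one_smult_mat [simp]: "(1 :: 'a :: comm_semiring_1) \<cdot>\<^sub>m A = A"
  by (rule eq_matI) auto

lemma smult_mult_smult: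
  assumes "A \<in> carrier_mat k l" "B \<in> carrier_mat l m"
  shows "(a \<cdot>\<^sub>m A) * (b \<cdot>\<^sub>m B) = (a * b) \<cdot>\<^sub>m (A * (B :: 'a :: comm_semiring_1 mat))"
  using assms by (simp add: mult_smult_assoc_mat[of _ k l] mult_smult_distrib[of _ k l] mult.commute)

lemma pauli_mat_commute_sign:
  assumes P: "is_pauli n P" and Q: "is_pauli n Q"
  shows "pauli_mat n P * pauli_mat n Q =
    (if pcommute P Q then 1 else -1) \<cdot>\<^sub>m (pauli_mat n Q * pauli_mat n P)"
proof -
  have "(-1::complex) ^ card (snd P \<inter> fst Q) =
      (if pcommute P Q then 1 else -1) * (-1) ^ card (snd Q \<inter> fst P)"
    unfolding pcommute_def
    by (cases "even (card (snd P \<inter> fst Q))"; cases "even (card (snd Q \<inter> fst P))")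
       (auto simp: neg_one_even_power neg_one_odd_power)
  then show ?thesis
    by (simp add: pauli_mat_mult[OF P Q] pauli_mat_mult[OF Q P] pmul_comm)
qed

lemma pauli_mat_commute_iff:
  assumes P: "is_pauli n P" and Q: "is_pauli n Q"
  shows "pauli_mat n P * pauli_mat n Q = pauli_mat n Q * pauli_mat n P \<longleftrightarrow> pcommute P Q"
proof
  assume commute: "pauli_mat n P * pauli_mat n Q = pauli_mat n Q * pauli_mat n P"
  define t where "t = ((-1::complex) ^ card (snd Q \<inter> fst P))"
  have QP: "pauli_mat n Q * pauli_mat n P = t \<cdot>\<^sub>m pauli_mat n (pmul Q P)"
    unfolding t_def by (rule pauli_mat_mult[OF Q P])
  show "pcommute P Q"
  proof (rule ccontr)
    assume "\<not> pcommute P Q"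
    then have "t \<cdot>\<^sub>m pauli_mat n (pmul Q P) = (- t) \<cdot>\<^sub>m pauli_mat n (pmul Q P)"
      using pauli_mat_commute_sign[OF P Q] commute QP by simp
    then have "t = - t" by (rule smult_pauli_mat_cancel) (use Q P in simp)
    moreover have "t \<noteq> 0" unfolding t_def by simp
    ultimately show False by simp
  qed
qed (use pauli_mat_commute_sign[OF P Q] in simp)

lemma herm_pauli_mat_carrier [simp]: "herm_pauli_mat n S \<in> carrier_mat (2 ^ n) (2 ^ n)"
  by (simp add: herm_pauli_mat_def)

lemma herm_pauli_mat_square:
  assumes P: "is_pauli n (snd S)"
  shows "herm_pauli_mat n S * herm_pauli_mat n S = 1\<^sub>m (2 ^ n)"
proof -
  define c where "c = ((if fst S then -1 else 1) * \<i> ^ card (fst (snd S) \<inter> snd (snd S)))"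
  define k where "k = card (fst (snd S) \<inter> snd (snd S))"
  have "c * c = (\<i> * \<i>) ^ k" unfolding c_def k_def by (simp add: power_mult_distrib[symmetric])
  then have cc: "c * c * (-1) ^ k = 1"
    by (simp flip: power_add add: power_mult[symmetric] mult_2[symmetric])
  have "herm_pauli_mat n S * herm_pauli_mat n S = (c * c) \<cdot>\<^sub>m (pauli_mat n (snd S) * pauli_mat n (snd S))"
    unfolding herm_pauli_mat_def c_def by (rule smult_mult_smult) auto
  also have "\<dots> = (c * c * (-1) ^ k) \<cdot>\<^sub>m 1\<^sub>m (2 ^ n)"
    by (simp add: pauli_mat_mult[OF P P] pauli_mat_pone k_def Int_commute)
  finally show ?thesis by (simp add: cc)
qed

section \<open>Unitaries and conjugation modulo phases\<close>

lemma adj_carrier [simp]: "A \<in> carrier_mat a b \<Longrightarrow> adj A \<in> carrier_mat b a"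
  unfolding adj_def by (auto intro: carrier_matI)

lemma adj_mult:
  assumes "A \<in> carrier_mat a b" "B \<in> carrier_mat b c"
  shows "adj (A * B) = adj B * adj A"
proof (rule eq_matI)
  fix i j assume "i < dim_row (adj B * adj A)" "j < dim_col (adj B * adj A)"
  with assms have i: "i < c" and j: "j < a" by (auto simp: adj_def)
  have "adj (A * B) $$ (i, j) = cnj (\<Sum>k<b. A $$ (j, k) * B $$ (k, i))"
    using assms i j by (simp add: adj_def scalar_prod_def atLeast0LessThan)
  also have "\<dots> = (\<Sum>k<b. cnj (B $$ (k, i)) * cnj (A $$ (j, k)))"
    by (simp add: cnj_sum mult.commute)
  also have "\<dots> = (adj B * adj A) $$ (i, j)"
    using assms i j by (simp add: adj_def scalar_prod_def atLeast0LessThan)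
  finally show "adj (A * B) $$ (i, j) = (adj B * adj A) $$ (i, j)" .
qed (use assms in \<open>auto simp: adj_def\<close>)

lemma adj_one [simp]: "adj (1\<^sub>m N) = (1\<^sub>m N :: complex mat)"
  by (rule eq_matI) (auto simp: adj_def)

lemma assoc_mult_square:
  "A \<in> carrier_mat N N \<Longrightarrow> B \<in> carrier_mat N N \<Longrightarrow> C \<in> carrier_mat N N \<Longrightarrow> A * B * C = A * (B * C)"
  by (rule assoc_mult_mat)

lemma mult_carrier_square [simp]:
  "A \<in> carrier_mat N N \<Longrightarrow> B \<in> carrier_mat N N \<Longrightarrow> A * B \<in> carrier_mat N N"
  by (rule mult_carrier_mat)

lemma unitary_carrier: "unitary_mat N U \<Longrightarrow> U \<in> carrier_mat N N"
  and unitary_adj_carrier: "unitary_mat N U \<Longrightarrow> adj U \<in> carrier_mat N N"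
  and unitary_mult_adj: "unitary_mat N U \<Longrightarrow> U * adj U = 1\<^sub>m N"
  and unitary_adj_mult: "unitary_mat N U \<Longrightarrow> adj U * U = 1\<^sub>m N"
  by (simp_all add: unitary_mat_def)

lemma unitary_one: "unitary_mat N (1\<^sub>m N)"
  by (simp add: unitary_mat_def)

lemma unitary_mult:
  assumes U: "unitary_mat N U" and V: "unitary_mat N V"
  shows "unitary_mat N (U * V)"
proof -
  note c = unitary_carrier[OF U] unitary_adj_carrier[OF U] unitary_carrier[OF V] unitary_adj_carrier[OF V]
  have adj_UV: "adj (U * V) = adj V * adj U" using c by (intro adj_mult) auto
  have "U * V * adj (U * V) = U * (V * adj V) * adj U"
    unfolding adj_UV using c by (simp add: assoc_mult_square[of _ N])
  also have "\<dots> = 1\<^sub>m N" using U V c by (simp add: unitary_mat_def)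
  moreover have "adj (U * V) * (U * V) = adj V * ((adj U * U) * V)"
    unfolding adj_UV using c by (simp add: assoc_mult_square[of _ N])
  moreover have "\<dots> = 1\<^sub>m N" using U V c by (simp add: unitary_mat_def)
  ultimately show ?thesis using c by (simp add: unitary_mat_def)
qed

lemma unitary_conj_conj:
  assumes U: "unitary_mat N U" and M: "M \<in> carrier_mat N N"
  shows "adj U * (U * M * adj U) * U = M" and "U * (adj U * M * U) * adj U = M"
proof -
  note c = unitary_carrier[OF U] unitary_adj_carrier[OF U]
  have "adj U * (U * M * adj U) * U = (adj U * U) * M * (adj U * U)"
    using c M by (simp add: assoc_mult_square[of _ N])
  then show "adj U * (U * M * adj U) * U = M"
    using M by (simp add: unitary_adj_mult[OF U])
  have "U * (adj U * M * U) * adj U = (U * adj U) * M * (U * adj U)"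
    using c M by (simp add: assoc_mult_square[of _ N])
  then show "U * (adj U * M * U) * adj U = M"
    using M by (simp add: unitary_mult_adj[OF U])
qed

lemma unitary_conj_mult:
  assumes U: "unitary_mat N U" and A: "A \<in> carrier_mat N N" and B: "B \<in> carrier_mat N N"
  shows "adj U * (A * B) * U = (adj U * A * U) * (adj U * B * U)"
proof -
  note c = unitary_carrier[OF U] unitary_adj_carrier[OF U]
  have "(adj U * A * U) * (adj U * B * U) = adj U * A * (U * adj U) * B * U"
    using c A B by (simp add: assoc_mult_square[of _ N])
  then show ?thesis using A B c by (simp add: unitary_mult_adj[OF U] assoc_mult_square[of _ N])
qed

lemma mult_smult_mult:
  fixes A M B :: "complex mat"
  assumes A: "A \<in> carrier_mat N N" and M: "M \<in> carrier_mat N N" and B: "B \<in> carrier_mat N N"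
  shows "A * (a \<cdot>\<^sub>m M) * B = a \<cdot>\<^sub>m (A * M * B)"
  using mult_smult_distrib[OF A M] mult_smult_assoc_mat[OF mult_carrier_mat[OF A M] B] by simp

lemma unitary_conj_inj:
  assumes U: "unitary_mat N U" and A: "A \<in> carrier_mat N N" and B: "B \<in> carrier_mat N N"
    and eq: "adj U * A * U = adj U * B * U"
  shows "A = B"
proof -
  have "A = U * (adj U * A * U) * adj U" using unitary_conj_conj(2)[OF U A] by simp
  also have "\<dots> = B" unfolding eq using unitary_conj_conj(2)[OF U B] .
  finally show ?thesis .
qed

lemma unitary_adj_commute:
  assumes U: "unitary_mat N U" and A: "A \<in> carrier_mat N N" and commute: "U * A = A * U"
  shows "adj U * A = A * adj U"
proof -
  note c = unitary_carrier[OF U] unitary_adj_carrier[OF U]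
  have "adj U * A = adj U * A * (U * adj U)" using c A by (simp add: unitary_mult_adj[OF U])
  also have "\<dots> = adj U * (U * A) * adj U" using c A commute by (simp add: assoc_mult_square[of _ N])
  also have "\<dots> = (adj U * U) * A * adj U" using c A by (simp add: assoc_mult_square[of _ N])
  also have "\<dots> = A * adj U" using c A by (simp add: unitary_adj_mult[OF U])
  finally show ?thesis .
qed

lemma commute_mult:
  assumes "M \<in> carrier_mat N N" "A \<in> carrier_mat N N" "B \<in> carrier_mat N N"
    and "M * A = A * M" "M * B = B * M"
  shows "M * (A * B) = (A * B) * M"
proof -
  have "M * (A * B) = (M * A) * B" using assoc_mult_square[OF assms(1-3)] by (rule sym)
  also have "\<dots> = A * (M * B)" unfolding assms(4) by (rule assoc_mult_square[OF assms(2,1,3)])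
  also have "\<dots> = (A * B) * M" unfolding assms(5) by (rule assoc_mult_square[OF assms(2,3,1), symmetric])
  finally show ?thesis .
qed

lemma clifford_unitary: "clifford n U \<Longrightarrow> unitary_mat (2 ^ n) U"
  by (simp add: clifford_def)

lemma clifford_carrier [simp]: "clifford n U \<Longrightarrow> U \<in> carrier_mat (2 ^ n) (2 ^ n)"
  and clifford_adj_carrier [simp]: "clifford n U \<Longrightarrow> adj U \<in> carrier_mat (2 ^ n) (2 ^ n)"
  by (simp_all add: clifford_def unitary_mat_def)

lemma clifford_one: "clifford n (1\<^sub>m (2 ^ n))"
proof -
  have "\<exists>a Q. is_pauli n Q \<and> 1\<^sub>m (2 ^ n) * pauli_mat n P * adj (1\<^sub>m (2 ^ n)) = a \<cdot>\<^sub>m pauli_mat n Q"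
    if "is_pauli n P" for P
    using that by (intro exI[of _ 1] exI[of _ P]) simp
  then show ?thesis by (simp add: clifford_def unitary_one)
qed

lemma clifford_mult:
  assumes U: "clifford n U" and V: "clifford n V"
  shows "clifford n (U * V)"
proof -
  have "\<exists>a Q. is_pauli n Q \<and> U * V * pauli_mat n P * adj (U * V) = a \<cdot>\<^sub>m pauli_mat n Q"
    if P: "is_pauli n P" for P
  proof -
    obtain a Q where Q: "is_pauli n Q" and a: "V * pauli_mat n P * adj V = a \<cdot>\<^sub>m pauli_mat n Q"
      using V P unfolding clifford_def by blast
    obtain b R where R: "is_pauli n R" and b: "U * pauli_mat n Q * adj U = b \<cdot>\<^sub>m pauli_mat n R"
      using U Q unfolding clifford_def by blast
    have "U * V * pauli_mat n P * adj (U * V) = U * (V * pauli_mat n P * adj V) * adj U"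
      using U V by (simp add: adj_mult[of U "2 ^ n" "2 ^ n" V "2 ^ n"] assoc_mult_square[of _ "2 ^ n"])
    also have "\<dots> = (a * b) \<cdot>\<^sub>m pauli_mat n R"
      unfolding a using U by (simp add: mult_smult_mult[of _ "2 ^ n"] b)
    finally show ?thesis using R by blast
  qed
  then show ?thesis using unitary_mult[OF clifford_unitary[OF U] clifford_unitary[OF V]]
    by (simp add: clifford_def)
qed

lemma unitary_conj_pauli_mat_nonzero:
  assumes U: "unitary_mat (2 ^ n) U" and eq: "U * pauli_mat n R * adj U = a \<cdot>\<^sub>m pauli_mat n Q"
  shows "a \<noteq> 0"
proof
  assume a: "a = 0"
  note c = unitary_carrier[OF U] unitary_adj_carrier[OF U]
  have "pauli_mat n R = adj U * (U * pauli_mat n R * adj U) * U"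
    using unitary_conj_conj(1)[OF U, of "pauli_mat n R"] by simp
  also have "\<dots> = a \<cdot>\<^sub>m (adj U * pauli_mat n Q * U)"
    unfolding eq using c by (simp add: mult_smult_mult[of _ "2 ^ n"])
  also have "\<dots> = 0\<^sub>m (2 ^ n) (2 ^ n)"
    using a c by simp
  finally have "1 \<cdot>\<^sub>m pauli_mat n R = 0\<^sub>m (2 ^ n) (2 ^ n)" by simp
  then show False using smult_pauli_mat_eq_0D by fastforce
qed

definition paulis :: "nat \<Rightarrow> pauli set" where
  "paulis n = Pow {..<n} \<times> Pow {..<n}"

lemma mem_paulis_iff: "P \<in> paulis n \<longleftrightarrow> is_pauli n P"
  by (cases P) (auto simp: paulis_def is_pauli_def)

text \<open>The definition of clifford only speaks about U P U*.  The inverse direction holds because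
  P \<mapsto> U P U* is injective modulo phases on the finite set of Paulis, hence surjective.\<close>

lemma clifford_adj_conj_pauli:
  assumes U: "clifford n U" and P: "is_pauli n P"
  shows "\<exists>a Q. is_pauli n Q \<and> a \<noteq> 0 \<and> adj U * pauli_mat n P * U = a \<cdot>\<^sub>m pauli_mat n Q"
proof -
  have Uu: "unitary_mat (2 ^ n) U" using U by (rule clifford_unitary)
  define f where "f R = (SOME Q. is_pauli n Q \<and> (\<exists>a. U * pauli_mat n R * adj U = a \<cdot>\<^sub>m pauli_mat n Q))" for R
  have f: "is_pauli n (f R) \<and> (\<exists>a. U * pauli_mat n R * adj U = a \<cdot>\<^sub>m pauli_mat n (f R))"
    if "is_pauli n R" for R
  proof -
    have "\<exists>Q. is_pauli n Q \<and> (\<exists>a. U * pauli_mat n R * adj U = a \<cdot>\<^sub>m pauli_mat n Q)"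
      using U that unfolding clifford_def by blast
    then show ?thesis unfolding f_def by (rule someI_ex)
  qed
  have undo_conj: "pauli_mat n R = a \<cdot>\<^sub>m (adj U * pauli_mat n Q * U)"
    if "U * pauli_mat n R * adj U = a \<cdot>\<^sub>m pauli_mat n Q" for R Q a
    using unitary_conj_conj(1)[OF Uu, of "pauli_mat n R"] U
    unfolding that by (simp add: mult_smult_mult[of _ "2 ^ n"])
  have "inj_on f (paulis n)"
  proof (rule inj_onI)
    fix R1 R2 assume "R1 \<in> paulis n" "R2 \<in> paulis n" and e: "f R1 = f R2"
    then have R1: "is_pauli n R1" and R2: "is_pauli n R2" by (auto simp: mem_paulis_iff)
    obtain a1 where a1: "U * pauli_mat n R1 * adj U = a1 \<cdot>\<^sub>m pauli_mat n (f R1)" using f[OF R1] by blast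
    obtain a2 where a2: "U * pauli_mat n R2 * adj U = a2 \<cdot>\<^sub>m pauli_mat n (f R1)" using f[OF R2] e by auto
    have "a2 \<noteq> 0" by (rule unitary_conj_pauli_mat_nonzero[OF Uu a2])
    moreover have "a2 \<cdot>\<^sub>m pauli_mat n R1 = a1 \<cdot>\<^sub>m pauli_mat n R2"
      unfolding undo_conj[OF a1] undo_conj[OF a2] by (simp add: mult.commute)
    ultimately show "R1 = R2" using pauli_mat_smult_inj[OF R1 R2] by blast
  qed
  moreover have "f ` paulis n \<subseteq> paulis n" using f by (auto simp: mem_paulis_iff)
  ultimately have "f ` paulis n = paulis n" by (intro endo_inj_surj) (simp_all add: paulis_def)
  then obtain R where R: "is_pauli n R" "f R = P" using P by (metis imageE mem_paulis_iff)
  obtain a where a: "U * pauli_mat n R * adj U = a \<cdot>\<^sub>m pauli_mat n P" using f[OF R(1)] R by auto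
  have "a \<noteq> 0" by (rule unitary_conj_pauli_mat_nonzero[OF Uu a])
  moreover have "adj U * pauli_mat n P * U = (1 / a) \<cdot>\<^sub>m pauli_mat n R"
    using undo_conj[OF a] \<open>a \<noteq> 0\<close> by simp
  ultimately show ?thesis using R(1) by (intro exI[of _ "1/a"] exI[of _ R]) simp
qed

lemma conj_mod_phase_eqI:
  assumes U: "clifford n U" and Q: "is_pauli n Q" and eq: "adj U * pauli_mat n P * U = a \<cdot>\<^sub>m pauli_mat n Q"
  shows "conj_mod_phase n U P = Q"
proof -
  have Uu: "unitary_mat (2 ^ n) U" using U by (rule clifford_unitary)
  have "a \<noteq> 0"
  proof
    assume "a = 0"
    have "pauli_mat n P = U * (adj U * pauli_mat n P * U) * adj U"
      using unitary_conj_conj(2)[OF Uu, of "pauli_mat n P"] by simp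
    also have "\<dots> = a \<cdot>\<^sub>m (U * pauli_mat n Q * adj U)"
      unfolding eq using U by (simp add: mult_smult_mult[of _ "2 ^ n"])
    also have "\<dots> = 0\<^sub>m (2 ^ n) (2 ^ n)"
      using \<open>a = 0\<close> U by simp
    finally have "1 \<cdot>\<^sub>m pauli_mat n P = 0\<^sub>m (2 ^ n) (2 ^ n)" by simp
    then show False using smult_pauli_mat_eq_0D by fastforce
  qed
  show ?thesis unfolding conj_mod_phase_def
  proof (rule the_equality)
    fix Q' assume "is_pauli n Q' \<and> (\<exists>a. adj U * pauli_mat n P * U = a \<cdot>\<^sub>m pauli_mat n Q')"
    then obtain a' where Q': "is_pauli n Q'" and "a \<cdot>\<^sub>m pauli_mat n Q = a' \<cdot>\<^sub>m pauli_mat n Q'"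
      using eq by auto
    then show "Q' = Q" using pauli_mat_smult_inj[OF Q Q'] \<open>a \<noteq> 0\<close> by metis
  qed (use Q eq in blast)
qed

lemma conj_mod_phase:
  assumes U: "clifford n U" and P: "is_pauli n P"
  shows "is_pauli n (conj_mod_phase n U P)"
    and "\<exists>a. a \<noteq> 0 \<and> adj U * pauli_mat n P * U = a \<cdot>\<^sub>m pauli_mat n (conj_mod_phase n U P)"
proof -
  obtain a Q where "is_pauli n Q" "a \<noteq> 0" "adj U * pauli_mat n P * U = a \<cdot>\<^sub>m pauli_mat n Q"
    using clifford_adj_conj_pauli[OF U P] by blast
  moreover from this have "conj_mod_phase n U P = Q" by (intro conj_mod_phase_eqI[OF U])
  ultimately show "is_pauli n (conj_mod_phase n U P)"
    and "\<exists>a. a \<noteq> 0 \<and> adj U * pauli_mat n P * U = a \<cdot>\<^sub>m pauli_mat n (conj_mod_phase n U P)"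
    by blast+
qed

lemma is_pauli_conj_mod_phase [simp]:
  "clifford n U \<Longrightarrow> is_pauli n P \<Longrightarrow> is_pauli n (conj_mod_phase n U P)"
  by (rule conj_mod_phase(1))

lemma conj_mod_phase_one:
  assumes "is_pauli n P"
  shows "conj_mod_phase n (1\<^sub>m (2 ^ n)) P = P"
  by (rule conj_mod_phase_eqI[where a = 1]) (simp_all add: clifford_one assms)

lemma conj_mod_phase_pone [simp]:
  assumes U: "clifford n U"
  shows "conj_mod_phase n U pone = pone"
  by (rule conj_mod_phase_eqI[where a = 1])
     (use U in \<open>simp_all add: pauli_mat_pone unitary_adj_mult[OF clifford_unitary[OF U]]
        right_mult_one_mat[OF clifford_adj_carrier[OF U]]\<close>)

lemma conj_mod_phase_pmul:
  assumes U: "clifford n U" and P: "is_pauli n P" and Q: "is_pauli n Q"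
  shows "conj_mod_phase n U (pmul P Q) = pmul (conj_mod_phase n U P) (conj_mod_phase n U Q)"
proof -
  let ?P' = "conj_mod_phase n U P" and ?Q' = "conj_mod_phase n U Q"
  obtain a where a: "adj U * pauli_mat n P * U = a \<cdot>\<^sub>m pauli_mat n ?P'"
    using conj_mod_phase(2)[OF U P] by blast
  obtain b where b: "adj U * pauli_mat n Q * U = b \<cdot>\<^sub>m pauli_mat n ?Q'"
    using conj_mod_phase(2)[OF U Q] by blast
  have P': "is_pauli n ?P'" and Q': "is_pauli n ?Q'" using U P Q by simp_all
  define s where "s = ((-1::complex) ^ card (snd P \<inter> fst Q))"
  have ss: "s * s = 1" unfolding s_def by (simp flip: power_add add: mult_2[symmetric] power_mult)
  have "pauli_mat n (pmul P Q) = s \<cdot>\<^sub>m (pauli_mat n P * pauli_mat n Q)"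
    unfolding pauli_mat_mult[OF P Q] s_def[symmetric] by (simp add: ss)
  then have "adj U * pauli_mat n (pmul P Q) * U = s \<cdot>\<^sub>m ((adj U * pauli_mat n P * U) * (adj U * pauli_mat n Q * U))"
    using U by (simp add: mult_smult_mult[of _ "2 ^ n"] unitary_conj_mult[OF clifford_unitary[OF U]])
  also have "\<dots> = (s * (a * b) * (-1) ^ card (snd ?P' \<inter> fst ?Q')) \<cdot>\<^sub>m pauli_mat n (pmul ?P' ?Q')"
    unfolding a b smult_mult_smult[OF pauli_mat_carrier pauli_mat_carrier] pauli_mat_mult[OF P' Q']
    by (simp add: mult.assoc)
  finally show ?thesis by (rule conj_mod_phase_eqI[OF U, rotated]) (simp add: P' Q')
qed

lemma conj_mod_phase_mult:
  assumes U: "clifford n U" and V: "clifford n V" and P: "is_pauli n P"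
  shows "conj_mod_phase n (U * V) P = conj_mod_phase n V (conj_mod_phase n U P)"
proof -
  let ?Q = "conj_mod_phase n U P"
  obtain a where a: "adj U * pauli_mat n P * U = a \<cdot>\<^sub>m pauli_mat n ?Q"
    using conj_mod_phase(2)[OF U P] by blast
  have Q: "is_pauli n ?Q" using U P by simp
  obtain b where b: "adj V * pauli_mat n ?Q * V = b \<cdot>\<^sub>m pauli_mat n (conj_mod_phase n V ?Q)"
    using conj_mod_phase(2)[OF V Q] by blast
  have "adj (U * V) * pauli_mat n P * (U * V) = adj V * (adj U * pauli_mat n P * U) * V"
    using U V by (simp add: adj_mult[of U "2 ^ n" "2 ^ n" V "2 ^ n"] assoc_mult_square[of _ "2 ^ n"])
  also have "\<dots> = (a * b) \<cdot>\<^sub>m pauli_mat n (conj_mod_phase n V ?Q)"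
    unfolding a using V by (simp add: mult_smult_mult[of _ "2 ^ n"] b)
  finally show ?thesis by (rule conj_mod_phase_eqI[OF clifford_mult[OF U V], rotated]) (simp add: V Q)
qed

lemma conj_mod_phase_inj:
  assumes U: "clifford n U" and P: "is_pauli n P" and Q: "is_pauli n Q"
    and eq: "conj_mod_phase n U P = conj_mod_phase n U Q"
  shows "P = Q"
proof -
  have PQ: "is_pauli n (pmul P Q)" using P Q by simp
  have "conj_mod_phase n U (pmul P Q) = pone" using conj_mod_phase_pmul[OF U P Q] eq by simp
  then obtain a where "adj U * pauli_mat n (pmul P Q) * U = a \<cdot>\<^sub>m 1\<^sub>m (2 ^ n)"
    using conj_mod_phase(2)[OF U PQ] by (auto simp: pauli_mat_pone)
  then have "pauli_mat n (pmul P Q) = U * (a \<cdot>\<^sub>m 1\<^sub>m (2 ^ n)) * adj U"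
    using unitary_conj_conj(2)[OF clifford_unitary[OF U], of "pauli_mat n (pmul P Q)"] by simp
  also have "\<dots> = a \<cdot>\<^sub>m pauli_mat n pone"
    using U by (simp add: mult_smult_mult[of _ "2 ^ n"] unitary_mult_adj[OF clifford_unitary[OF U]]
        right_mult_one_mat[OF clifford_carrier[OF U]] pauli_mat_pone)
  finally have "1 \<cdot>\<^sub>m pauli_mat n (pmul P Q) = a \<cdot>\<^sub>m pauli_mat n pone" by simp
  then have "pmul P Q = pone" by (rule conjunct1[OF pauli_mat_smult_inj[OF PQ is_pauli_pone]]) simp
  then show ?thesis by (simp add: pmul_eq_pone_iff)
qed

lemma pcommute_conj_mod_phase:
  assumes U: "clifford n U" and P: "is_pauli n P" and Q: "is_pauli n Q"
  shows "pcommute (conj_mod_phase n U P) (conj_mod_phase n U Q) \<longleftrightarrow> pcommute P Q"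
proof -
  have Uu: "unitary_mat (2 ^ n) U" using U by (rule clifford_unitary)
  let ?P = "pauli_mat n P" and ?Q = "pauli_mat n Q"
  let ?P' = "pauli_mat n (conj_mod_phase n U P)" and ?Q' = "pauli_mat n (conj_mod_phase n U Q)"
  obtain a where a0: "a \<noteq> 0" and a: "adj U * ?P * U = a \<cdot>\<^sub>m ?P'"
    using conj_mod_phase(2)[OF U P] by blast
  obtain b where b0: "b \<noteq> 0" and b: "adj U * ?Q * U = b \<cdot>\<^sub>m ?Q'"
    using conj_mod_phase(2)[OF U Q] by blast
  have PQ: "adj U * (?P * ?Q) * U = (a * b) \<cdot>\<^sub>m (?P' * ?Q')"
    and QP: "adj U * (?Q * ?P) * U = (a * b) \<cdot>\<^sub>m (?Q' * ?P')"
    unfolding unitary_conj_mult[OF Uu pauli_mat_carrier pauli_mat_carrier] a b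
    by (simp_all add: smult_mult_smult[OF pauli_mat_carrier pauli_mat_carrier] mult.commute)
  have "?P * ?Q = ?Q * ?P \<longleftrightarrow> adj U * (?P * ?Q) * U = adj U * (?Q * ?P) * U"
    using unitary_conj_inj[OF Uu] by (metis mult_carrier_square pauli_mat_carrier)
  also have "\<dots> \<longleftrightarrow> ?P' * ?Q' = ?Q' * ?P'"
  proof
    assume "adj U * (?P * ?Q) * U = adj U * (?Q * ?P) * U"
    then have "(1 / (a * b)) \<cdot>\<^sub>m ((a * b) \<cdot>\<^sub>m (?P' * ?Q')) = (1 / (a * b)) \<cdot>\<^sub>m ((a * b) \<cdot>\<^sub>m (?Q' * ?P'))"
      unfolding PQ QP by simp
    then show "?P' * ?Q' = ?Q' * ?P'" using a0 b0 by simp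
  qed (simp add: PQ QP)
  finally show ?thesis using pauli_mat_commute_iff P Q U by simp
qed

lemma pauli_mat_commute_if_commute_singles:
  assumes M: "M \<in> carrier_mat (2 ^ n) (2 ^ n)" and P: "is_pauli n P"
    and single: "\<And>q. q \<in> psupp P \<Longrightarrow> M * pauli_mat n ({q}, {}) = pauli_mat n ({q}, {}) * M \<and>
                                        M * pauli_mat n ({}, {q}) = pauli_mat n ({}, {q}) * M"
  shows "M * pauli_mat n P = pauli_mat n P * M"
proof -
  have fin: "finite (fst P)" "finite (snd P)" using is_pauli_finite[OF P] by auto
  have X: "M * pauli_mat n (X, {}) = pauli_mat n (X, {}) * M" if "X \<subseteq> fst P" for X
    using finite_subset[OF that fin(1)] that
  proof (induction X rule: finite_induct)
    case empty then show ?case using M by (simp add: pauli_mat_pone)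
  next
    case (insert q X)
    have "q < n" "is_pauli n (X, {})" "is_pauli n ({q}, {})"
      using insert P by (auto simp: is_pauli_def)
    moreover have "pmul ({q}, {}) (X, {}) = (insert q X, {})" using insert by (auto simp: pmul_def)
    ultimately have "pauli_mat n (insert q X, {}) = pauli_mat n ({q}, {}) * pauli_mat n (X, {})"
      using pauli_mat_mult[of n "({q}, {})" "(X, {})"] by simp
    moreover have "q \<in> psupp P" using insert by (auto simp: psupp_def)
    ultimately show ?case using insert single[of q] M by (simp add: commute_mult)
  qed
  have Z: "M * pauli_mat n (fst P, Z) = pauli_mat n (fst P, Z) * M" if "Z \<subseteq> snd P" for Z
    using finite_subset[OF that fin(2)] that
  proof (induction Z rule: finite_induct)
    case empty then show ?case using X by simp
  next
    case (insert q Z)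
    have "q < n" "is_pauli n (fst P, Z)" "is_pauli n ({}, {q})"
      using insert P by (auto simp: is_pauli_def)
    moreover have "pmul (fst P, Z) ({}, {q}) = (fst P, insert q Z)" using insert by (auto simp: pmul_def)
    ultimately have "pauli_mat n (fst P, insert q Z) = pauli_mat n (fst P, Z) * pauli_mat n ({}, {q})"
      using pauli_mat_mult[of n "(fst P, Z)" "({}, {q})"] by simp
    moreover have "q \<in> psupp P" using insert by (auto simp: psupp_def)
    ultimately show ?case using insert single[of q] M by (simp add: commute_mult)
  qed
  show ?thesis using Z[of "snd P"] by simp
qed

lemma conj_mod_phase_disjoint:
  assumes U: "clifford n U" and P: "is_pauli n P" and disj: "psupp P \<inter> mat_supp n U = {}"
  shows "conj_mod_phase n U P = P"
proof (rule conj_mod_phase_eqI[OF U P])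
  have "U * pauli_mat n P = pauli_mat n P * U"
  proof (rule pauli_mat_commute_if_commute_singles)
    fix q assume q: "q \<in> psupp P"
    then have "q < n" using P by (auto simp: psupp_def is_pauli_def)
    with q disj show "U * pauli_mat n ({q}, {}) = pauli_mat n ({q}, {}) * U \<and>
        U * pauli_mat n ({}, {q}) = pauli_mat n ({}, {q}) * U"
      by (auto simp: mat_supp_def)
  qed (use U P in simp_all)
  then have "adj U * pauli_mat n P * U = (adj U * U) * pauli_mat n P"
    using U by (simp add: assoc_mult_square[of _ "2 ^ n"])
  then show "adj U * pauli_mat n P * U = 1 \<cdot>\<^sub>m pauli_mat n P"
    by (simp add: unitary_adj_mult[OF clifford_unitary[OF U]])
qed

text \<open>A qubit outside both supports commutes with P and with U, hence with the conjugate.\<close>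

lemma psupp_conj_mod_phase:
  assumes U: "clifford n U" and P: "is_pauli n P"
  shows "psupp (conj_mod_phase n U P) \<subseteq> psupp P \<union> mat_supp n U"
proof
  fix q assume q: "q \<in> psupp (conj_mod_phase n U P)"
  have Uu: "unitary_mat (2 ^ n) U" using U by (rule clifford_unitary)
  let ?P' = "conj_mod_phase n U P"
  have P': "is_pauli n ?P'" using U P by simp
  then have qn: "q < n" using q by (auto simp: psupp_def is_pauli_def)
  show "q \<in> psupp P \<union> mat_supp n U"
  proof (rule ccontr)
    assume "q \<notin> psupp P \<union> mat_supp n U"
    then have nP: "q \<notin> psupp P" and nU: "q \<notin> mat_supp n U" by auto
    obtain a where a0: "a \<noteq> 0" and a: "adj U * pauli_mat n P * U = a \<cdot>\<^sub>m pauli_mat n ?P'"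
      using conj_mod_phase(2)[OF U P] by blast
    have "pcommute ?P' S" if S: "S = ({q}, {}) \<or> S = ({}, {q})" for S
    proof -
      let ?S = "pauli_mat n S" and ?M = "adj U * pauli_mat n P * U"
      have Sp: "is_pauli n S" using S qn by (auto simp: is_pauli_def)
      have US: "U * ?S = ?S * U" using S nU qn by (auto simp: mat_supp_def)
      have adjUS: "adj U * ?S = ?S * adj U" by (rule unitary_adj_commute[OF Uu pauli_mat_carrier US])
      have "pcommute P S" using S nP by (auto simp: pcommute_single psupp_def)
      then have PS: "pauli_mat n P * ?S = ?S * pauli_mat n P" using pauli_mat_commute_iff[OF P Sp] by simp
      have "?M * ?S = adj U * pauli_mat n P * (U * ?S)"
        using U by (simp add: assoc_mult_square[of _ "2 ^ n"])
      also have "\<dots> = adj U * (pauli_mat n P * ?S) * U"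
        unfolding US using U by (simp add: assoc_mult_square[of _ "2 ^ n"])
      also have "\<dots> = (adj U * ?S) * pauli_mat n P * U"
        unfolding PS using U by (simp add: assoc_mult_square[of _ "2 ^ n"])
      also have "\<dots> = ?S * ?M"
        unfolding adjUS using U by (simp add: assoc_mult_square[of _ "2 ^ n"])
      finally have "a \<cdot>\<^sub>m (pauli_mat n ?P' * ?S) = a \<cdot>\<^sub>m (?S * pauli_mat n ?P')"
        unfolding a mult_smult_assoc_mat[OF pauli_mat_carrier pauli_mat_carrier]
          mult_smult_distrib[OF pauli_mat_carrier pauli_mat_carrier] .
      then have "(1 / a) \<cdot>\<^sub>m (a \<cdot>\<^sub>m (pauli_mat n ?P' * ?S)) = (1 / a) \<cdot>\<^sub>m (a \<cdot>\<^sub>m (?S * pauli_mat n ?P'))"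
        by simp
      then show ?thesis using a0 pauli_mat_commute_iff[OF P' Sp] by simp
    qed
    note commutes = this
    have "q \<notin> snd ?P'" using commutes[of "({q}, {})"] by (simp add: pcommute_single)
    moreover have "q \<notin> fst ?P'" using commutes[of "({}, {q})"] by (simp add: pcommute_single)
    ultimately show False using q by (simp add: psupp_def)
  qed
qed

section \<open>Measurement records and backward Pauli propagation\<close>

lemma smult_mult_mat_vec:
  "A \<in> carrier_mat k l \<Longrightarrow> v \<in> carrier_vec l \<Longrightarrow> (a \<cdot>\<^sub>m A) *\<^sub>v v = a \<cdot>\<^sub>v (A *\<^sub>v (v :: complex vec))"
  by (rule eq_vecI) (auto simp: scalar_prod_def sum_distrib_left mult.assoc)

lemma mult_mat_vec_zero: "A \<in> carrier_mat k l \<Longrightarrow> A *\<^sub>v 0\<^sub>v l = (0\<^sub>v k :: complex vec)"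
  by (rule eq_vecI) (auto simp: scalar_prod_def)

lemma smult_vec_eq_zeroD:
  assumes v: "v \<in> carrier_vec k" and a: "a \<noteq> 0" and eq: "a \<cdot>\<^sub>v v = (0\<^sub>v k :: complex vec)"
  shows "v = 0\<^sub>v k"
proof (rule eq_vecI)
  fix i assume i: "i < dim_vec (0\<^sub>v k :: complex vec)"
  have "(a \<cdot>\<^sub>v v) $ i = 0" using eq i by simp
  then show "v $ i = 0\<^sub>v k $ i" using i v a by auto
qed (use v in simp)

lemma mult_mat_unit_vec_index:
  fixes M :: "complex mat"
  assumes "M \<in> carrier_mat N N" "i < N" "k < N"
  shows "(M *\<^sub>v unit_vec N k) $ i = M $$ (i, k)"
  using assms by (simp add: scalar_prod_right_unit)

definition meas_count :: "operation list \<Rightarrow> nat" where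
  "meas_count os = length (filter is_meas os)"

lemma meas_count_simps [simp]:
  "meas_count [] = 0" "meas_count (Gate l U # os) = meas_count os"
  "meas_count (Meas l S # os) = Suc (meas_count os)"
  "meas_count (xs @ ys) = meas_count xs + meas_count ys"
  by (simp_all add: meas_count_def)

definition ops_ok :: "nat \<Rightarrow> operation list \<Rightarrow> bool" where
  "ops_ok n os \<longleftrightarrow> (\<forall>w\<in>set os. op_ok n w)"

lemma ops_ok_simps [simp]:
  "ops_ok n []" "ops_ok n (Gate l U # os) \<longleftrightarrow> clifford n U \<and> ops_ok n os"
  "ops_ok n (Meas l S # os) \<longleftrightarrow> is_pauli n (snd S) \<and> ops_ok n os"
  "ops_ok n (xs @ ys) \<longleftrightarrow> ops_ok n xs \<and> ops_ok n ys"
  by (auto simp: ops_ok_def)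

definition sign_of :: "bool \<Rightarrow> complex" where
  "sign_of b = (if b then -1 else 1)"

lemma sign_of_square [simp]: "sign_of b * sign_of b = 1"
  and sign_of_mult: "sign_of a * sign_of b = sign_of (a \<noteq> b)"
  and sign_of_not: "- sign_of b = sign_of (\<not> b)"
  and sign_of_nonzero [simp]: "sign_of b \<noteq> 0"
  by (simp_all add: sign_of_def)

definition eig_proj :: "complex mat \<Rightarrow> complex \<Rightarrow> complex mat" where
  "eig_proj A s = (1/2) \<cdot>\<^sub>m (1\<^sub>m (dim_row A) + s \<cdot>\<^sub>m A)"

lemma herm_pauli_mat_dim [simp]:
  "dim_row (herm_pauli_mat n S) = 2 ^ n" "dim_col (herm_pauli_mat n S) = 2 ^ n"
  by (simp_all add: herm_pauli_mat_def)

lemma run_Meas_eig_proj: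
  "run n w j (Meas l S # rest) \<psi> =
     run n w (Suc j) rest (eig_proj (herm_pauli_mat n S) (sign_of (j \<in> w)) *\<^sub>v \<psi>)"
  by (simp add: eig_proj_def sign_of_def)

declare run.simps(3) [simp del] run_Meas_eig_proj [simp]

text \<open>Propagating the product of the measured Paulis selected by u backwards through the
  circuit, modulo phases: None as soon as it anticommutes with a measurement it passes.\<close>

fun propagate :: "nat \<Rightarrow> nat set \<Rightarrow> operation list \<Rightarrow> nat \<Rightarrow> pauli \<Rightarrow> pauli option" where
  "propagate n u [] j P0 = Some P0"
| "propagate n u (Gate l U # rest) j P0 = map_option (conj_mod_phase n U) (propagate n u rest j P0)"
| "propagate n u (Meas l S # rest) j P0 = (case propagate n u rest (Suc j) P0 of
       None \<Rightarrow> None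
     | Some P \<Rightarrow> if pcommute (snd S) P then Some (if j \<in> u then pmul (snd S) P else P) else None)"

text \<open>The same product as a matrix, with phases; measurements are numbered from j.\<close>

fun detector_mat :: "nat \<Rightarrow> nat set \<Rightarrow> operation list \<Rightarrow> nat \<Rightarrow> complex mat" where
  "detector_mat n u [] j = 1\<^sub>m (2 ^ n)"
| "detector_mat n u (Gate l U # rest) j = adj U * detector_mat n u rest j * U"
| "detector_mat n u (Meas l S # rest) j =
     (if j \<in> u then herm_pauli_mat n S * detector_mat n u rest (Suc j) else detector_mat n u rest (Suc j))"

definition outcome_count :: "nat set \<Rightarrow> nat set \<Rightarrow> nat \<Rightarrow> operation list \<Rightarrow> nat" where
  "outcome_count w u j os = card (w \<inter> u \<inter> {j..<j + meas_count os})"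

lemma outcome_count_Nil [simp]: "outcome_count w u j [] = 0"
  and outcome_count_Gate [simp]: "outcome_count w u j (Gate l U # os) = outcome_count w u j os"
  by (simp_all add: outcome_count_def)

lemma outcome_count_Meas:
  "outcome_count w u j (Meas l S # os) = (if j \<in> w \<and> j \<in> u then 1 else 0) + outcome_count w u (Suc j) os"
proof -
  have "{j..<j + meas_count (Meas l S # os)} = insert j {Suc j..<Suc j + meas_count os}" by auto
  then show ?thesis unfolding outcome_count_def by (auto simp: Int_insert_right)
qed

lemma outcome_count_cong:
  assumes "\<And>i. j \<le> i \<Longrightarrow> i < j + meas_count os \<Longrightarrow> i \<in> w \<longleftrightarrow> i \<in> w'"
  shows "outcome_count w u j os = outcome_count w' u j os"
proof -
  have "w \<inter> u \<inter> {j..<j + meas_count os} = w' \<inter> u \<inter> {j..<j + meas_count os}" using assms by auto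
  then show ?thesis by (simp add: outcome_count_def)
qed

lemma run_cong:
  assumes "\<And>i. j \<le> i \<Longrightarrow> i < j + meas_count os \<Longrightarrow> i \<in> w \<longleftrightarrow> i \<in> w'"
  shows "run n w j os \<psi> = run n w' j os \<psi>"
  using assms
proof (induction os arbitrary: j \<psi>)
  case (Cons x os)
  then show ?case
  proof (cases x)
    case (Meas l S)
    have "run n w (Suc j) os \<phi> = run n w' (Suc j) os \<phi>" for \<phi>
      by (rule Cons.IH) (use Cons.prems Meas in auto)
    moreover have "j \<in> w \<longleftrightarrow> j \<in> w'" using Cons.prems[of j] Meas by simp
    ultimately show ?thesis using Meas by simp
  qed simp
qed simp

lemma run_Meas_choose_outcome:
  fixes b :: bool and w :: "nat set" and j :: nat
  defines "w' \<equiv> if b then insert j w else w - {j}"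
  shows "run n w' j (Meas l S # rest) \<psi> =
      run n w (Suc j) rest (eig_proj (herm_pauli_mat n S) (sign_of b) *\<^sub>v \<psi>)"
    and "outcome_count w' u j (Meas l S # rest) =
      (if b \<and> j \<in> u then 1 else 0) + outcome_count w u (Suc j) rest"
proof -
  have "run n w' (Suc j) rest \<phi> = run n w (Suc j) rest \<phi>" for \<phi>
    unfolding w'_def by (rule run_cong) auto
  moreover have "j \<in> w' \<longleftrightarrow> b" unfolding w'_def by auto
  ultimately show "run n w' j (Meas l S # rest) \<psi> =
      run n w (Suc j) rest (eig_proj (herm_pauli_mat n S) (sign_of b) *\<^sub>v \<psi>)"
    by simp
  have "outcome_count w' u (Suc j) rest = outcome_count w u (Suc j) rest"
    unfolding w'_def by (rule outcome_count_cong) auto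
  with \<open>j \<in> w' \<longleftrightarrow> b\<close> show "outcome_count w' u j (Meas l S # rest) =
      (if b \<and> j \<in> u then 1 else 0) + outcome_count w u (Suc j) rest"
    by (simp add: outcome_count_Meas)
qed

context
  fixes n :: nat
begin

text \<open>The library's associativity and distributivity laws at the fixed dimension 2^n, so that the
  simplifier can discharge their carrier premises.\<close>

lemma sq_assoc: "A \<in> carrier_mat (2^n) (2^n) \<Longrightarrow> B \<in> carrier_mat (2^n) (2^n) \<Longrightarrow> C \<in> carrier_mat (2^n) (2^n) \<Longrightarrow>
    A * B * C = A * (B * C)"
  and sq_distl: "A \<in> carrier_mat (2^n) (2^n) \<Longrightarrow> B \<in> carrier_mat (2^n) (2^n) \<Longrightarrow> C \<in> carrier_mat (2^n) (2^n) \<Longrightarrow>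
    A * (B + C) = A * B + A * (C :: complex mat)"
  and sq_distr: "A \<in> carrier_mat (2^n) (2^n) \<Longrightarrow> B \<in> carrier_mat (2^n) (2^n) \<Longrightarrow> C \<in> carrier_mat (2^n) (2^n) \<Longrightarrow>
    (A + B) * C = A * C + B * (C :: complex mat)"
  and sq_smult_l: "A \<in> carrier_mat (2^n) (2^n) \<Longrightarrow> B \<in> carrier_mat (2^n) (2^n) \<Longrightarrow>
    (a \<cdot>\<^sub>m A) * B = a \<cdot>\<^sub>m (A * (B :: complex mat))"
  and sq_smult_r: "A \<in> carrier_mat (2^n) (2^n) \<Longrightarrow> B \<in> carrier_mat (2^n) (2^n) \<Longrightarrow>
    A * (a \<cdot>\<^sub>m B) = a \<cdot>\<^sub>m (A * (B :: complex mat))"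
  and sq_mv_assoc: "A \<in> carrier_mat (2^n) (2^n) \<Longrightarrow> B \<in> carrier_mat (2^n) (2^n) \<Longrightarrow> v \<in> carrier_vec (2^n) \<Longrightarrow>
    (A * B) *\<^sub>v v = A *\<^sub>v (B *\<^sub>v (v :: complex vec))"
  and sq_mv_smult: "A \<in> carrier_mat (2^n) (2^n) \<Longrightarrow> v \<in> carrier_vec (2^n) \<Longrightarrow>
    A *\<^sub>v (a \<cdot>\<^sub>v v) = a \<cdot>\<^sub>v (A *\<^sub>v (v :: complex vec))"
  and sq_smult_mv: "A \<in> carrier_mat (2^n) (2^n) \<Longrightarrow> v \<in> carrier_vec (2^n) \<Longrightarrow>
    (a \<cdot>\<^sub>m A) *\<^sub>v v = a \<cdot>\<^sub>v (A *\<^sub>v (v :: complex vec))"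
  and sq_mv_add: "A \<in> carrier_mat (2^n) (2^n) \<Longrightarrow> v \<in> carrier_vec (2^n) \<Longrightarrow> w \<in> carrier_vec (2^n) \<Longrightarrow>
    A *\<^sub>v (v + w) = A *\<^sub>v v + A *\<^sub>v (w :: complex vec)"
  and sq_add_mv: "A \<in> carrier_mat (2^n) (2^n) \<Longrightarrow> B \<in> carrier_mat (2^n) (2^n) \<Longrightarrow> v \<in> carrier_vec (2^n) \<Longrightarrow>
    (A + B) *\<^sub>v v = A *\<^sub>v v + B *\<^sub>v (v :: complex vec)"
  and sq_mv_zero: "A \<in> carrier_mat (2^n) (2^n) \<Longrightarrow> A *\<^sub>v 0\<^sub>v (2^n) = (0\<^sub>v (2^n) :: complex vec)"
  by (simp_all add: assoc_mult_mat mult_add_distrib_mat add_mult_distrib_mat mult_smult_assoc_mat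
      mult_smult_distrib assoc_mult_mat_vec mult_mat_vec smult_mult_mat_vec mult_add_distrib_mat_vec
      add_mult_distrib_mat_vec mult_mat_vec_zero)

lemma sq_one_mult [simp]: "A \<in> carrier_mat (2^n) (2^n) \<Longrightarrow> 1\<^sub>m (2^n) * A = (A :: complex mat)"
  by (rule left_mult_one_mat)

lemma sq_mult_one [simp]: "A \<in> carrier_mat (2^n) (2^n) \<Longrightarrow> A * 1\<^sub>m (2^n) = (A :: complex mat)"
  by (rule right_mult_one_mat)

lemma sq_mult_mat_vec_carrier [simp]:
  "A \<in> carrier_mat (2^n) (2^n) \<Longrightarrow> v \<in> carrier_vec (2^n) \<Longrightarrow> A *\<^sub>v v \<in> carrier_vec (2^n)"
  by simp

lemma eig_proj_carrier [simp]: "A \<in> carrier_mat (2^n) (2^n) \<Longrightarrow> eig_proj A s \<in> carrier_mat (2^n) (2^n)"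
  by (simp add: eig_proj_def)

lemma eig_proj_eigen:
  assumes A: "A \<in> carrier_mat (2^n) (2^n)" and AA: "A * A = 1\<^sub>m (2^n)" and s: "s * s = 1"
  shows "A * eig_proj A s = s \<cdot>\<^sub>m eig_proj A s"
proof -
  have "A * eig_proj A s = (1/2) \<cdot>\<^sub>m (A + s \<cdot>\<^sub>m 1\<^sub>m (2^n))"
    unfolding eig_proj_def using A by (simp add: sq_smult_r sq_distl AA right_mult_one_mat[OF A])
  also have "\<dots> = s \<cdot>\<^sub>m eig_proj A s"
  proof (rule eq_matI)
    fix i k assume "i < dim_row (s \<cdot>\<^sub>m eig_proj A s)" "k < dim_col (s \<cdot>\<^sub>m eig_proj A s)"
    then have i: "i < 2^n" and k: "k < 2^n" using A by (simp_all add: eig_proj_def)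
    have "s * (s * A $$ (i, k)) = A $$ (i, k)" using s by (simp flip: mult.assoc)
    then show "((1/2) \<cdot>\<^sub>m (A + s \<cdot>\<^sub>m 1\<^sub>m (2^n))) $$ (i, k) = (s \<cdot>\<^sub>m eig_proj A s) $$ (i, k)"
      using i k A unfolding eig_proj_def by (auto simp: algebra_simps)
  qed (use A in \<open>simp_all add: eig_proj_def\<close>)
  finally show ?thesis .
qed

lemma eig_proj_eigvec:
  assumes "A \<in> carrier_mat (2^n) (2^n)" "A * A = 1\<^sub>m (2^n)" "\<psi> \<in> carrier_vec (2^n)"
  shows "A *\<^sub>v (eig_proj A (sign_of b) *\<^sub>v \<psi>) = sign_of b \<cdot>\<^sub>v (eig_proj A (sign_of b) *\<^sub>v \<psi>)"
  using assms eig_proj_eigen[OF assms(1,2) sign_of_square] by (simp flip: sq_mv_assoc add: sq_smult_mv)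

lemma eig_proj_split:
  assumes A: "A \<in> carrier_mat (2^n) (2^n)" and \<psi>: "\<psi> \<in> carrier_vec (2^n)"
  shows "\<psi> = eig_proj A s *\<^sub>v \<psi> + eig_proj A (- s) *\<^sub>v \<psi>"
proof -
  have "eig_proj A s + eig_proj A (- s) = 1\<^sub>m (2^n)"
    using A by (intro eq_matI) (auto simp: eig_proj_def algebra_simps)
  then show ?thesis using A \<psi> by (simp flip: sq_add_mv)
qed

lemma eig_proj_commute:
  assumes "A \<in> carrier_mat (2^n) (2^n)" "B \<in> carrier_mat (2^n) (2^n)" "A * B = B * A"
  shows "A * eig_proj B s = eig_proj B s * A"
  using assms by (simp add: eig_proj_def sq_smult_r sq_smult_l sq_distl sq_distr
      right_mult_one_mat[OF assms(1)] left_mult_one_mat[OF assms(1)])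

lemma eig_proj_nonzero:
  assumes A: "A \<in> carrier_mat (2^n) (2^n)" and \<psi>: "\<psi> \<in> carrier_vec (2^n)" "\<psi> \<noteq> 0\<^sub>v (2^n)"
  obtains b where "eig_proj A (sign_of b) *\<^sub>v \<psi> \<noteq> 0\<^sub>v (2^n)"
  using eig_proj_split[OF A \<psi>(1), of 1] \<psi> A that[of False] that[of True]
  by (fastforce simp: sign_of_def)

lemma vec_eq_neg_self_zero:
  assumes v: "v \<in> carrier_vec k" and eq: "v = (-1::complex) \<cdot>\<^sub>v v"
  shows "v = 0\<^sub>v k"
proof (rule eq_vecI)
  fix i assume i: "i < dim_vec (0\<^sub>v k :: complex vec)"
  have "v $ i = - v $ i" using arg_cong[OF eq, of "\<lambda>x. x $ i"] i v by simp
  then show "v $ i = 0\<^sub>v k $ i" using i by simp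
qed (use v in simp)

lemma clifford_mult_vec_nonzero:
  assumes U: "clifford n U" and \<psi>: "\<psi> \<in> carrier_vec (2^n)" "\<psi> \<noteq> 0\<^sub>v (2^n)"
  shows "U *\<^sub>v \<psi> \<noteq> 0\<^sub>v (2^n)"
proof
  assume "U *\<^sub>v \<psi> = 0\<^sub>v (2^n)"
  then have "(adj U * U) *\<^sub>v \<psi> = 0\<^sub>v (2^n)" using U \<psi> by (simp add: sq_mv_assoc sq_mv_zero)
  then show False using \<psi> unitary_adj_mult[OF clifford_unitary[OF U]] by simp
qed

lemma run_carrier:
  "ops_ok n os \<Longrightarrow> \<psi> \<in> carrier_vec (2^n) \<Longrightarrow> run n w j os \<psi> \<in> carrier_vec (2^n)"
proof (induction os arbitrary: j \<psi>)
  case (Cons x os)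
  then show ?case by (cases x) simp_all
qed simp

lemma run_add:
  "ops_ok n os \<Longrightarrow> \<psi> \<in> carrier_vec (2^n) \<Longrightarrow> \<phi> \<in> carrier_vec (2^n) \<Longrightarrow>
   run n w j os (\<psi> + \<phi>) = run n w j os \<psi> + run n w j os \<phi>"
proof (induction os arbitrary: j \<psi> \<phi>)
  case (Cons x os)
  then show ?case by (cases x) (simp_all add: sq_mv_add)
qed simp

lemma run_zero: "ops_ok n os \<Longrightarrow> run n w j os (0\<^sub>v (2^n)) = 0\<^sub>v (2^n)"
proof (induction os arbitrary: j)
  case (Cons x os)
  then show ?case by (cases x) (simp_all add: sq_mv_zero)
qed simp

lemma run_nonzero_exists:
  assumes "ops_ok n os" "\<psi> \<in> carrier_vec (2^n)" "\<psi> \<noteq> 0\<^sub>v (2^n)"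
  shows "\<exists>w. run n w j os \<psi> \<noteq> 0\<^sub>v (2^n)"
  using assms
proof (induction os arbitrary: j \<psi>)
  case (Cons x rest)
  show ?case
  proof (cases x)
    case (Gate l U)
    then have "clifford n U" "ops_ok n rest" using Cons.prems by auto
    then obtain w where "run n w j rest (U *\<^sub>v \<psi>) \<noteq> 0\<^sub>v (2^n)"
      using Cons.IH clifford_mult_vec_nonzero[of U \<psi>] Cons.prems by fastforce
    then show ?thesis using Gate by auto
  next
    case (Meas l S)
    obtain b where b: "eig_proj (herm_pauli_mat n S) (sign_of b) *\<^sub>v \<psi> \<noteq> 0\<^sub>v (2^n)"
      using eig_proj_nonzero[OF herm_pauli_mat_carrier Cons.prems(2,3)] by blast
    then obtain w where "run n w (Suc j) rest (eig_proj (herm_pauli_mat n S) (sign_of b) *\<^sub>v \<psi>) \<noteq> 0\<^sub>v (2^n)"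
      using Cons Meas by fastforce
    then show ?thesis using run_Meas_choose_outcome(1) Meas by metis
  qed
qed simp

lemma detector_mat_carrier [simp]: "ops_ok n os \<Longrightarrow> detector_mat n u os j \<in> carrier_mat (2^n) (2^n)"
proof (induction os arbitrary: j)
  case (Cons x os)
  then show ?case by (cases x) simp_all
qed simp

lemma smult_pauli_mat_commute:
  assumes P: "is_pauli n P" and Q: "is_pauli n Q"
  shows "(a \<cdot>\<^sub>m pauli_mat n P) * (b \<cdot>\<^sub>m pauli_mat n Q) =
    (if pcommute P Q then 1 else -1) \<cdot>\<^sub>m ((b \<cdot>\<^sub>m pauli_mat n Q) * (a \<cdot>\<^sub>m pauli_mat n P))"
  by (simp add: smult_mult_smult[OF pauli_mat_carrier pauli_mat_carrier] pauli_mat_commute_sign[OF P Q]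
      mult.commute)

lemma detector_mat_smult_pauli_mat:
  assumes "ops_ok n os" "propagate n u os j pone = Some P"
  shows "is_pauli n P \<and> (\<exists>c. detector_mat n u os j = c \<cdot>\<^sub>m pauli_mat n P)"
  using assms
proof (induction os arbitrary: j P)
  case Nil then show ?case by (auto simp: pauli_mat_pone intro: exI[of _ 1])
next
  case (Cons x rest)
  show ?case
  proof (cases x)
    case (Gate l U)
    then have U: "clifford n U" and ok: "ops_ok n rest" using Cons.prems by auto
    obtain P' where P': "propagate n u rest j pone = Some P'" and PP: "P = conj_mod_phase n U P'"
      using Cons.prems Gate by auto
    obtain c where IH: "is_pauli n P'" "detector_mat n u rest j = c \<cdot>\<^sub>m pauli_mat n P'"
      using Cons.IH[OF ok P'] by blast
    obtain a where "adj U * pauli_mat n P' * U = a \<cdot>\<^sub>m pauli_mat n P"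
      using conj_mod_phase(2)[OF U IH(1)] PP by blast
    then have "detector_mat n u (x # rest) j = (c * a) \<cdot>\<^sub>m pauli_mat n P"
      using Gate U by (simp add: IH(2) mult_smult_mult[of _ "2^n"])
    then show ?thesis using U IH(1) PP by auto
  next
    case (Meas l S)
    then have Sp: "is_pauli n (snd S)" and ok: "ops_ok n rest" using Cons.prems by auto
    obtain P' where P': "propagate n u rest (Suc j) pone = Some P'"
      and PP: "P = (if j \<in> u then pmul (snd S) P' else P')"
      using Cons.prems Meas by (auto split: option.splits if_splits)
    obtain c where IH: "is_pauli n P'" "detector_mat n u rest (Suc j) = c \<cdot>\<^sub>m pauli_mat n P'"
      using Cons.IH[OF ok P'] by blast
    define h where "h = (if fst S then -1 else 1) * \<i> ^ card (fst (snd S) \<inter> snd (snd S))"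
    have "herm_pauli_mat n S = h \<cdot>\<^sub>m pauli_mat n (snd S)" unfolding h_def herm_pauli_mat_def ..
    then have "j \<in> u \<Longrightarrow>
        detector_mat n u (x # rest) j = (h * c * (-1) ^ card (snd (snd S) \<inter> fst P')) \<cdot>\<^sub>m pauli_mat n P"
      using Meas PP
      by (simp add: IH(2) smult_mult_smult[OF pauli_mat_carrier pauli_mat_carrier] pauli_mat_mult[OF Sp IH(1)])
    then show ?thesis using IH Sp PP Meas by (cases "j \<in> u") auto
  qed
qed

lemma detector_mat_square:
  assumes "ops_ok n os" "propagate n u os j pone = Some P"
  shows "detector_mat n u os j * detector_mat n u os j = 1\<^sub>m (2^n)"
  using assms
proof (induction os arbitrary: j P)
  case (Cons x rest)
  show ?case
  proof (cases x)
    case (Gate l U)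
    then have U: "clifford n U" and ok: "ops_ok n rest" using Cons.prems by auto
    have Uu: "unitary_mat (2^n) U" using U by (rule clifford_unitary)
    obtain P' where P': "propagate n u rest j pone = Some P'" using Cons.prems Gate by auto
    have "detector_mat n u (x # rest) j * detector_mat n u (x # rest) j =
        adj U * (detector_mat n u rest j * (U * adj U) * detector_mat n u rest j) * U"
      using Gate U ok by (simp add: sq_assoc)
    also have "\<dots> = 1\<^sub>m (2^n)"
      using U ok Cons.IH[OF ok P'] by (simp add: unitary_mult_adj[OF Uu] unitary_adj_mult[OF Uu])
    finally show ?thesis .
  next
    case (Meas l S)
    then have Sp: "is_pauli n (snd S)" and ok: "ops_ok n rest" using Cons.prems by auto
    obtain P' where P': "propagate n u rest (Suc j) pone = Some P'" and commute: "pcommute (snd S) P'"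
      using Cons.prems Meas by (auto split: option.splits if_splits)
    let ?H = "herm_pauli_mat n S" and ?A = "detector_mat n u rest (Suc j)"
    obtain c where IH: "is_pauli n P'" "?A = c \<cdot>\<^sub>m pauli_mat n P'"
      using detector_mat_smult_pauli_mat[OF ok P'] by blast
    have HA: "?H * ?A = ?A * ?H"
      unfolding herm_pauli_mat_def IH(2) smult_pauli_mat_commute[OF Sp IH(1)] using commute by simp
    have "?H * ?A * (?H * ?A) = ?H * (?A * ?H) * ?A"
      using ok by (simp add: sq_assoc)
    also have "\<dots> = (?H * ?H) * (?A * ?A)"
      unfolding HA[symmetric] using ok by (simp add: sq_assoc)
    finally have "?H * ?A * (?H * ?A) = (?H * ?H) * (?A * ?A)" .
    then show ?thesis
      using Meas Cons.IH[OF ok P'] herm_pauli_mat_square[OF Sp] by simp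
  qed
qed simp

lemma detector_mat_propagate:
  assumes "ops_ok n os" "propagate n u os j pone = Some P"
  shows "is_pauli n P \<and> (\<exists>c. detector_mat n u os j = c \<cdot>\<^sub>m pauli_mat n P) \<and>
    detector_mat n u os j * detector_mat n u os j = 1\<^sub>m (2^n)"
  using detector_mat_smult_pauli_mat[OF assms] detector_mat_square[OF assms] by blast

lemma detector_mat_after_meas:
  fixes c :: bool
  assumes ok: "ops_ok n (Meas l S # rest)" and P': "propagate n u rest (Suc j) pone = Some P'"
    and commute: "pcommute (snd S) P'" and \<psi>: "\<psi> \<in> carrier_vec (2^n)"
    and D_\<psi>: "detector_mat n u (Meas l S # rest) j *\<^sub>v \<psi> = sign_of b \<cdot>\<^sub>v \<psi>"
  defines "\<phi> \<equiv> eig_proj (herm_pauli_mat n S) (sign_of c) *\<^sub>v \<psi>"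
  shows "detector_mat n u rest (Suc j) *\<^sub>v \<phi> = sign_of (b \<noteq> (j \<in> u \<and> c)) \<cdot>\<^sub>v \<phi>"
proof -
  have Sp: "is_pauli n (snd S)" and ok': "ops_ok n rest" using ok by auto
  define H where "H = herm_pauli_mat n S"
  define A where "A = detector_mat n u rest (Suc j)"
  define D where "D = detector_mat n u (Meas l S # rest) j"
  define Pr where "Pr = eig_proj H (sign_of c)"
  have carrier: "H \<in> carrier_mat (2^n) (2^n)" "A \<in> carrier_mat (2^n) (2^n)" "D \<in> carrier_mat (2^n) (2^n)"
    "Pr \<in> carrier_mat (2^n) (2^n)"
    using ok ok' unfolding H_def A_def D_def Pr_def by simp_all
  have HH: "H * H = 1\<^sub>m (2^n)" unfolding H_def by (rule herm_pauli_mat_square[OF Sp])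
  have D: "D = (if j \<in> u then H * A else A)" unfolding D_def H_def A_def by simp
  obtain a where A: "is_pauli n P'" "A = a \<cdot>\<^sub>m pauli_mat n P'"
    using detector_mat_smult_pauli_mat[OF ok' P'] unfolding A_def by blast
  have HA: "H * A = A * H"
    unfolding H_def herm_pauli_mat_def A(2) smult_pauli_mat_commute[OF Sp A(1)] using commute by simp
  have "D * H = H * D"
  proof (cases "j \<in> u")
    case True
    have "H * A * H = H * (A * H)" using carrier by (simp add: sq_assoc)
    then have "H * A * H = H * (H * A)" by (simp only: HA)
    then show ?thesis using True D by simp
  qed (use HA D in simp)
  then have D_Pr: "D * Pr = Pr * D" unfolding Pr_def by (rule eig_proj_commute[OF carrier(3,1)])
  have \<phi>: "\<phi> = Pr *\<^sub>v \<psi>" "\<phi> \<in> carrier_vec (2^n)" unfolding \<phi>_def Pr_def H_def using \<psi> by simp_all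
  have "D *\<^sub>v \<phi> = (D * Pr) *\<^sub>v \<psi>" unfolding \<phi>(1) using carrier \<psi> by (simp add: sq_mv_assoc)
  also have "\<dots> = Pr *\<^sub>v (D *\<^sub>v \<psi>)" unfolding D_Pr using carrier \<psi> by (simp add: sq_mv_assoc)
  finally have D_\<phi>: "D *\<^sub>v \<phi> = sign_of b \<cdot>\<^sub>v \<phi>"
    using D_\<psi> carrier \<psi> unfolding D_def[symmetric] \<phi>(1) by (simp add: sq_mv_smult)
  have H_\<phi>: "H *\<^sub>v \<phi> = sign_of c \<cdot>\<^sub>v \<phi>"
    unfolding \<phi>_def H_def by (rule eig_proj_eigvec[OF _ herm_pauli_mat_square[OF Sp] \<psi>]) simp
  show ?thesis
  proof (cases "j \<in> u")
    case True
    then have "H * D = (H * H) * A" using D carrier by (simp add: sq_assoc)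
    then have "A = H * D" using carrier HH by simp
    then have "A *\<^sub>v \<phi> = H *\<^sub>v (D *\<^sub>v \<phi>)" using carrier \<phi>(2) by (simp add: sq_mv_assoc)
    then show ?thesis using True carrier \<phi>(2) unfolding A_def
      by (simp add: D_\<phi> sq_mv_smult H_\<phi> smult_smult_assoc sign_of_mult)
  qed (use D_\<phi> D in \<open>simp add: A_def\<close>)
qed

lemma run_eq_zero_if_parity_differs:
  assumes "ops_ok n os" "propagate n u os j pone = Some P" "\<psi> \<in> carrier_vec (2^n)"
    "detector_mat n u os j *\<^sub>v \<psi> = sign_of b \<cdot>\<^sub>v \<psi>" "odd (outcome_count w u j os) \<noteq> b"
  shows "run n w j os \<psi> = 0\<^sub>v (2^n)"
  using assms
proof (induction os arbitrary: j P \<psi> b)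
  case Nil
  then have "\<psi> = (-1) \<cdot>\<^sub>v \<psi>" by (simp add: sign_of_def)
  then show ?case using vec_eq_neg_self_zero Nil by simp
next
  case (Cons x rest)
  show ?case
  proof (cases x)
    case (Gate l U)
    then have U: "clifford n U" and ok: "ops_ok n rest" using Cons.prems by auto
    obtain P' where P': "propagate n u rest j pone = Some P'" using Cons.prems Gate by auto
    have "detector_mat n u rest j * U = U * detector_mat n u (x # rest) j"
      using Gate U ok by (simp add: sq_assoc flip: sq_assoc[of U "adj U"]
          add: unitary_mult_adj[OF clifford_unitary[OF U]])
    then have "detector_mat n u rest j *\<^sub>v (U *\<^sub>v \<psi>) = sign_of b \<cdot>\<^sub>v (U *\<^sub>v \<psi>)"
      using Cons.prems(1,3,4) U ok by (simp flip: sq_mv_assoc add: sq_mv_assoc sq_mv_smult)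
    then show ?thesis using Cons.IH[OF ok P'] Cons.prems Gate U by simp
  next
    case (Meas l S)
    then have ok: "ops_ok n rest" using Cons.prems by auto
    obtain P' where P': "propagate n u rest (Suc j) pone = Some P'" and commute: "pcommute (snd S) P'"
      using Cons.prems Meas by (auto split: option.splits if_splits)
    let ?\<phi> = "eig_proj (herm_pauli_mat n S) (sign_of (j \<in> w)) *\<^sub>v \<psi>"
    have "detector_mat n u rest (Suc j) *\<^sub>v ?\<phi> = sign_of (b \<noteq> (j \<in> u \<and> j \<in> w)) \<cdot>\<^sub>v ?\<phi>"
      by (rule detector_mat_after_meas[OF _ P' commute Cons.prems(3)]) (use Cons.prems(1,4) Meas in simp_all)
    moreover have "odd (outcome_count w u (Suc j) rest) \<noteq> (b \<noteq> (j \<in> u \<and> j \<in> w))"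
      using Cons.prems(5) Meas by (auto simp: outcome_count_Meas split: if_splits)
    moreover have "?\<phi> \<in> carrier_vec (2^n)" using Cons.prems(3) by simp
    ultimately have "run n w (Suc j) rest ?\<phi> = 0\<^sub>v (2^n)"
      by (intro Cons.IH[OF ok P'])
    then show ?thesis using Meas by simp
  qed
qed


lemma eigvec_zero_if_anticommute:
  fixes H A :: "complex mat"
  assumes H: "H \<in> carrier_mat (2^n) (2^n)" and A: "A \<in> carrier_mat (2^n) (2^n)"
    and anti: "H * A = (-1) \<cdot>\<^sub>m (A * H)" and \<phi>: "\<phi> \<in> carrier_vec (2^n)"
    and H_\<phi>: "H *\<^sub>v \<phi> = s \<cdot>\<^sub>v \<phi>" and A_\<phi>: "A *\<^sub>v \<phi> = e \<cdot>\<^sub>v \<phi>" and "s \<noteq> 0" "e \<noteq> 0"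
  shows "\<phi> = 0\<^sub>v (2^n)"
proof -
  have "(e * s) \<cdot>\<^sub>v \<phi> = (H * A) *\<^sub>v \<phi>"
    using H A \<phi> by (simp add: sq_mv_assoc A_\<phi> sq_mv_smult H_\<phi> smult_smult_assoc)
  also have "\<dots> = (- (s * e)) \<cdot>\<^sub>v \<phi>"
    unfolding anti using H A \<phi> by (simp add: sq_smult_mv sq_mv_assoc H_\<phi> sq_mv_smult A_\<phi> smult_smult_assoc)
  finally have eq: "(e * s) \<cdot>\<^sub>v \<phi> = (- (s * e)) \<cdot>\<^sub>v \<phi>" .
  have "(2 * e * s) \<cdot>\<^sub>v \<phi> = 0\<^sub>v (2^n)"
  proof (rule eq_vecI)
    fix i assume i: "i < dim_vec (0\<^sub>v (2^n) :: complex vec)"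
    have "(e * s) * \<phi> $ i = (- (s * e)) * \<phi> $ i"
      using arg_cong[OF eq, of "\<lambda>v. v $ i"] i \<phi> by simp
    then show "((2 * e * s) \<cdot>\<^sub>v \<phi>) $ i = 0\<^sub>v (2^n) $ i" using i \<phi> by (simp add: algebra_simps)
  qed (use \<phi> in simp)
  moreover have "2 * e * s \<noteq> 0" using assms by simp
  ultimately show ?thesis using smult_vec_eq_zeroD[OF \<phi>] by blast
qed

text \<open>The state after the measurement is an eigenvector of the measured Pauli, which
  anticommutes with the detector matrix; hence it has nonzero components in both eigenspaces of the
  detector matrix, and each of them produces one parity.\<close>

lemma run_nonzero_with_parity_if_anticommute:
  assumes ok: "ops_ok n rest" and P': "propagate n u rest (Suc j) pone = Some P'"
    and Sp: "is_pauli n (snd S)" and anti: "\<not> pcommute (snd S) P'"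
    and \<phi>: "\<phi> \<in> carrier_vec (2^n)" "\<phi> \<noteq> 0\<^sub>v (2^n)"
    and H_\<phi>: "herm_pauli_mat n S *\<^sub>v \<phi> = sign_of c \<cdot>\<^sub>v \<phi>"
  shows "\<exists>w. run n w (Suc j) rest \<phi> \<noteq> 0\<^sub>v (2^n) \<and> odd (outcome_count w u (Suc j) rest) = b"
proof -
  let ?A = "detector_mat n u rest (Suc j)" and ?H = "herm_pauli_mat n S"
  obtain a where IH: "is_pauli n P'" "?A = a \<cdot>\<^sub>m pauli_mat n P'" and AA: "?A * ?A = 1\<^sub>m (2^n)"
    using detector_mat_propagate[OF ok P'] by blast
  have Ac: "?A \<in> carrier_mat (2^n) (2^n)" using ok by simp
  have HA: "?H * ?A = (-1) \<cdot>\<^sub>m (?A * ?H)"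
    unfolding herm_pauli_mat_def IH(2) smult_pauli_mat_commute[OF Sp IH(1)] using anti by simp
  define \<phi>x where "\<phi>x = eig_proj ?A (sign_of b) *\<^sub>v \<phi>"
  define \<phi>y where "\<phi>y = eig_proj ?A (sign_of (\<not> b)) *\<^sub>v \<phi>"
  have split: "\<phi> = \<phi>x + \<phi>y"
    unfolding \<phi>x_def \<phi>y_def sign_of_not[symmetric] by (rule eig_proj_split[OF Ac \<phi>(1)])
  have x: "\<phi>x \<in> carrier_vec (2^n)" and y: "\<phi>y \<in> carrier_vec (2^n)"
    unfolding \<phi>x_def \<phi>y_def using Ac \<phi> by simp_all
  have A_x: "?A *\<^sub>v \<phi>x = sign_of b \<cdot>\<^sub>v \<phi>x" and A_y: "?A *\<^sub>v \<phi>y = sign_of (\<not> b) \<cdot>\<^sub>v \<phi>y"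
    unfolding \<phi>x_def \<phi>y_def using eig_proj_eigvec[OF Ac AA \<phi>(1)] by blast+
  have "\<phi>x \<noteq> 0\<^sub>v (2^n)"
  proof
    assume "\<phi>x = 0\<^sub>v (2^n)"
    then have "?A *\<^sub>v \<phi> = sign_of (\<not> b) \<cdot>\<^sub>v \<phi>" using split y A_y by simp
    then have "\<phi> = 0\<^sub>v (2^n)"
      by (rule eigvec_zero_if_anticommute[OF herm_pauli_mat_carrier Ac HA \<phi>(1) H_\<phi>]) simp_all
    then show False using \<phi>(2) by contradiction
  qed
  then obtain w where w: "run n w (Suc j) rest \<phi>x \<noteq> 0\<^sub>v (2^n)"
    using run_nonzero_exists[OF ok x] by blast
  have parity: "odd (outcome_count w u (Suc j) rest) = b"
    using run_eq_zero_if_parity_differs[OF ok P' x A_x] w by blast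
  have "run n w (Suc j) rest \<phi>y = 0\<^sub>v (2^n)"
    by (rule run_eq_zero_if_parity_differs[OF ok P' y A_y]) (use parity in simp)
  then have "run n w (Suc j) rest \<phi> = run n w (Suc j) rest \<phi>x"
    unfolding split using run_add[OF ok x y] run_carrier[OF ok x] by simp
  then show ?thesis using w parity by metis
qed

lemma run_nonzero_with_parity_if_propagate_None:
  assumes "ops_ok n os" "propagate n u os j pone = None" "\<psi> \<in> carrier_vec (2^n)" "\<psi> \<noteq> 0\<^sub>v (2^n)"
  shows "\<exists>w. run n w j os \<psi> \<noteq> 0\<^sub>v (2^n) \<and> odd (outcome_count w u j os) = b"
  using assms
proof (induction os arbitrary: j \<psi> b)
  case (Cons x rest)
  show ?case
  proof (cases x)
    case (Gate l U)
    then have U: "clifford n U" and ok: "ops_ok n rest" using Cons.prems by auto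
    have "U *\<^sub>v \<psi> \<noteq> 0\<^sub>v (2^n)" by (rule clifford_mult_vec_nonzero[OF U Cons.prems(3,4)])
    then show ?thesis using Cons.IH[OF ok, of j "U *\<^sub>v \<psi>" b] Cons.prems U Gate by auto
  next
    case (Meas l S)
    then have Sp: "is_pauli n (snd S)" and ok: "ops_ok n rest" using Cons.prems by auto
    let ?H = "herm_pauli_mat n S"
    obtain c where c: "eig_proj ?H (sign_of c) *\<^sub>v \<psi> \<noteq> 0\<^sub>v (2^n)"
      using eig_proj_nonzero[OF herm_pauli_mat_carrier Cons.prems(3,4)] by blast
    define \<phi> where "\<phi> = eig_proj ?H (sign_of c) *\<^sub>v \<psi>"
    have \<phi>: "\<phi> \<in> carrier_vec (2^n)" "\<phi> \<noteq> 0\<^sub>v (2^n)" unfolding \<phi>_def using c Cons.prems by auto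
    have H_\<phi>: "?H *\<^sub>v \<phi> = sign_of c \<cdot>\<^sub>v \<phi>"
      unfolding \<phi>_def by (rule eig_proj_eigvec[OF _ herm_pauli_mat_square[OF Sp] Cons.prems(3)]) simp
    define b' where "b' = (b \<noteq> (c \<and> j \<in> u))"
    have "\<exists>w. run n w (Suc j) rest \<phi> \<noteq> 0\<^sub>v (2^n) \<and> odd (outcome_count w u (Suc j) rest) = b'"
    proof (cases "propagate n u rest (Suc j) pone")
      case None
      then show ?thesis using Cons.IH[OF ok None \<phi>] by blast
    next
      case (Some P')
      then have "\<not> pcommute (snd S) P'" using Cons.prems Meas by (auto split: if_splits)
      then show ?thesis by (rule run_nonzero_with_parity_if_anticommute[OF ok Some Sp _ \<phi> H_\<phi>])
    qed
    then obtain w where "run n w (Suc j) rest \<phi> \<noteq> 0\<^sub>v (2^n)" "odd (outcome_count w u (Suc j) rest) = b'"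
      by blast
    then show ?thesis
      using run_Meas_choose_outcome[where b = c and j = j and w = w] Meas unfolding \<phi>_def b'_def
      by (intro exI[of _ "if c then insert j w else w - {j}"]) auto
  qed
qed simp

lemma exists_neg_eigvec:
  assumes A: "A \<in> carrier_mat (2^n) (2^n)" and AA: "A * A = 1\<^sub>m (2^n)" and ne: "A \<noteq> 1\<^sub>m (2^n)"
  obtains \<psi> where "\<psi> \<in> carrier_vec (2^n)" "\<psi> \<noteq> 0\<^sub>v (2^n)" "A *\<^sub>v \<psi> = sign_of True \<cdot>\<^sub>v \<psi>"
proof -
  let ?P = "eig_proj A (sign_of True)"
  have "\<exists>k<2^n. ?P *\<^sub>v unit_vec (2^n) k \<noteq> 0\<^sub>v (2^n)"
  proof (rule ccontr)
    assume "\<not> (\<exists>k<2^n. ?P *\<^sub>v unit_vec (2^n) k \<noteq> 0\<^sub>v (2^n))"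
    then have zero: "?P *\<^sub>v unit_vec (2^n) k = 0\<^sub>v (2^n)" if "k < 2^n" for k
      using that by blast
    have "A = 1\<^sub>m (2^n)"
    proof (rule eq_matI)
      fix i k assume "i < dim_row (1\<^sub>m (2^n) :: complex mat)" "k < dim_col (1\<^sub>m (2^n) :: complex mat)"
      then have i: "i < 2^n" and k: "k < 2^n" by simp_all
      have "?P $$ (i, k) = 0"
        using mult_mat_unit_vec_index[of ?P "2^n" i k] zero[OF k] A i k by simp
      then show "A $$ (i, k) = 1\<^sub>m (2^n) $$ (i, k)"
        using i k A by (auto simp: eig_proj_def sign_of_def split: if_splits)
    qed (use A in auto)
    with ne show False by contradiction
  qed
  then obtain k where k: "k < 2^n" and nz: "?P *\<^sub>v unit_vec (2^n) k \<noteq> 0\<^sub>v (2^n)" by blast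
  show ?thesis
    by (rule that[of "?P *\<^sub>v unit_vec (2^n) k"])
       (use A k nz eig_proj_eigvec[OF A AA, of "unit_vec (2^n) k" True] in simp_all)
qed

text \<open>Otherwise either the propagation fails, and then both parities occur, or the detector
  matrix is a nontrivial involution, and a state in its (-1)-eigenspace produces odd parity.\<close>

lemma propagate_pone_if_orthogonal:
  assumes ok: "ops_ok n os"
    and orth: "\<And>w \<psi>. w \<subseteq> {..<meas_count os} \<Longrightarrow> \<psi> \<in> carrier_vec (2^n) \<Longrightarrow> \<psi> \<noteq> 0\<^sub>v (2^n) \<Longrightarrow>
                 run n w 0 os \<psi> \<noteq> 0\<^sub>v (2^n) \<Longrightarrow> even (card (u \<inter> w))"
  shows "propagate n u os 0 pone = Some pone"
proof -
  have no_odd: False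
    if w: "run n w 0 os \<psi> \<noteq> 0\<^sub>v (2^n)" "odd (outcome_count w u 0 os)" and \<psi>: "\<psi> \<in> carrier_vec (2^n)"
    for w \<psi>
  proof -
    define w0 where "w0 = w \<inter> {..<meas_count os}"
    have "run n w0 0 os \<psi> = run n w 0 os \<psi>" unfolding w0_def by (rule run_cong) auto
    moreover have "\<psi> \<noteq> 0\<^sub>v (2^n)" using w run_zero[OF ok] by auto
    ultimately have "even (card (u \<inter> w0))" using orth[of w0 \<psi>] w \<psi> unfolding w0_def by auto
    moreover have "u \<inter> w0 = w \<inter> u \<inter> {0..<0 + meas_count os}" unfolding w0_def by auto
    ultimately show False using w(2) unfolding outcome_count_def by simp
  qed
  have e0: "unit_vec (2^n) 0 \<in> carrier_vec (2^n)" "unit_vec (2^n) 0 \<noteq> (0\<^sub>v (2^n) :: complex vec)"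
    by simp_all
  show ?thesis
  proof (cases "propagate n u os 0 pone")
    case None
    then show ?thesis
      using run_nonzero_with_parity_if_propagate_None[OF ok None e0, of True] no_odd[OF _ _ e0(1)] by blast
  next
    case (Some P)
    obtain c where P: "is_pauli n P" "detector_mat n u os 0 = c \<cdot>\<^sub>m pauli_mat n P"
      and AA: "detector_mat n u os 0 * detector_mat n u os 0 = 1\<^sub>m (2^n)"
      using detector_mat_propagate[OF ok Some] by blast
    have "detector_mat n u os 0 = 1\<^sub>m (2^n)"
    proof (rule ccontr)
      assume "detector_mat n u os 0 \<noteq> 1\<^sub>m (2^n)"
      then obtain \<psi> where \<psi>: "\<psi> \<in> carrier_vec (2^n)" "\<psi> \<noteq> 0\<^sub>v (2^n)"
        "detector_mat n u os 0 *\<^sub>v \<psi> = sign_of True \<cdot>\<^sub>v \<psi>"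
        using exists_neg_eigvec[OF detector_mat_carrier[OF ok] AA] by blast
      obtain w where w: "run n w 0 os \<psi> \<noteq> 0\<^sub>v (2^n)" using run_nonzero_exists[OF ok \<psi>(1,2)] by blast
      then have "odd (outcome_count w u 0 os)"
        using run_eq_zero_if_parity_differs[OF ok Some \<psi>(1) \<psi>(3)] by blast
      then show False using no_odd[OF w _ \<psi>(1)] by blast
    qed
    then have "1 \<cdot>\<^sub>m pauli_mat n pone = c \<cdot>\<^sub>m pauli_mat n P" using P(2) by (simp add: pauli_mat_pone)
    then have "pone = P" by (rule conjunct1[OF pauli_mat_smult_inj[OF is_pauli_pone P(1)]]) simp
    then show ?thesis using Some by simp
  qed
qed

text \<open>The sign of the detector matrix c * I is fixed by the all-zero record, which is assumed to
  be possible.\<close>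

lemma even_outcome_count_if_propagate_pone:
  assumes ok: "ops_ok n os" and propagates: "propagate n u os 0 pone = Some pone"
    and zero: "\<psi>0 \<in> carrier_vec (2^n)" "run n {} 0 os \<psi>0 \<noteq> 0\<^sub>v (2^n)"
    and w: "\<psi> \<in> carrier_vec (2^n)" "run n w 0 os \<psi> \<noteq> 0\<^sub>v (2^n)"
  shows "even (outcome_count w u 0 os)"
proof -
  obtain c where c: "detector_mat n u os 0 = c \<cdot>\<^sub>m 1\<^sub>m (2^n)"
    and AA: "detector_mat n u os 0 * detector_mat n u os 0 = 1\<^sub>m (2^n)"
    using detector_mat_propagate[OF ok propagates] by (auto simp: pauli_mat_pone)
  have "((c * c) \<cdot>\<^sub>m 1\<^sub>m (2^n)) $$ (0, 0) = (1\<^sub>m (2^n) :: complex mat) $$ (0, 0)"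
    using AA unfolding c by (simp add: sq_smult_l sq_smult_r)
  then have "c * c = 1" by simp
  then obtain d where d: "c = sign_of d" unfolding sign_of_def
    by (metis (full_types) square_eq_1_iff power2_eq_square)
  have eig: "detector_mat n u os 0 *\<^sub>v \<phi> = sign_of d \<cdot>\<^sub>v \<phi>" if "\<phi> \<in> carrier_vec (2^n)" for \<phi>
    unfolding c d using that by (simp add: sq_smult_mv)
  have "\<not> d"
    using run_eq_zero_if_parity_differs[OF ok propagates zero(1) eig[OF zero(1)], of "{}"] zero(2)
    by (auto simp: outcome_count_def)
  then show ?thesis
    using run_eq_zero_if_parity_differs[OF ok propagates w(1) eig[OF w(1)], of w] w(2) by auto
qed

end

section \<open>Levels of a circuit and the back-cumulant\<close>

definition level_unitary_ops :: "nat \<Rightarrow> nat \<Rightarrow> operation list \<Rightarrow> complex mat" where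
  "level_unitary_ops n l os = foldr (\<lambda>w M. case w of Gate l' U \<Rightarrow> (if l' = l then M * U else M) | Meas _ _ \<Rightarrow> M)
     os (1\<^sub>m (2 ^ n))"

lemma level_unitary_ops_simps [simp]:
  "level_unitary_ops n l [] = 1\<^sub>m (2 ^ n)"
  "level_unitary_ops n l (Gate l' U # os) = (if l' = l then level_unitary_ops n l os * U else level_unitary_ops n l os)"
  "level_unitary_ops n l (Meas l' S # os) = level_unitary_ops n l os"
  by (simp_all add: level_unitary_ops_def)

lemma level_unitary_eq_ops: "level_unitary C l = level_unitary_ops (nqubits C) l (ops C)"
  by (simp add: level_unitary_def level_unitary_ops_def)

lemma clifford_level_unitary_ops: "ops_ok n os \<Longrightarrow> clifford n (level_unitary_ops n l os)"
proof (induction os)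
  case (Cons x os) then show ?case by (cases x) (auto intro: clifford_mult)
qed (simp add: clifford_one)

lemma level_unitary_ops_filter:
  "level_unitary_ops n l os = level_unitary_ops n l (filter (\<lambda>w. op_level w = l) os)"
proof (induction os)
  case (Cons x os) then show ?case by (cases x) auto
qed simp

fun level_meas_prod :: "nat set \<Rightarrow> operation list \<Rightarrow> nat \<Rightarrow> nat \<Rightarrow> pauli" where
  "level_meas_prod u [] j k = pone"
| "level_meas_prod u (Gate l U # r) j k = level_meas_prod u r j k"
| "level_meas_prod u (Meas l S # r) j k =
     pmul (if j \<in> u \<and> l - 1 = k then snd S else pone) (level_meas_prod u r (Suc j) k)"

lemma is_pauli_level_meas_prod: "ops_ok n os \<Longrightarrow> is_pauli n (level_meas_prod u os j k)"
  by (induction u os j k rule: level_meas_prod.induct) auto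

lemma psupp_level_meas_prod:
  "psupp (level_meas_prod u os j k) \<subseteq> (\<Union>w\<in>{w\<in>set os. is_meas w}. psupp (snd (meas_pauli w)))"
proof (induction u os j k rule: level_meas_prod.induct)
  case (3 u l S r j k)
  let ?X = "\<Union>w\<in>{w\<in>set (Meas l S # r). is_meas w}. psupp (snd (meas_pauli w))"
  have "psupp (snd (meas_pauli (Meas l S))) \<subseteq> ?X" by (rule UN_upper) simp
  then have "psupp (if j \<in> u \<and> l - 1 = k then snd S else pone) \<subseteq> ?X" by auto
  moreover have "psupp (level_meas_prod u r (Suc j) k) \<subseteq> ?X" using 3 by auto
  ultimately have "psupp (if j \<in> u \<and> l - 1 = k then snd S else pone) \<union>
      psupp (level_meas_prod u r (Suc j) k) \<subseteq> ?X" by (rule Un_least)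
  moreover have "psupp (level_meas_prod u (Meas l S # r) j k) \<subseteq>
      psupp (if j \<in> u \<and> l - 1 = k then snd S else pone) \<union> psupp (level_meas_prod u r (Suc j) k)"
    unfolding level_meas_prod.simps by (rule psupp_pmul)
  ultimately show ?case by (rule order_trans[rotated])
qed auto

lemma level_meas_prod_append:
  "level_meas_prod u (xs @ ys) j k = pmul (level_meas_prod u xs j k) (level_meas_prod u ys (j + meas_count xs) k)"
  by (induction u xs j k rule: level_meas_prod.induct) (simp_all add: pmul_assoc)

lemma level_meas_prod_eq_pone:
  "\<forall>w\<in>set xs. is_meas w \<longrightarrow> op_level w - 1 \<noteq> k \<Longrightarrow> level_meas_prod u xs j k = pone"
  by (induction u xs j k rule: level_meas_prod.induct) simp_all

lemma foldr_pmul_meas_terms: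
  "foldr pmul (map (\<lambda>i. if i \<in> u \<and> op_level (filter is_meas os ! (i - j)) - 1 = k
        then snd (meas_pauli (filter is_meas os ! (i - j))) else pone) [j..<j + meas_count os]) pone
   = level_meas_prod u os j k"
proof (induction os arbitrary: j)
  case (Cons x os)
  show ?case
  proof (cases x)
    case (Gate l U) then show ?thesis using Cons by (simp add: meas_count_def cong: if_cong)
  next
    case (Meas l S)
    define f where "f = (\<lambda>i. if i \<in> u \<and> op_level (filter is_meas (x # os) ! (i - j)) - 1 = k
        then snd (meas_pauli (filter is_meas (x # os) ! (i - j))) else pone)"
    define g where "g = (\<lambda>i. if i \<in> u \<and> op_level (filter is_meas os ! (i - Suc j)) - 1 = k
        then snd (meas_pauli (filter is_meas os ! (i - Suc j))) else pone)"
    have ups: "[j..<j + meas_count (x # os)] = j # [Suc j..<Suc j + meas_count os]"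
      using Meas by (simp add: upt_rec)
    have m: "map f [Suc j..<Suc j + meas_count os] = map g [Suc j..<Suc j + meas_count os]"
    proof (rule map_cong[OF refl])
      fix i assume "i \<in> set [Suc j..<Suc j + meas_count os]"
      then have "i - j = Suc (i - Suc j)" by auto
      then show "f i = g i" unfolding f_def g_def using Meas by simp
    qed
    have fj: "f j = (if j \<in> u \<and> l - 1 = k then snd S else pone)" unfolding f_def using Meas by simp
    have "foldr pmul (map f [j..<j + meas_count (x # os)]) pone =
        pmul (f j) (foldr pmul (map g [Suc j..<Suc j + meas_count os]) pone)"
      unfolding ups m[symmetric] by simp
    also have "\<dots> = level_meas_prod u (x # os) j k" unfolding fj g_def Cons[of "Suc j"] using Meas by simp
    finally show ?thesis unfolding f_def .
  qed
qed simp

lemma F_of_eq_level_meas_prod: "F_of C u k = level_meas_prod u (ops C) 0 k"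
  using foldr_pmul_meas_terms[of u "ops C" 0 k]
  by (simp add: F_of_def meas_level_def meas_S_def meas_ops_def nmeas_def meas_count_def cong: if_cong)

definition disjoint_ops :: "nat \<Rightarrow> operation list \<Rightarrow> bool" where
  "disjoint_ops n os \<longleftrightarrow> sorted_wrt (\<lambda>a b. op_supp n a \<inter> op_supp n b = {}) os"

definition commutes_with_meas :: "operation list \<Rightarrow> pauli \<Rightarrow> bool" where
  "commutes_with_meas os Y \<longleftrightarrow> (\<forall>w\<in>set os. is_meas w \<longrightarrow> pcommute (snd (meas_pauli w)) Y)"

lemma propagate_append:
  "propagate n u (xs @ ys) j P0 = Option.bind (propagate n u ys (j + meas_count xs) P0) (propagate n u xs j)"
proof (induction xs arbitrary: j)
  case Nil then show ?case by (cases "propagate n u ys j P0") simp_all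
next
  case (Cons x xs)
  show ?case
  proof (cases x)
    case (Gate l U)
    then show ?thesis using Cons by (cases "propagate n u ys (j + meas_count xs) P0") simp_all
  next
    case (Meas l S)
    then show ?thesis using Cons[of "Suc j"] by (cases "propagate n u ys (Suc j + meas_count xs) P0") simp_all
  qed
qed

lemma commutes_with_meas_conj_mod_phase:
  assumes U: "clifford n U" and ok: "ops_ok n os" and Y: "is_pauli n Y"
    and disj: "\<And>w. w \<in> set os \<Longrightarrow> is_meas w \<Longrightarrow> psupp (snd (meas_pauli w)) \<inter> mat_supp n U = {}"
  shows "commutes_with_meas os (conj_mod_phase n U Y) \<longleftrightarrow> commutes_with_meas os Y"
proof -
  have "pcommute (snd (meas_pauli w)) (conj_mod_phase n U Y) \<longleftrightarrow> pcommute (snd (meas_pauli w)) Y"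
    if w: "w \<in> set os" "is_meas w" for w
  proof -
    have M: "is_pauli n (snd (meas_pauli w))" using ok w by (cases w) (auto simp: ops_ok_def)
    then have "conj_mod_phase n U (snd (meas_pauli w)) = snd (meas_pauli w)"
      using conj_mod_phase_disjoint[OF U] disj[OF w] by blast
    then show ?thesis using pcommute_conj_mod_phase[OF U M Y] by simp
  qed
  then show ?thesis unfolding commutes_with_meas_def by auto
qed

text \<open>Within one level the operations have disjoint supports, so propagating backwards through
  them amounts to conjugating by the level unitary, checking all measurements of the level at once,
  and multiplying by their selected product.\<close>

lemma propagate_level_block:
  assumes "ops_ok n blk" "\<forall>w\<in>set blk. op_level w = Suc k" "disjoint_ops n blk" "is_pauli n X"
  shows "propagate n u blk j X =
    (if commutes_with_meas blk (conj_mod_phase n (level_unitary_ops n (Suc k) blk) X)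
     then Some (pmul (level_meas_prod u blk j k) (conj_mod_phase n (level_unitary_ops n (Suc k) blk) X))
     else None)"
  using assms
proof (induction blk arbitrary: j)
  case Nil then show ?case by (simp add: commutes_with_meas_def conj_mod_phase_one)
next
  case (Cons x r)
  have ok: "ops_ok n r" and lv: "\<forall>w\<in>set r. op_level w = Suc k" and dj: "disjoint_ops n r"
    and djx: "\<forall>w\<in>set r. op_supp n x \<inter> op_supp n w = {}"
    using Cons.prems by (auto simp: disjoint_ops_def ops_ok_def)
  have luc: "clifford n (level_unitary_ops n (Suc k) r)" using clifford_level_unitary_ops[OF ok] .
  define Y where "Y = conj_mod_phase n (level_unitary_ops n (Suc k) r) X"
  have Yp: "is_pauli n Y" unfolding Y_def using luc Cons.prems(4) by simp
  have IH: "propagate n u r j' X =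
      (if commutes_with_meas r Y then Some (pmul (level_meas_prod u r j' k) Y) else None)" for j'
    unfolding Y_def by (rule Cons.IH[OF ok lv dj Cons.prems(4)])
  have meas_disj: "psupp (snd (meas_pauli w)) \<inter> op_supp n x = {}" if "w \<in> set r" "is_meas w" for w
    using djx that by (cases w) force+
  have prod_disj: "psupp (level_meas_prod u r j' k) \<inter> op_supp n x = {}" for j'
    using psupp_level_meas_prod[of u r j' k] meas_disj by blast
  show ?case
  proof (cases x)
    case (Gate l' U)
    then have U: "clifford n U" and l': "l' = Suc k" using Cons.prems by auto
    have "conj_mod_phase n (level_unitary_ops n (Suc k) (x # r)) X = conj_mod_phase n U Y"
      using Gate l' conj_mod_phase_mult[OF luc U Cons.prems(4)] unfolding Y_def by simp
    moreover have "commutes_with_meas r (conj_mod_phase n U Y) \<longleftrightarrow> commutes_with_meas r Y"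
      using commutes_with_meas_conj_mod_phase[OF U ok Yp] meas_disj Gate by auto
    moreover have "conj_mod_phase n U (level_meas_prod u r j k) = level_meas_prod u r j k"
      using conj_mod_phase_disjoint[OF U is_pauli_level_meas_prod[OF ok]] prod_disj Gate by simp
    ultimately show ?thesis
      using Gate IH conj_mod_phase_pmul[OF U is_pauli_level_meas_prod[OF ok] Yp]
      by (simp add: commutes_with_meas_def)
  next
    case (Meas l' S)
    then have Sp: "is_pauli n (snd S)" and l': "l' = Suc k" using Cons.prems by auto
    have "pcommute (snd S) (level_meas_prod u r (Suc j) k)"
      using prod_disj Meas by (intro pcommute_if_disjoint) auto
    then have "pcommute (snd S) (pmul (level_meas_prod u r (Suc j) k) Y) \<longleftrightarrow> pcommute (snd S) Y"
      using pcommute_pmul[OF Sp is_pauli_level_meas_prod[OF ok] Yp] by simp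
    then show ?thesis
      using Meas l' IH[of "Suc j"] unfolding Y_def by (auto simp: commutes_with_meas_def pmul_assoc)
  qed
qed

lemma sorted_filter_le_append_filter_gt:
  "sorted (map f xs) \<Longrightarrow> filter (\<lambda>x. f x \<le> k) xs @ filter (\<lambda>x. k < (f x :: nat)) xs = xs"
proof (induction xs)
  case (Cons x xs)
  show ?case
  proof (cases "f x \<le> k")
    case False
    then have "\<forall>y\<in>set xs. k < f y" using Cons.prems by auto
    then have "filter (\<lambda>x. f x \<le> k) xs = []" "filter (\<lambda>x. k < f x) xs = xs"
      by (auto simp: filter_empty_conv filter_id_conv)
    then show ?thesis using False by simp
  qed (use Cons in auto)
qed simp

lemma sorted_filter_gt_eq:
  "sorted (map f xs) \<Longrightarrow>
    filter (\<lambda>x. k < (f x :: nat)) xs = filter (\<lambda>x. f x = Suc k) xs @ filter (\<lambda>x. Suc k < f x) xs"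
proof (induction xs)
  case (Cons x xs)
  show ?case
  proof (cases "Suc k < f x")
    case True
    then have "\<forall>y\<in>set xs. Suc k < f y" using Cons.prems by fastforce
    then have "filter (\<lambda>x. f x = Suc k) xs = []" "filter (\<lambda>x. Suc k < f x) xs = xs"
      "filter (\<lambda>x. k < f x) xs = xs"
      by (auto simp: filter_empty_conv filter_id_conv)
    then show ?thesis using True by simp
  qed (use Cons in auto)
qed simp

lemma sorted_filter_le_Suc_eq:
  "sorted (map f xs) \<Longrightarrow>
    filter (\<lambda>x. (f x :: nat) \<le> Suc k) xs = filter (\<lambda>x. f x \<le> k) xs @ filter (\<lambda>x. f x = Suc k) xs"
proof (induction xs)
  case (Cons x xs)
  show ?case
  proof (cases "f x \<le> k")
    case False
    then have "\<forall>y\<in>set xs. k < f y" using Cons.prems by fastforce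
    then have "filter (\<lambda>x. f x \<le> k) xs = []" by (auto simp: filter_empty_conv)
    moreover have "filter (\<lambda>x. f x \<le> Suc k) xs = filter (\<lambda>x. f x = Suc k) xs"
      by (rule filter_cong) (use \<open>\<forall>y\<in>set xs. k < f y\<close> in auto)
    ultimately show ?thesis using False Cons by auto
  qed (use Cons in auto)
qed simp

lemma level_le_depth: "w \<in> set (ops C) \<Longrightarrow> op_level w \<le> depth C"
proof -
  have "x \<in> set xs \<Longrightarrow> (x::nat) \<le> foldr max xs 0" for x xs by (induction xs) auto
  then show "w \<in> set (ops C) \<Longrightarrow> op_level w \<le> depth C" unfolding depth_def by simp
qed

lemma clifford_circuit_ops_ok: "clifford_circuit C \<Longrightarrow> ops_ok (nqubits C) (ops C)"
  and clifford_circuit_level_pos: "clifford_circuit C \<Longrightarrow> w \<in> set (ops C) \<Longrightarrow> 1 \<le> op_level w"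
  and clifford_circuit_sorted: "clifford_circuit C \<Longrightarrow> sorted (map op_level (ops C))"
  by (simp_all add: clifford_circuit_def ops_ok_def)

lemma clifford_circuit_level_disjoint:
  assumes C: "clifford_circuit C"
  shows "disjoint_ops (nqubits C) (filter (\<lambda>w. op_level w = l) (ops C))"
proof -
  let ?R = "\<lambda>a b. op_level a = l \<longrightarrow> op_level b = l \<longrightarrow> op_supp (nqubits C) a \<inter> op_supp (nqubits C) b = {}"
  have "sorted_wrt ?R (ops C)"
    using C unfolding sorted_wrt_iff_nth_less clifford_circuit_def by auto
  then have "sorted_wrt ?R (filter (\<lambda>w. op_level w = l) (ops C))" by (rule sorted_wrt_filter)
  then show ?thesis unfolding disjoint_ops_def by (rule sorted_wrt_mono_rel[rotated]) auto
qed

lemma clifford_level_unitary: "clifford_circuit C \<Longrightarrow> clifford (nqubits C) (level_unitary C l)"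
  unfolding level_unitary_eq_ops by (rule clifford_level_unitary_ops[OF clifford_circuit_ops_ok])

lemma is_pauli_F_of: "clifford_circuit C \<Longrightarrow> is_pauli (nqubits C) (F_of C u k)"
  unfolding F_of_eq_level_meas_prod by (rule is_pauli_level_meas_prod[OF clifford_circuit_ops_ok])

lemma F_of_ge_depth:
  assumes C: "clifford_circuit C" and k: "depth C \<le> k"
  shows "F_of C u k = pone"
  unfolding F_of_eq_level_meas_prod
proof (rule level_meas_prod_eq_pone)
  have "\<forall>w\<in>set (ops C). op_level w \<le> depth C \<and> 1 \<le> op_level w"
    using level_le_depth[of _ C] clifford_circuit_level_pos[OF C] by blast
  then show "\<forall>w\<in>set (ops C). is_meas w \<longrightarrow> op_level w - 1 \<noteq> k" using k by fastforce
qed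

lemma F_of_eq_level_block:
  assumes C: "clifford_circuit C"
  shows "F_of C u k = level_meas_prod u (filter (\<lambda>w. op_level w = Suc k) (ops C))
      (meas_count (filter (\<lambda>w. op_level w \<le> k) (ops C))) k"
proof -
  let ?os = "ops C"
  have s: "sorted (map op_level ?os)" by (rule clifford_circuit_sorted[OF C])
  have split: "?os = filter (\<lambda>w. op_level w \<le> k) ?os @ filter (\<lambda>w. op_level w = Suc k) ?os @
      filter (\<lambda>w. Suc k < op_level w) ?os"
    using sorted_filter_le_append_filter_gt[OF s, of k] sorted_filter_gt_eq[OF s, of k] by simp
  have below: "level_meas_prod u (filter (\<lambda>w. op_level w \<le> k) ?os) 0 k = pone"
    by (rule level_meas_prod_eq_pone) (use clifford_circuit_level_pos[OF C] in fastforce)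
  have above: "level_meas_prod u (filter (\<lambda>w. Suc k < op_level w) ?os) j k = pone" for j
    by (rule level_meas_prod_eq_pone) auto
  show ?thesis
    unfolding F_of_eq_level_meas_prod by (subst split) (simp add: level_meas_prod_append below above)
qed

lemma back_cumulant_depth: "back_cumulant C F (depth C) = F (depth C)"
  by (simp add: back_cumulant_def)

lemma back_cumulant_beyond_depth: "depth C < k \<Longrightarrow> back_cumulant C F k = pone"
  by (simp add: back_cumulant_def)

lemma back_cumulant_less_depth:
  assumes k: "k < depth C"
  shows "back_cumulant C F k =
    pmul (F k) (conj_mod_phase (nqubits C) (level_unitary C (Suc k)) (back_cumulant C F (Suc k)))"
proof -
  have "depth C - k = Suc (depth C - Suc k)" "depth C - Suc (depth C - Suc k) = k"
    "depth C - (depth C - Suc k) = Suc k" using k by auto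
  then show ?thesis using k by (simp add: back_cumulant_def)
qed

lemma is_pauli_bc:
  assumes C: "clifford_circuit C" and F: "\<And>k. is_pauli (nqubits C) (F k)"
  shows "is_pauli (nqubits C) (bc C F i)"
  by (induction i) (simp_all add: F clifford_level_unitary[OF C])

lemma bc_fmul:
  assumes C: "clifford_circuit C" and F: "\<And>k. is_pauli (nqubits C) (F k)"
    and G: "\<And>k. is_pauli (nqubits C) (G k)"
  shows "bc C (fmul F G) i = pmul (bc C F i) (bc C G i)"
proof (induction i)
  case (Suc i)
  have U: "clifford (nqubits C) (level_unitary C (depth C - i))" by (rule clifford_level_unitary[OF C])
  show ?case using Suc conj_mod_phase_pmul[OF U is_pauli_bc[OF C F] is_pauli_bc[OF C G]]
    by (simp add: fmul_def pmul_pmul_swap)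
qed (simp add: fmul_def)

abbreviation stab :: "circuit \<Rightarrow> nat set \<Rightarrow> fault" where
  "stab C u \<equiv> back_cumulant C (F_of C u)"

lemma is_pauli_stab: "clifford_circuit C \<Longrightarrow> is_pauli (nqubits C) (stab C u k)"
  unfolding back_cumulant_def using is_pauli_bc[of C "F_of C u"] is_pauli_F_of by auto

lemma stab_ge_depth:
  assumes C: "clifford_circuit C" and k: "depth C \<le> k"
  shows "stab C u k = pone"
proof (cases "k = depth C")
  case True then show ?thesis using back_cumulant_depth[of C] F_of_ge_depth[OF C] by simp
qed (use k back_cumulant_beyond_depth in simp)

lemma F_of_symdiff: "F_of C (symdiff u v) k = pmul (F_of C u k) (F_of C v k)"
proof -
  have foldr_pmul_map: "foldr pmul (map (\<lambda>j. pmul (a j) (b j)) xs) pone =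
      pmul (foldr pmul (map a xs) pone) (foldr pmul (map b xs) pone)" for a b :: "nat \<Rightarrow> pauli" and xs
    by (induction xs) (simp_all add: pmul_pmul_swap)
  have "(if j \<in> symdiff u v \<and> meas_level C j - 1 = k then snd (meas_S C j) else pone) =
        pmul (if j \<in> u \<and> meas_level C j - 1 = k then snd (meas_S C j) else pone)
             (if j \<in> v \<and> meas_level C j - 1 = k then snd (meas_S C j) else pone)" for j
    by (auto simp: symdiff_def)
  then show ?thesis unfolding F_of_def foldr_pmul_map[symmetric] by (simp only:)
qed

lemma stab_symdiff:
  assumes C: "clifford_circuit C"
  shows "stab C (symdiff u v) = fmul (stab C u) (stab C v)"
proof
  fix k
  have "F_of C (symdiff u v) = fmul (F_of C u) (F_of C v)" by (rule ext) (simp add: F_of_symdiff fmul_def)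
  then show "stab C (symdiff u v) k = fmul (stab C u) (stab C v) k"
    using bc_fmul[OF C is_pauli_F_of[OF C] is_pauli_F_of[OF C]] by (simp add: back_cumulant_def fmul_def)
qed

lemma stab_empty:
  assumes C: "clifford_circuit C"
  shows "stab C {} = fone"
proof -
  have "F_of C {} = (\<lambda>k. pone)"
  proof
    fix k
    have "foldr pmul (map (\<lambda>j. pone) xs) pone = pone" for xs :: "nat list" by (induction xs) auto
    then show "F_of C {} k = pone" unfolding F_of_def by simp
  qed
  moreover have "bc C (\<lambda>k. pone) i = pone" for i
    by (induction i) (simp_all add: conj_mod_phase_pone[OF clifford_level_unitary[OF C]])
  ultimately show ?thesis by (intro ext) (simp add: back_cumulant_def fone_def)
qed

definition level_check :: "circuit \<Rightarrow> nat set \<Rightarrow> nat \<Rightarrow> bool" where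
  "level_check C u l \<longleftrightarrow> (\<forall>w\<in>set (ops C). is_meas w \<and> op_level w = l \<longrightarrow>
      pcommute (snd (meas_pauli w)) (conj_mod_phase (nqubits C) (level_unitary C l) (stab C u l)))"

definition level_checks_above :: "circuit \<Rightarrow> nat set \<Rightarrow> nat \<Rightarrow> bool" where
  "level_checks_above C u k \<longleftrightarrow> (\<forall>l. k < l \<and> l \<le> depth C \<longrightarrow> level_check C u l)"

lemma level_checks_above_less_depth:
  "k < depth C \<Longrightarrow> level_checks_above C u k \<longleftrightarrow> level_check C u (Suc k) \<and> level_checks_above C u (Suc k)"
  unfolding level_checks_above_def by (auto simp: Suc_le_eq) (metis Suc_lessI)

lemma propagate_level:
  assumes C: "clifford_circuit C" and k: "k < depth C"
  shows "propagate (nqubits C) u (filter (\<lambda>w. op_level w = Suc k) (ops C))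
      (meas_count (filter (\<lambda>w. op_level w \<le> k) (ops C))) (stab C u (Suc k)) =
    (if level_check C u (Suc k) then Some (stab C u k) else None)"
proof -
  let ?n = "nqubits C" and ?os = "ops C"
  define blk where "blk = filter (\<lambda>w. op_level w = Suc k) ?os"
  define j where "j = meas_count (filter (\<lambda>w. op_level w \<le> k) ?os)"
  have ok: "ops_ok ?n blk" using clifford_circuit_ops_ok[OF C] unfolding blk_def ops_ok_def by auto
  have lv: "\<forall>w\<in>set blk. op_level w = Suc k" unfolding blk_def by simp
  have U: "level_unitary_ops ?n (Suc k) blk = level_unitary C (Suc k)"
    unfolding blk_def level_unitary_eq_ops by (rule level_unitary_ops_filter[symmetric])
  have commutes: "commutes_with_meas blk Y \<longleftrightarrow>
      (\<forall>w\<in>set ?os. is_meas w \<and> op_level w = Suc k \<longrightarrow> pcommute (snd (meas_pauli w)) Y)" for Y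
    unfolding commutes_with_meas_def blk_def by auto
  have F: "F_of C u k = level_meas_prod u blk j k"
    unfolding blk_def j_def by (rule F_of_eq_level_block[OF C])
  have "propagate ?n u blk j (stab C u (Suc k)) =
    (if commutes_with_meas blk (conj_mod_phase ?n (level_unitary_ops ?n (Suc k) blk) (stab C u (Suc k)))
     then Some (pmul (level_meas_prod u blk j k)
       (conj_mod_phase ?n (level_unitary_ops ?n (Suc k) blk) (stab C u (Suc k))))
     else None)"
    using ok lv clifford_circuit_level_disjoint[OF C, of "Suc k"] is_pauli_stab[OF C]
    unfolding blk_def by (rule propagate_level_block)
  also have "\<dots> = (if level_check C u (Suc k) then Some (stab C u k) else None)"
    unfolding U commutes level_check_def[symmetric] F[symmetric] back_cumulant_less_depth[OF k] ..
  finally show ?thesis unfolding blk_def j_def .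
qed

lemma propagate_levels_above:
  assumes C: "clifford_circuit C" and k: "k \<le> depth C"
  shows "propagate (nqubits C) u (filter (\<lambda>w. k < op_level w) (ops C))
      (meas_count (filter (\<lambda>w. op_level w \<le> k) (ops C))) pone
    = (if level_checks_above C u k then Some (stab C u k) else None)"
  using k
proof (induction "depth C - k" arbitrary: k)
  case 0
  then have k: "k = depth C" by simp
  then have "filter (\<lambda>w. k < op_level w) (ops C) = []"
    using level_le_depth[of _ C] by (fastforce simp: filter_empty_conv)
  moreover have "stab C u k = pone" using k stab_ge_depth[OF C] by simp
  ultimately show ?case using k by (simp add: level_checks_above_def)
next
  case (Suc d)
  let ?n = "nqubits C" and ?os = "ops C"
  have k: "k < depth C" and d: "d = depth C - Suc k" using Suc by auto
  have s: "sorted (map op_level ?os)" by (rule clifford_circuit_sorted[OF C])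
  define blk where "blk = filter (\<lambda>w. op_level w = Suc k) ?os"
  define j where "j = meas_count (filter (\<lambda>w. op_level w \<le> k) ?os)"
  have above: "filter (\<lambda>w. k < op_level w) ?os = blk @ filter (\<lambda>w. Suc k < op_level w) ?os"
    unfolding blk_def by (rule sorted_filter_gt_eq[OF s])
  have count: "j + meas_count blk = meas_count (filter (\<lambda>w. op_level w \<le> Suc k) ?os)"
    unfolding j_def blk_def sorted_filter_le_Suc_eq[OF s, of k] by simp
  have IH: "propagate ?n u (filter (\<lambda>w. Suc k < op_level w) ?os)
      (meas_count (filter (\<lambda>w. op_level w \<le> Suc k) ?os)) pone
    = (if level_checks_above C u (Suc k) then Some (stab C u (Suc k)) else None)"
    using Suc.hyps(1)[OF d] k by simp
  have blk: "propagate ?n u blk j (stab C u (Suc k)) =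
      (if level_check C u (Suc k) then Some (stab C u k) else None)"
    unfolding blk_def j_def by (rule propagate_level[OF C k])
  show ?case
    unfolding j_def[symmetric] above propagate_append count IH
    by (simp add: blk level_checks_above_less_depth[OF k])
qed

lemma propagate_circuit:
  assumes C: "clifford_circuit C"
  shows "propagate (nqubits C) u (ops C) 0 pone = (if level_checks_above C u 0 then Some (stab C u 0) else None)"
proof -
  have "\<forall>w\<in>set (ops C). 1 \<le> op_level w" using clifford_circuit_level_pos[OF C] by blast
  then have "filter (\<lambda>w. 0 < op_level w) (ops C) = ops C" "filter (\<lambda>w. op_level w \<le> 0) (ops C) = []"
    by (auto simp: filter_id_conv filter_empty_conv)
  then show ?thesis using propagate_levels_above[OF C, of 0 u] by simp
qed

lemma nmeas_eq_meas_count: "nmeas C = meas_count (ops C)"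
  by (simp add: nmeas_def meas_ops_def meas_count_def)

lemma level_checks_if_dual:
  assumes C: "clifford_circuit C" and u: "u \<in> dual_code (nmeas C) (outcome_code C)"
  shows "level_checks_above C u 0" and "stab C u 0 = pone"
proof -
  have "propagate (nqubits C) u (ops C) 0 pone = Some pone"
  proof (rule propagate_pone_if_orthogonal[OF clifford_circuit_ops_ok[OF C]])
    fix w \<psi> assume "w \<subseteq> {..<meas_count (ops C)}" "\<psi> \<in> carrier_vec (2 ^ nqubits C)"
      "\<psi> \<noteq> 0\<^sub>v (2 ^ nqubits C)" "run (nqubits C) w 0 (ops C) \<psi> \<noteq> 0\<^sub>v (2 ^ nqubits C)"
    then have "w \<in> outcome_code C" unfolding outcome_code_def nmeas_eq_meas_count by blast
    then show "even (card (u \<inter> w))" using u unfolding dual_code_def by blast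
  qed
  then show "level_checks_above C u 0" and "stab C u 0 = pone"
    unfolding propagate_circuit[OF C] by (auto split: if_splits)
qed

text \<open>The converse needs the all-zero record to be possible, which holds for a linear outcome
  code.\<close>

lemma dual_if_level_checks:
  assumes C: "clifford_circuit C" and lin: "linear_code (nmeas C) (outcome_code C)"
    and v: "v \<subseteq> {..<nmeas C}" and checks: "level_checks_above C v 0" and zero: "stab C v 0 = pone"
  shows "v \<in> dual_code (nmeas C) (outcome_code C)"
proof -
  have propagates: "propagate (nqubits C) v (ops C) 0 pone = Some pone"
    unfolding propagate_circuit[OF C] using checks zero by simp
  have "{} \<in> outcome_code C" using lin by (simp add: linear_code_def)
  then obtain \<psi>0 where \<psi>0: "\<psi>0 \<in> carrier_vec (2 ^ nqubits C)" "run (nqubits C) {} 0 (ops C) \<psi>0 \<noteq> 0\<^sub>v (2 ^ nqubits C)"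
    unfolding outcome_code_def by blast
  have "even (card (v \<inter> w))" if w: "w \<in> outcome_code C" for w
  proof -
    obtain \<psi> where \<psi>: "\<psi> \<in> carrier_vec (2 ^ nqubits C)" "run (nqubits C) w 0 (ops C) \<psi> \<noteq> 0\<^sub>v (2 ^ nqubits C)"
      using w unfolding outcome_code_def by blast
    have "even (outcome_count w v 0 (ops C))"
      by (rule even_outcome_count_if_propagate_pone[OF clifford_circuit_ops_ok[OF C] propagates \<psi>0 \<psi>])
    moreover have "w \<inter> v \<inter> {0..<0 + meas_count (ops C)} = v \<inter> w"
      using w v unfolding outcome_code_def nmeas_eq_meas_count by auto
    ultimately show ?thesis unfolding outcome_count_def by simp
  qed
  then show ?thesis using v unfolding dual_code_def by blast
qed

lemma dual_code_symdiff:
  assumes "u \<in> dual_code m Oc" "v \<in> dual_code m Oc"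
  shows "symdiff u v \<in> dual_code m Oc"
proof -
  have fin: "finite u" "finite v" using assms finite_subset unfolding dual_code_def by blast+
  have "even (card (symdiff u v \<inter> w))" if w: "w \<in> Oc" for w
  proof -
    have "symdiff u v \<inter> w = (u \<inter> w) - (v \<inter> w) \<union> ((v \<inter> w) - (u \<inter> w))" by (auto simp: symdiff_def)
    then have "even (card (symdiff u v \<inter> w)) \<longleftrightarrow> (even (card (u \<inter> w)) \<longleftrightarrow> even (card (v \<inter> w)))"
      using fin by (simp add: even_card_symdiff)
    then show ?thesis using assms w unfolding dual_code_def by blast
  qed
  moreover have "symdiff u v \<subseteq> {..<m}" using assms unfolding dual_code_def symdiff_def by blast
  ultimately show ?thesis unfolding dual_code_def by blast
qed

lemma empty_in_dual_code: "{} \<in> dual_code m Oc"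
  by (simp add: dual_code_def)

text \<open>Conjugating by the gates of one level enlarges a support only by gates that touch it:
  since these gates have disjoint supports, a gate touching the conjugate by the other gates
  already touches the original.\<close>

lemma psupp_conj_level_unitary_ops:
  assumes "ops_ok n blk" "disjoint_ops n blk" "is_pauli n X"
    "q \<in> psupp (conj_mod_phase n (level_unitary_ops n l blk) X)"
  shows "q \<in> psupp X \<or> (\<exists>U. Gate l U \<in> set blk \<and> q \<in> mat_supp n U \<and> mat_supp n U \<inter> psupp X \<noteq> {})"
  using assms
proof (induction blk arbitrary: q)
  case Nil then show ?case by (simp add: conj_mod_phase_one)
next
  case (Cons x r)
  have ok: "ops_ok n r" and dj: "disjoint_ops n r" and djx: "\<forall>w\<in>set r. op_supp n x \<inter> op_supp n w = {}"
    using Cons.prems by (auto simp: disjoint_ops_def ops_ok_def)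
  have luc: "clifford n (level_unitary_ops n l r)" using clifford_level_unitary_ops[OF ok] .
  define Y where "Y = conj_mod_phase n (level_unitary_ops n l r) X"
  have Yp: "is_pauli n Y" unfolding Y_def using luc Cons.prems(3) by simp
  have IH: "p \<in> psupp Y \<Longrightarrow>
      p \<in> psupp X \<or> (\<exists>U. Gate l U \<in> set r \<and> p \<in> mat_supp n U \<and> mat_supp n U \<inter> psupp X \<noteq> {})" for p
    unfolding Y_def by (rule Cons.IH[OF ok dj Cons.prems(3)])
  show ?case
  proof (cases "\<exists>U. x = Gate l U")
    case False
    then have "level_unitary_ops n l (x # r) = level_unitary_ops n l r" by (cases x) auto
    then show ?thesis using IH Cons.prems(4) unfolding Y_def by auto
  next
    case True
    then obtain U where Gate: "x = Gate l U" by blast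
    have U: "clifford n U" using Cons.prems(1) Gate by simp
    have q: "q \<in> psupp (conj_mod_phase n U Y)"
      using Cons.prems(4) Gate conj_mod_phase_mult[OF luc U Cons.prems(3)] unfolding Y_def by simp
    show ?thesis
    proof (cases "mat_supp n U \<inter> psupp Y = {}")
      case True
      then show ?thesis using IH q conj_mod_phase_disjoint[OF U Yp] by (auto simp: Int_commute)
    next
      case False
      then obtain p where p: "p \<in> mat_supp n U" "p \<in> psupp Y" by blast
      have "\<not> (p \<in> mat_supp n U' \<and> Gate l U' \<in> set r)" for U'
        using djx p(1) Gate by fastforce
      then have "p \<in> psupp X" using IH[OF p(2)] by blast
      then have "mat_supp n U \<inter> psupp X \<noteq> {}" using p by blast
      then show ?thesis using IH psupp_conj_mod_phase[OF U Yp] q Gate by auto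
    qed
  qed
qed

lemma psupp_conj_level_unitary:
  assumes C: "clifford_circuit C" and X: "is_pauli (nqubits C) X"
    and q: "q \<in> psupp (conj_mod_phase (nqubits C) (level_unitary C l) X)"
  shows "q \<in> psupp X \<or> (\<exists>U. Gate l U \<in> set (ops C) \<and> q \<in> mat_supp (nqubits C) U \<and> mat_supp (nqubits C) U \<inter> psupp X \<noteq> {})"
proof -
  let ?blk = "filter (\<lambda>w. op_level w = l) (ops C)"
  have ok: "ops_ok (nqubits C) ?blk" using clifford_circuit_ops_ok[OF C] unfolding ops_ok_def by auto
  have "q \<in> psupp (conj_mod_phase (nqubits C) (level_unitary_ops (nqubits C) l ?blk) X)"
    using q unfolding level_unitary_eq_ops level_unitary_ops_filter[of _ _ "ops C"] .
  from psupp_conj_level_unitary_ops[OF ok clifford_circuit_level_disjoint[OF C] X this] show ?thesis by auto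
qed

lemma meas_ops_nth:
  assumes "j < nmeas C"
  shows "meas_ops C ! j \<in> set (ops C) \<and> is_meas (meas_ops C ! j)"
proof -
  have "meas_ops C ! j \<in> set (meas_ops C)" using assms by (simp add: nmeas_def)
  then show ?thesis by (simp add: meas_ops_def)
qed

lemma meas_ops_nth_eq:
  assumes "j < nmeas C"
  shows "meas_ops C ! j = Meas (meas_level C j) (meas_S C j)"
proof -
  have "is_meas (meas_ops C ! j)" using meas_ops_nth[OF assms] by simp
  then show ?thesis by (cases "meas_ops C ! j") (simp_all add: meas_level_def meas_S_def)
qed

lemma meas_level_bounds:
  assumes C: "clifford_circuit C" and j: "j < nmeas C"
  shows "1 \<le> meas_level C j \<and> meas_level C j \<le> depth C"
proof -
  have m: "meas_ops C ! j \<in> set (ops C)" using meas_ops_nth[OF j] by simp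
  show ?thesis using clifford_circuit_level_pos[OF C m] level_le_depth[OF m] by (simp add: meas_level_def)
qed

lemma is_pauli_meas_S:
  assumes C: "clifford_circuit C" and j: "j < nmeas C"
  shows "is_pauli (nqubits C) (snd (meas_S C j))"
proof -
  have m: "meas_ops C ! j \<in> set (ops C)" using meas_ops_nth[OF j] by simp
  then have "op_ok (nqubits C) (meas_ops C ! j)" using clifford_circuit_ops_ok[OF C] by (simp add: ops_ok_def)
  then show ?thesis unfolding meas_ops_nth_eq[OF j] by simp
qed

lemma psupp_F_of:
  assumes C: "clifford_circuit C" and q: "q \<in> psupp (F_of C u k)"
  shows "\<exists>j\<in>u. j < nmeas C \<and> meas_level C j = Suc k \<and> q \<in> psupp (snd (meas_S C j))"
proof -
  obtain j where j: "j \<in> set [0..<nmeas C]"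
    and qj: "q \<in> psupp (if j \<in> u \<and> meas_level C j - 1 = k then snd (meas_S C j) else pone)"
    using psupp_foldr_pmul q unfolding F_of_def by fastforce
  then have jm: "j < nmeas C" by simp
  have "j \<in> u \<and> meas_level C j - 1 = k" using qj by (auto split: if_splits)
  moreover have "1 \<le> meas_level C j" using meas_level_bounds[OF C jm] by simp
  ultimately show ?thesis using qj jm by (intro bexI[of _ j]) auto
qed

lemma F_of_eq_pone:
  assumes "\<And>j. j \<in> u \<Longrightarrow> j < nmeas C \<Longrightarrow> meas_level C j - 1 \<noteq> k"
  shows "F_of C u k = pone"
proof -
  have "foldr pmul (map (\<lambda>j. if j \<in> u \<and> meas_level C j - 1 = k then snd (meas_S C j) else pone) xs) pone = pone"
    if "set xs \<subseteq> {..<nmeas C}" for xs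
    using that assms by (induction xs) auto
  moreover have "set [0..<nmeas C] \<subseteq> {..<nmeas C}" by auto
  ultimately show ?thesis unfolding F_of_def by blast
qed


section \<open>Light cones in a local circuit\<close>

lemma grid_dist_le_refl: "0 \<le> r \<Longrightarrow> grid_dist_le D p p r"
  by (simp add: grid_dist_le_def)

lemma grid_dist_le_sym: "grid_dist_le D p q r \<Longrightarrow> grid_dist_le D q p r"
  by (simp add: grid_dist_le_def abs_minus_commute)

lemma grid_dist_le_trans: "grid_dist_le D p q r \<Longrightarrow> grid_dist_le D q s r' \<Longrightarrow> grid_dist_le D p s (r + r')"
  unfolding grid_dist_le_def by (smt (verit))

lemma grid_dist_le_mono: "grid_dist_le D p q r \<Longrightarrow> r \<le> r' \<Longrightarrow> grid_dist_le D p q r'"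
  unfolding grid_dist_le_def by force

abbreviation meas_supp :: "circuit \<Rightarrow> nat \<Rightarrow> nat set" where
  "meas_supp C j \<equiv> psupp (snd (meas_S C j))"

definition base_level :: "circuit \<Rightarrow> nat set \<Rightarrow> nat" where
  "base_level C u = Min (meas_level C ` u) - 1"

lemma meas_level_window:
  assumes C: "clifford_circuit C" and u: "u \<subseteq> {..<nmeas C}" and depth: "vec_depth C u \<le> c" and j: "j \<in> u"
  shows "base_level C u < meas_level C j" "meas_level C j \<le> base_level C u + c"
proof -
  have fin: "finite u" using u finite_subset by blast
  have "Min (meas_level C ` u) \<in> meas_level C ` u" using fin j by (intro Min_in) auto
  then have "1 \<le> Min (meas_level C ` u)" using meas_level_bounds[OF C] u by fastforce
  moreover have "Min (meas_level C ` u) \<le> meas_level C j" "meas_level C j \<le> Max (meas_level C ` u)"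
    using fin j by auto
  moreover have "Max (meas_level C ` u) - Min (meas_level C ` u) + 1 \<le> c"
    using depth j unfolding vec_depth_def by (auto split: if_splits)
  ultimately show "base_level C u < meas_level C j" "meas_level C j \<le> base_level C u + c"
    unfolding base_level_def by linarith+
qed

lemma vec_depth_mono:
  assumes "v \<subseteq> u" "finite u"
  shows "vec_depth C v \<le> vec_depth C u"
proof (cases "v = {}")
  case False
  then have "Max (meas_level C ` v) \<le> Max (meas_level C ` u)" "Min (meas_level C ` u) \<le> Min (meas_level C ` v)"
    using assms by (auto intro: Max_mono Min_antimono)
  then show ?thesis using False assms unfolding vec_depth_def by auto
qed (simp add: vec_depth_def)

lemma stab_eq_pone_up_to:
  assumes C: "clifford_circuit C" and zero: "stab C u 0 = pone"
    and above: "\<And>j. j \<in> u \<Longrightarrow> j < nmeas C \<Longrightarrow> K < meas_level C j" and k: "k \<le> K"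
  shows "stab C u k = pone"
  using k
proof (induction k)
  case (Suc k)
  show ?case
  proof (cases "k < depth C")
    case True
    have U: "clifford (nqubits C) (level_unitary C (Suc k))" by (rule clifford_level_unitary[OF C])
    have "F_of C u k = pone" by (rule F_of_eq_pone) (use above Suc.prems in fastforce)
    then have "conj_mod_phase (nqubits C) (level_unitary C (Suc k)) (stab C u (Suc k)) =
        conj_mod_phase (nqubits C) (level_unitary C (Suc k)) pone"
      using Suc back_cumulant_less_depth[OF True, of "F_of C u"] U by simp
    then show ?thesis using conj_mod_phase_inj[OF U is_pauli_stab[OF C] is_pauli_pone] by blast
  qed (use stab_ge_depth[OF C] in simp)
qed (use zero in simp)

lemma stab_eq_pone_below:
  assumes C: "clifford_circuit C" and zero: "stab C u K = pone"
    and above: "\<And>j. j \<in> u \<Longrightarrow> j < nmeas C \<Longrightarrow> K < meas_level C j" and k: "k \<le> K"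
  shows "stab C u k = pone"
proof -
  have "stab C u (K - i) = pone" for i
  proof (induction i)
    case (Suc i)
    show ?case
    proof (cases "K - Suc i < depth C \<and> K - i \<noteq> 0")
      case True
      then have "F_of C u (K - Suc i) = pone" by (intro F_of_eq_pone) (use above in fastforce)
      moreover have "Suc (K - Suc i) = K - i" using True by linarith
      ultimately show ?thesis
        using Suc back_cumulant_less_depth[of "K - Suc i" C "F_of C u"] True
          conj_mod_phase_pone[OF clifford_level_unitary[OF C]] by simp
    qed (use Suc stab_ge_depth[OF C] in auto)
  qed (use zero in simp)
  from this[of "K - k"] show ?thesis using k by simp
qed

locale local_clifford_circuit =
  fixes C :: circuit and D :: nat and pos :: "nat \<Rightarrow> nat \<Rightarrow> int" and c :: nat
  assumes circuit: "clifford_circuit C"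
    and local_ops: "\<And>w q q'. w \<in> set (ops C) \<Longrightarrow> q \<in> op_supp (nqubits C) w \<Longrightarrow>
      q' \<in> op_supp (nqubits C) w \<Longrightarrow> grid_dist_le D (pos q) (pos q') (int c)"
begin

lemma meas_supp_local:
  assumes "j < nmeas C" "s \<in> meas_supp C j" "s' \<in> meas_supp C j"
  shows "grid_dist_le D (pos s) (pos s') (int c)"
proof -
  have "meas_ops C ! j \<in> set (ops C)" using meas_ops_nth[OF assms(1)] by simp
  moreover have "op_supp (nqubits C) (meas_ops C ! j) = meas_supp C j"
    unfolding meas_ops_nth_eq[OF assms(1)] by simp
  ultimately show ?thesis using local_ops assms(2,3) by metis
qed

lemma psupp_conj_level_unitary_near:
  assumes X: "is_pauli (nqubits C) X" and q: "q \<in> psupp (conj_mod_phase (nqubits C) (level_unitary C l) X)"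
  obtains p where "p \<in> psupp X" "grid_dist_le D (pos q) (pos p) (int c)"
proof -
  consider "q \<in> psupp X"
    | U p where "Gate l U \<in> set (ops C)" "q \<in> mat_supp (nqubits C) U" "p \<in> mat_supp (nqubits C) U" "p \<in> psupp X"
    using psupp_conj_level_unitary[OF circuit X q] by blast
  then show ?thesis
  proof cases
    case 1 then show ?thesis using that grid_dist_le_refl by auto
  next
    case 2 then show ?thesis using that local_ops[of "Gate l U" q p] by auto
  qed
qed

lemma stab_supp_near_meas:
  assumes "q \<in> psupp (stab C u k)"
  shows "\<exists>j\<in>u. j < nmeas C \<and> k < meas_level C j \<and>
    (\<exists>s\<in>meas_supp C j. grid_dist_le D (pos q) (pos s) (int (c * (meas_level C j - Suc k))))"
  using assms
proof (induction "depth C - k" arbitrary: k q)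
  case 0
  then show ?case using stab_ge_depth[OF circuit] by simp
next
  case (Suc d)
  then have k: "k < depth C" and d: "d = depth C - Suc k" by auto
  have "q \<in> psupp (F_of C u k) \<or>
      q \<in> psupp (conj_mod_phase (nqubits C) (level_unitary C (Suc k)) (stab C u (Suc k)))"
    using Suc.prems psupp_pmul unfolding back_cumulant_less_depth[OF k] by blast
  then show ?case
  proof
    assume "q \<in> psupp (F_of C u k)"
    then obtain j where "j \<in> u" "j < nmeas C" "meas_level C j = Suc k" "q \<in> meas_supp C j"
      using psupp_F_of[OF circuit] by blast
    then show ?thesis by (intro bexI[of _ j]) (auto intro!: bexI[of _ q] grid_dist_le_refl)
  next
    assume "q \<in> psupp (conj_mod_phase (nqubits C) (level_unitary C (Suc k)) (stab C u (Suc k)))"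
    then obtain p where p: "p \<in> psupp (stab C u (Suc k))" and qp: "grid_dist_le D (pos q) (pos p) (int c)"
      using psupp_conj_level_unitary_near[OF is_pauli_stab[OF circuit]] by blast
    obtain j s where j: "j \<in> u" "j < nmeas C" "Suc k < meas_level C j" "s \<in> meas_supp C j"
      and ps: "grid_dist_le D (pos p) (pos s) (int (c * (meas_level C j - Suc (Suc k))))"
      using Suc.hyps(1)[OF d p] by blast
    have "meas_level C j - Suc k = Suc (meas_level C j - Suc (Suc k))" using j(3) by simp
    then have "int c + int (c * (meas_level C j - Suc (Suc k))) = int (c * (meas_level C j - Suc k))"
      by simp
    then show ?thesis using j grid_dist_le_trans[OF qp ps] by (intro bexI[of _ j]) (auto intro!: bexI[of _ s])
  qed
qed

lemma stab_supp_near_meas_window: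
  assumes window: "\<And>j. j \<in> u \<Longrightarrow> j < nmeas C \<Longrightarrow> meas_level C j \<le> K + c" and k: "K \<le> k"
    and q: "q \<in> psupp (stab C u k)"
  shows "\<exists>j\<in>u. j < nmeas C \<and> k < meas_level C j \<and>
    (\<exists>s\<in>meas_supp C j. grid_dist_le D (pos q) (pos s) (int (c * c)))"
proof -
  obtain j s where j: "j \<in> u" "j < nmeas C" "k < meas_level C j" "s \<in> meas_supp C j"
    and qs: "grid_dist_le D (pos q) (pos s) (int (c * (meas_level C j - Suc k)))"
    using stab_supp_near_meas[OF q] by blast
  have "meas_level C j - Suc k \<le> c" using window[OF j(1,2)] k by linarith
  then have "int (c * (meas_level C j - Suc k)) \<le> int (c * c)"
    by (simp only: of_nat_le_iff mult_le_mono2)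
  then show ?thesis using j grid_dist_le_mono[OF qs] by blast
qed

end

text \<open>The light cones of the two parts cannot meet: a qubit
  of stab v and a qubit of stab (u - v) are each within c^2 of their measurements, and a
  measurement touching both conjugated components adds c + 2c on top.\<close>

locale separated_split = local_clifford_circuit +
  fixes u v :: "nat set"
  assumes dual: "u \<in> dual_code (nmeas C) (outcome_code C)"
    and depth: "vec_depth C u \<le> c" and sub: "v \<subseteq> u"
    and separated: "\<And>j j' s s'. j \<in> v \<Longrightarrow> j' \<in> u - v \<Longrightarrow> s \<in> meas_supp C j \<Longrightarrow> s' \<in> meas_supp C j' \<Longrightarrow>
      \<not> grid_dist_le D (pos s) (pos s') (int (2 * c * c + 3 * c))"
begin

abbreviation K where "K \<equiv> base_level C u"

lemma dual_subset: "u \<subseteq> {..<nmeas C}"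
  using dual unfolding dual_code_def by blast

lemma window: "j \<in> u \<Longrightarrow> K < meas_level C j \<and> meas_level C j \<le> K + c"
  using meas_level_window[OF circuit dual_subset depth] by blast

lemma no_common_neighbour:
  assumes "j \<in> v" "j' \<in> u - v" "s \<in> meas_supp C j" "s' \<in> meas_supp C j'"
    and "grid_dist_le D (pos q) (pos s) a" "grid_dist_le D (pos q) (pos s') b" "a + b \<le> int (2 * c * c + 3 * c)"
  shows False
  using separated[OF assms(1-4)] grid_dist_le_mono[OF grid_dist_le_trans[OF grid_dist_le_sym[OF assms(5)] assms(6)]]
    assms(7) by blast

lemma stab_split: "stab C u k = pmul (stab C v k) (stab C (u - v) k)"
proof -
  have "symdiff v (u - v) = u" using sub by (auto simp: symdiff_def)
  then show ?thesis using stab_symdiff[OF circuit, of v "u - v"] by (simp add: fmul_def)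
qed

lemma stab_supp_near:
  assumes "x \<subseteq> u" "K \<le> k" "q \<in> psupp (stab C x k)"
  shows "\<exists>j\<in>x. \<exists>s\<in>meas_supp C j. grid_dist_le D (pos q) (pos s) (int (c * c))"
  using stab_supp_near_meas_window[where u = x and K = K, OF _ assms(2,3)] window assms(1) by blast

lemma conj_stab_supp_near:
  assumes x: "x \<subseteq> u" and l: "K < l"
    and q: "q \<in> psupp (conj_mod_phase (nqubits C) (level_unitary C l) (stab C x l))"
  shows "\<exists>j\<in>x. \<exists>s\<in>meas_supp C j. grid_dist_le D (pos q) (pos s) (int (c * c) + int c)"
proof -
  obtain p where p: "p \<in> psupp (stab C x l)" and qp: "grid_dist_le D (pos q) (pos p) (int c)"
    using psupp_conj_level_unitary_near[OF is_pauli_stab[OF circuit] q] by blast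
  obtain j s where js: "j \<in> x" "s \<in> meas_supp C j" "grid_dist_le D (pos p) (pos s) (int (c * c))"
    using stab_supp_near[OF x _ p] l by auto
  have "grid_dist_le D (pos q) (pos s) (int (c * c) + int c)"
    using grid_dist_le_trans[OF qp js(3)] by (simp add: add.commute)
  then show ?thesis using js(1,2) by blast
qed

lemma stab_part_eq_pone_below: "k \<le> K \<Longrightarrow> stab C v k = pone"
proof -
  have "stab C u K = pone"
    using stab_eq_pone_up_to[OF circuit level_checks_if_dual(2)[OF circuit dual]] window by blast
  then have eq: "stab C v K = stab C (u - v) K" using stab_split[of K] by (simp add: pmul_eq_pone_iff)
  have "psupp (stab C v K) = {}"
  proof (rule ccontr)
    assume "psupp (stab C v K) \<noteq> {}"
    then obtain q where q: "q \<in> psupp (stab C v K)" by blast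
    obtain j s where js: "j \<in> v" "s \<in> meas_supp C j" "grid_dist_le D (pos q) (pos s) (int (c * c))"
      using stab_supp_near[OF sub order_refl q] by blast
    obtain j' s' where js': "j' \<in> u - v" "s' \<in> meas_supp C j'" "grid_dist_le D (pos q) (pos s') (int (c * c))"
      using stab_supp_near[of "u - v" K q] q eq by auto
    show False by (rule no_common_neighbour[OF js(1) js'(1) js(2) js'(2) js(3) js'(3)]) simp
  qed
  then have "stab C v K = pone" by (simp add: psupp_eq_empty_iff)
  then show "k \<le> K \<Longrightarrow> stab C v k = pone"
    using stab_eq_pone_below[OF circuit] window sub by blast
qed

lemma level_check_part:
  assumes l: "0 < l" "l \<le> depth C"
  shows "level_check C v l"
  unfolding level_check_def
proof (intro ballI impI)
  fix w assume w: "w \<in> set (ops C)" "is_meas w \<and> op_level w = l"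
  let ?n = "nqubits C" and ?M = "snd (meas_pauli w)" and ?U = "level_unitary C l"
  let ?Yv = "conj_mod_phase ?n ?U (stab C v l)" and ?Yw = "conj_mod_phase ?n ?U (stab C (u - v) l)"
  have U: "clifford ?n ?U" by (rule clifford_level_unitary[OF circuit])
  show "pcommute ?M ?Yv"
  proof (cases "l \<le> K")
    case True then show ?thesis using stab_part_eq_pone_below U by simp
  next
    case False
    have M: "is_pauli ?n ?M" using clifford_circuit_ops_ok[OF circuit] w by (cases w) (auto simp: ops_ok_def)
    have Y: "is_pauli ?n ?Yv" "is_pauli ?n ?Yw" using U is_pauli_stab[OF circuit] by simp_all
    have "conj_mod_phase ?n ?U (stab C u l) = pmul ?Yv ?Yw"
      unfolding stab_split by (rule conj_mod_phase_pmul[OF U is_pauli_stab[OF circuit] is_pauli_stab[OF circuit]])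
    moreover have "level_check C u l"
      using level_checks_if_dual(1)[OF circuit dual] l unfolding level_checks_above_def by blast
    ultimately have "pcommute ?M (pmul ?Yv ?Yw)" using w unfolding level_check_def by auto
    then have iff: "pcommute ?M ?Yv \<longleftrightarrow> pcommute ?M ?Yw" using pcommute_pmul[OF M Y] by simp
    have "psupp ?M \<inter> psupp ?Yv = {} \<or> psupp ?M \<inter> psupp ?Yw = {}"
    proof (rule ccontr)
      assume "\<not> ?thesis"
      then obtain a b where a: "a \<in> psupp ?M" "a \<in> psupp ?Yv" and b: "b \<in> psupp ?M" "b \<in> psupp ?Yw"
        by blast
      have ba: "grid_dist_le D (pos b) (pos a) (int c)"
        using local_ops[OF w(1)] a(1) b(1) w(2) by (cases w) auto
      obtain j s where js: "j \<in> v" "s \<in> meas_supp C j" "grid_dist_le D (pos a) (pos s) (int (c * c) + int c)"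
        using conj_stab_supp_near[OF sub _ a(2)] False by auto
      obtain j' s' where js': "j' \<in> u - v" "s' \<in> meas_supp C j'"
        "grid_dist_le D (pos b) (pos s') (int (c * c) + int c)"
        using conj_stab_supp_near[of "u - v" l b] False b(2) by auto
      have "grid_dist_le D (pos b) (pos s) (int c + (int (c * c) + int c))"
        by (rule grid_dist_le_trans[OF ba js(3)])
      moreover have "int c + (int (c * c) + int c) + (int (c * c) + int c) \<le> int (2 * c * c + 3 * c)"
        by simp
      ultimately show False using no_common_neighbour[OF js(1) js'(1) js(2) js'(2)] js'(3) by blast
    qed
    then show ?thesis using iff pcommute_if_disjoint by blast
  qed
qed

lemma part_in_dual_code:
  assumes lin: "linear_code (nmeas C) (outcome_code C)"
  shows "v \<in> dual_code (nmeas C) (outcome_code C)"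
proof (rule dual_if_level_checks[OF circuit lin])
  show "v \<subseteq> {..<nmeas C}" using sub dual_subset by blast
  show "level_checks_above C v 0" using level_check_part unfolding level_checks_above_def by blast
  show "stab C v 0 = pone" by (rule stab_part_eq_pone_below) simp
qed

end

section \<open>Splitting dual vectors into local clusters\<close>

fun cluster :: "(nat \<Rightarrow> nat \<Rightarrow> bool) \<Rightarrow> nat set \<Rightarrow> nat \<Rightarrow> nat \<Rightarrow> nat set" where
  "cluster near u x 0 = {x}"
| "cluster near u x (Suc i) = cluster near u x i \<union> {j \<in> u. \<exists>j'\<in>cluster near u x i. near j' j}"

lemma cluster_subset: "x \<in> u \<Longrightarrow> cluster near u x i \<subseteq> u"
  by (induction i) auto

lemma start_in_cluster: "x \<in> cluster near u x i"
  by (induction i) auto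

lemma cluster_stabilizes:
  assumes fin: "finite u" and x: "x \<in> u"
  shows "\<exists>N\<le>card u. cluster near u x (Suc N) = cluster near u x N"
proof (rule ccontr)
  assume grows: "\<not> ?thesis"
  have "i \<le> card u \<Longrightarrow> i + 1 \<le> card (cluster near u x i)" for i
  proof (induction i)
    case (Suc i)
    have "cluster near u x (Suc i) \<noteq> cluster near u x i" using grows Suc.prems by (meson Suc_leD)
    moreover have "cluster near u x i \<subseteq> cluster near u x (Suc i)" by auto
    ultimately have "cluster near u x i \<subset> cluster near u x (Suc i)" by blast
    moreover have "finite (cluster near u x (Suc i))" using cluster_subset[OF x] fin finite_subset by blast
    ultimately have "card (cluster near u x i) < card (cluster near u x (Suc i))" by (rule psubset_card_mono[rotated])
    then show ?case using Suc by simp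
  qed simp
  from this[of "card u"] show False using card_mono[OF fin cluster_subset[OF x, of near "card u"]] by simp
qed

lemma cluster_singleton: "(\<And>j. \<not> near x j) \<Longrightarrow> cluster near u x i = {x}"
  by (induction i) auto

text \<open>Each step adds at most the near-radius plus the diameters of two measurement supports.\<close>

lemma cluster_diameter:
  assumes local_supp: "\<And>j s s'. j \<in> u \<Longrightarrow> s \<in> Sf j \<Longrightarrow> s' \<in> Sf j \<Longrightarrow> grid_dist_le D (pos s) (pos s') (int c)"
    and x: "x \<in> u" and R: "0 \<le> R"
    and j: "j \<in> cluster (\<lambda>j j'. \<exists>s\<in>Sf j. \<exists>s'\<in>Sf j'. grid_dist_le D (pos s) (pos s') R) u x i"
    and s: "s \<in> Sf j" and s0: "s0 \<in> Sf x"
  shows "grid_dist_le D (pos s) (pos s0) (int i * (R + 2 * int c) + int c)"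
  using j s
proof (induction i arbitrary: j s)
  case 0 then show ?case using local_supp[OF x] s0 by simp
next
  case (Suc i)
  let ?near = "\<lambda>j j'. \<exists>s\<in>Sf j. \<exists>s'\<in>Sf j'. grid_dist_le D (pos s) (pos s') R"
  consider "j \<in> cluster ?near u x i" | j' a b where "j \<in> u" "j' \<in> cluster ?near u x i" "a \<in> Sf j'" "b \<in> Sf j"
      "grid_dist_le D (pos a) (pos b) R"
    using Suc.prems(1) by auto
  then show ?case
  proof cases
    case 1
    then have "grid_dist_le D (pos s) (pos s0) (int i * (R + 2 * int c) + int c)" using Suc by blast
    then show ?thesis by (rule grid_dist_le_mono) (use R in \<open>simp add: algebra_simps\<close>)
  next
    case 2
    have "grid_dist_le D (pos s) (pos s0) (int c + (R + (int i * (R + 2 * int c) + int c)))"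
      using local_supp[OF 2(1) Suc.prems(2) 2(4)] grid_dist_le_sym[OF 2(5)] Suc.IH[OF 2(2,3)]
      by (blast intro: grid_dist_le_trans)
    then show ?thesis by (rule grid_dist_le_mono) (simp add: algebra_simps)
  qed
qed

lemma z2span_symdiff:
  assumes a: "a \<in> z2span L" and b: "b \<in> z2span L"
  shows "symdiff a b \<in> z2span L"
  using b
proof induction
  case zero then show ?case using a by (simp add: symdiff_def)
next
  case (add u l)
  have "symdiff a (symdiff u l) = symdiff (symdiff a u) l" by (auto simp: symdiff_def)
  then show ?case using add z2span.add by metis
qed

lemma z2span_subset: "B \<subseteq> z2span L \<Longrightarrow> z2span B \<subseteq> z2span L"
proof
  fix u assume B: "B \<subseteq> z2span L" and u: "u \<in> z2span B"
  show "u \<in> z2span L"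
    using u
  proof induction
    case zero then show ?case by (rule z2span.zero)
  next
    case (add u b) then show ?case using B z2span_symdiff by blast
  qed
qed

lemma z2span_base: "b \<in> B \<Longrightarrow> b \<in> z2span B"
  using z2span.add[OF z2span.zero] by (simp add: symdiff_def)

definition sep_radius :: "nat \<Rightarrow> nat" where "sep_radius c = 2 * c * c + 3 * c"

definition cluster_radius :: "nat \<Rightarrow> nat" where "cluster_radius c = c * (sep_radius c + 2 * c) + c"

definition local_dual_vectors :: "circuit \<Rightarrow> nat \<Rightarrow> (nat \<Rightarrow> nat \<Rightarrow> int) \<Rightarrow> nat \<Rightarrow> nat set set" where
  "local_dual_vectors C D pos c = {v. v \<in> dual_code (nmeas C) (outcome_code C) \<and> vec_depth C v \<le> c \<and>
     (\<exists>p\<in>grid D. \<forall>j\<in>v. \<forall>s\<in>meas_supp C j. grid_dist_le D (pos s) p (int (cluster_radius c)))}"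

definition meas_near :: "circuit \<Rightarrow> nat \<Rightarrow> (nat \<Rightarrow> nat \<Rightarrow> int) \<Rightarrow> int \<Rightarrow> nat \<Rightarrow> nat \<Rightarrow> bool" where
  "meas_near C D pos R j j' \<longleftrightarrow> (\<exists>s\<in>meas_supp C j. \<exists>s'\<in>meas_supp C j'. grid_dist_le D (pos s) (pos s') R)"

context local_clifford_circuit
begin

lemma cluster_near_point:
  assumes place: "pos ` {..<nqubits C} \<subseteq> grid D" and u: "u \<subseteq> {..<nmeas C}" and x: "x \<in> u" and N: "N \<le> c"
  shows "\<exists>p\<in>grid D. \<forall>j\<in>cluster (meas_near C D pos (int (sep_radius c))) u x N.
    \<forall>s\<in>meas_supp C j. grid_dist_le D (pos s) p (int (cluster_radius c))"
proof (cases "meas_supp C x = {}")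
  case True
  then have "cluster (meas_near C D pos (int (sep_radius c))) u x N = {x}"
    by (intro cluster_singleton) (simp add: meas_near_def)
  moreover have "(\<lambda>i. 0) \<in> grid D" by (simp add: grid_def)
  ultimately show ?thesis using True by (intro bexI[of _ "\<lambda>i. 0"]) auto
next
  case False
  then obtain s0 where s0: "s0 \<in> meas_supp C x" by blast
  have "s0 < nqubits C" using is_pauli_meas_S[OF circuit] u x s0 by (auto simp: is_pauli_def psupp_def)
  then have "pos s0 \<in> grid D" using place by blast
  moreover have "grid_dist_le D (pos s) (pos s0) (int (cluster_radius c))"
    if "j \<in> cluster (meas_near C D pos (int (sep_radius c))) u x N" "s \<in> meas_supp C j" for j s
  proof -
    have local_supp: "grid_dist_le D (pos s) (pos s') (int c)"
      if "j \<in> u" "s \<in> meas_supp C j" "s' \<in> meas_supp C j" for j s s'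
      using meas_supp_local that u by blast
    have dist: "grid_dist_le D (pos s) (pos s0) (int N * (int (sep_radius c) + 2 * int c) + int c)"
      using cluster_diameter[where Sf = "meas_supp C" and R = "int (sep_radius c)", OF local_supp x _ _ that(2) s0]
        that(1) unfolding meas_near_def by simp
    have "N * (sep_radius c + 2 * c) \<le> c * (sep_radius c + 2 * c)"
      using N by (intro mult_le_mono1)
    moreover have "int N * (int (sep_radius c) + 2 * int c) = int (N * (sep_radius c + 2 * c))"
      "int (cluster_radius c) = int (c * (sep_radius c + 2 * c)) + int c"
      unfolding cluster_radius_def by simp_all
    ultimately have "int N * (int (sep_radius c) + 2 * int c) + int c \<le> int (cluster_radius c)"
      by linarith
    then show ?thesis by (rule grid_dist_le_mono[OF dist])
  qed
  ultimately show ?thesis by blast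
qed

lemma closed_cluster_in_local_dual_vectors:
  assumes lin: "linear_code (nmeas C) (outcome_code C)" and place: "pos ` {..<nqubits C} \<subseteq> grid D"
    and dual: "u \<in> dual_code (nmeas C) (outcome_code C)" and card: "card u \<le> c" and depth: "vec_depth C u \<le> c"
    and x: "x \<in> u" and N: "N \<le> card u"
    and closed: "cluster (meas_near C D pos (int (sep_radius c))) u x (Suc N) =
      cluster (meas_near C D pos (int (sep_radius c))) u x N"
  shows "cluster (meas_near C D pos (int (sep_radius c))) u x N \<in> local_dual_vectors C D pos c"
proof -
  let ?v = "cluster (meas_near C D pos (int (sep_radius c))) u x N"
  have um: "u \<subseteq> {..<nmeas C}" using dual unfolding dual_code_def by blast
  have vu: "?v \<subseteq> u" by (rule cluster_subset[OF x])
  have "separated_split C D pos c u ?v"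
  proof unfold_locales
    fix j j' s s' assume "j \<in> ?v" "j' \<in> u - ?v" "s \<in> meas_supp C j" "s' \<in> meas_supp C j'"
    then show "\<not> grid_dist_le D (pos s) (pos s') (int (2 * c * c + 3 * c))"
      using closed unfolding meas_near_def sep_radius_def by auto
  qed (use dual depth vu in auto)
  then have "?v \<in> dual_code (nmeas C) (outcome_code C)"
    using separated_split.part_in_dual_code[OF _ lin] by blast
  moreover have "vec_depth C ?v \<le> c"
    using vec_depth_mono[OF vu finite_subset[OF um], of C] depth by simp
  ultimately show ?thesis
    using cluster_near_point[OF place um x] N card unfolding local_dual_vectors_def by auto
qed

text \<open>Peeling off the closed cluster (with respect to sep_radius) of one measurement of u leaves
  a dual vector of smaller weight, so induction on the weight writes u as a sum of clusters.\<close>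

lemma bounded_dual_in_span_local:
  assumes lin: "linear_code (nmeas C) (outcome_code C)" and place: "pos ` {..<nqubits C} \<subseteq> grid D"
  shows "u \<in> dual_code (nmeas C) (outcome_code C) \<Longrightarrow> card u \<le> c \<Longrightarrow> vec_depth C u \<le> c \<Longrightarrow>
    u \<in> z2span (local_dual_vectors C D pos c)"
proof (induction "card u" arbitrary: u rule: less_induct)
  case less
  let ?dual = "dual_code (nmeas C) (outcome_code C)" and ?L = "local_dual_vectors C D pos c"
  have fin: "finite u" using less.prems(1) finite_subset unfolding dual_code_def by blast
  show ?case
  proof (cases "u = {}")
    case True then show ?thesis by (simp add: z2span.zero)
  next
    case False
    then obtain x where x: "x \<in> u" by blast
    let ?near = "meas_near C D pos (int (sep_radius c))"
    obtain N where N: "N \<le> card u" "cluster ?near u x (Suc N) = cluster ?near u x N"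
      using cluster_stabilizes[OF fin x] by blast
    define v where "v = cluster ?near u x N"
    have vL: "v \<in> ?L" unfolding v_def by (rule closed_cluster_in_local_dual_vectors[OF lin place less.prems x N])
    have vu: "v \<subseteq> u" unfolding v_def by (rule cluster_subset[OF x])
    have "symdiff u v = u - v" using vu by (auto simp: symdiff_def)
    moreover have "v \<in> ?dual" using vL unfolding local_dual_vectors_def by blast
    ultimately have rest: "u - v \<in> ?dual" using dual_code_symdiff[OF less.prems(1)] by metis
    have less: "card (u - v) < card u"
      using start_in_cluster[of x ?near u N] x fin unfolding v_def by (intro psubset_card_mono) auto
    have "u - v \<in> z2span ?L"
      using less.hyps[OF less rest] less less.prems(2,3) vec_depth_mono[of "u - v" u C] fin by fastforce
    then have "symdiff (u - v) v \<in> z2span ?L" using vL by (rule z2span.add)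
    moreover have "symdiff (u - v) v = u" using vu by (auto simp: symdiff_def)
    ultimately show ?thesis by simp
  qed
qed

end

section \<open>Spacetime locality\<close>

definition spacetime_embedding :: "nat \<Rightarrow> (nat \<Rightarrow> nat \<Rightarrow> int) \<Rightarrow> nat \<times> nat \<Rightarrow> (nat \<Rightarrow> int)" where
  "spacetime_embedding D pos x = (\<lambda>i. if i < D then pos (snd x) i else if i = D then int (fst x) else 0)"

lemma spacetime_embedding_grid: "spacetime_embedding D pos ` spacetime_qubits C \<subseteq> grid (D + 1)"
  unfolding spacetime_embedding_def grid_def by auto

lemma inj_on_spacetime_embedding:
  assumes place: "inj_on pos {..<nqubits C}" "pos ` {..<nqubits C} \<subseteq> grid D"
  shows "inj_on (spacetime_embedding D pos) (spacetime_qubits C)"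
proof (rule inj_onI)
  fix x y assume "x \<in> spacetime_qubits C" "y \<in> spacetime_qubits C"
    and eq: "spacetime_embedding D pos x = spacetime_embedding D pos y"
  then obtain k q k' q' where x: "x = (k, q)" "q < nqubits C" and y: "y = (k', q')" "q' < nqubits C"
    unfolding spacetime_qubits_def by auto
  have "k = k'" using fun_cong[OF eq, of D] unfolding x y spacetime_embedding_def by simp
  moreover have "pos q i = pos q' i" for i
  proof (cases "i < D")
    case False
    have "pos q \<in> grid D" "pos q' \<in> grid D" using place(2) x y by auto
    then show ?thesis using False unfolding grid_def by simp
  qed (use fun_cong[OF eq, of i] x y in \<open>simp add: spacetime_embedding_def\<close>)
  then have "q = q'" using place(1) x y by (auto dest: inj_onD)
  ultimately show "x = y" using x y by simp
qed

lemma fspan_stab_image: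
  assumes C: "clifford_circuit C" and L: "L \<subseteq> dual_code (nmeas C) (outcome_code C)"
    and span: "dual_code (nmeas C) (outcome_code C) \<subseteq> z2span L"
  shows "fspan (stab C ` L) = spacetime_stabilizers C"
proof
  show "fspan (stab C ` L) \<subseteq> spacetime_stabilizers C"
  proof
    fix F assume "F \<in> fspan (stab C ` L)"
    then show "F \<in> spacetime_stabilizers C"
    proof induction
      case one
      then show ?case
        using stab_empty[OF C] empty_in_dual_code unfolding spacetime_stabilizers_def by force
    next
      case (mul F g)
      obtain u where u: "F = stab C u" "u \<in> dual_code (nmeas C) (outcome_code C)"
        using mul.IH unfolding spacetime_stabilizers_def by blast
      obtain v where v: "g = stab C v" "v \<in> L" using mul.hyps(2) by blast
      have "fmul F g = stab C (symdiff u v)" unfolding u v stab_symdiff[OF C] ..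
      then show ?case using dual_code_symdiff[OF u(2)] v(2) L unfolding spacetime_stabilizers_def by blast
    qed
  qed
next
  have "stab C u \<in> fspan (stab C ` L)" if "u \<in> z2span L" for u
    using that
  proof induction
    case zero then show ?case using stab_empty[OF C] fspan.one by simp
  next
    case (add u b) then show ?case using fspan.mul[OF add.IH, of "stab C b"] by (simp add: stab_symdiff[OF C])
  qed
  then show "spacetime_stabilizers C \<subseteq> fspan (stab C ` L)"
    using span unfolding spacetime_stabilizers_def by blast
qed

definition generator_radius :: "nat \<Rightarrow> nat" where
  "generator_radius c = c * c + cluster_radius c + c"

context local_clifford_circuit
begin

text \<open>Above its measurement levels a local dual vector has trivial back-cumulant, and below them
  the light cone reaches at most c levels and c^2 sites.\<close>

lemma stab_local:
  assumes v: "v \<in> local_dual_vectors C D pos c"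
  shows "\<exists>p\<in>grid (D + 1). \<forall>x\<in>fsupp C (stab C v).
    grid_dist_le (D + 1) (spacetime_embedding D pos x) p (int (generator_radius c))"
proof (cases "v = {}")
  case True
  have "(\<lambda>i. 0) \<in> grid (D + 1)" by (simp add: grid_def)
  then show ?thesis using True stab_empty[OF circuit] by (auto simp: fsupp_def fone_def)
next
  case False
  obtain p where p: "p \<in> grid D" "\<forall>j\<in>v. \<forall>s\<in>meas_supp C j. grid_dist_le D (pos s) p (int (cluster_radius c))"
    and dual: "v \<in> dual_code (nmeas C) (outcome_code C)" and depth: "vec_depth C v \<le> c"
    using v unfolding local_dual_vectors_def by blast
  have vm: "v \<subseteq> {..<nmeas C}" using dual unfolding dual_code_def by blast
  let ?K = "base_level C v"
  have window: "?K < meas_level C j" "meas_level C j \<le> ?K + c" if "j \<in> v" for j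
    using meas_level_window[OF circuit vm depth that] by simp_all
  define P where "P = (\<lambda>i. if i < D then p i else if i = D then int ?K else 0)"
  have "P \<in> grid (D + 1)" unfolding P_def grid_def by simp
  moreover have "grid_dist_le (D + 1) (spacetime_embedding D pos x) P (int (generator_radius c))"
    if x: "x \<in> fsupp C (stab C v)" for x
  proof -
    obtain k q where kq: "x = (k, q)" "q \<in> psupp (stab C v k)"
      using x unfolding fsupp_def by blast
    have "?K < k"
    proof (rule ccontr)
      assume "\<not> ?K < k"
      then have "stab C v k = pone"
        by (intro stab_eq_pone_up_to[OF circuit level_checks_if_dual(2)[OF circuit dual], where K = ?K])
           (use window in auto)
      then show False using kq by simp
    qed
    then obtain j s where j: "j \<in> v" "k < meas_level C j" "s \<in> meas_supp C j"
      and qs: "grid_dist_le D (pos q) (pos s) (int (c * c))"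
      using stab_supp_near_meas_window[OF _ _ kq(2), of ?K] window by fastforce
    have "grid_dist_le D (pos q) p (int (c * c) + int (cluster_radius c))"
      using grid_dist_le_trans[OF qs] p(2) j(1,3) by blast
    then have "\<bar>pos q i - p i\<bar> \<le> int (generator_radius c)" if "i < D" for i
      using that unfolding grid_dist_le_def generator_radius_def by fastforce
    moreover have "\<bar>int k - int ?K\<bar> \<le> int (generator_radius c)"
      using \<open>?K < k\<close> j(2) window(2)[OF j(1)] unfolding generator_radius_def by linarith
    ultimately show ?thesis unfolding grid_dist_le_def spacetime_embedding_def P_def kq(1) by auto
  qed
  ultimately show ?thesis by blast
qed

end

theorem mainTheorem11:
  fixes C :: "nat \<Rightarrow> circuit"
    and pos :: "nat \<Rightarrow> nat \<Rightarrow> (nat \<Rightarrow> int)"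
    and D :: nat
    and c :: nat
  assumes circ: "\<And>t. clifford_circuit (C t)"
    and lin: "\<And>t. linear_code (nmeas (C t)) (outcome_code (C t))"
    and place: "\<And>t. inj_on (pos t) {..<nqubits (C t)} \<and> pos t ` {..<nqubits (C t)} \<subseteq> grid D"
    and bounded: "\<And>t. \<exists>B. z2span B = dual_code (nmeas (C t)) (outcome_code (C t)) \<and>
                     (\<forall>u\<in>B. card u \<le> c \<and> vec_depth (C t) u \<le> c)"
    and local_ops: "\<And>t w q q'. w \<in> set (ops (C t)) \<Longrightarrow> q \<in> op_supp (nqubits (C t)) w \<Longrightarrow>
                     q' \<in> op_supp (nqubits (C t)) w \<Longrightarrow> grid_dist_le D (pos t q) (pos t q') (int c)"
  shows "\<exists>c'::nat. \<forall>t. \<exists>emb :: nat \<times> nat \<Rightarrow> (nat \<Rightarrow> int).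
           inj_on emb (spacetime_qubits (C t)) \<and>
           emb ` spacetime_qubits (C t) \<subseteq> grid (D + 1) \<and>
           (\<exists>G. G \<subseteq> spacetime_stabilizers (C t) \<and> fspan G = spacetime_stabilizers (C t) \<and>
              (\<forall>g\<in>G. \<exists>p \<in> grid (D + 1). \<forall>x \<in> fsupp (C t) g. grid_dist_le (D + 1) (emb x) p (int c')))"
proof (intro exI[of _ "generator_radius c"] allI)
  fix t
  interpret local_clifford_circuit "C t" D "pos t" c
    using circ local_ops by unfold_locales
  let ?dual = "dual_code (nmeas (C t)) (outcome_code (C t))" and ?L = "local_dual_vectors (C t) D (pos t) c"
  obtain B where B: "z2span B = ?dual" "\<forall>u\<in>B. card u \<le> c \<and> vec_depth (C t) u \<le> c"
    using bounded by blast
  have "B \<subseteq> z2span ?L"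
    using bounded_dual_in_span_local[OF lin] place B z2span_base by blast
  then have span: "?dual \<subseteq> z2span ?L" using B(1) z2span_subset by blast
  have L: "?L \<subseteq> ?dual" unfolding local_dual_vectors_def by blast
  have G: "stab (C t) ` ?L \<subseteq> spacetime_stabilizers (C t)"
    using L unfolding spacetime_stabilizers_def by blast
  show "\<exists>emb. inj_on emb (spacetime_qubits (C t)) \<and> emb ` spacetime_qubits (C t) \<subseteq> grid (D + 1) \<and>
      (\<exists>G. G \<subseteq> spacetime_stabilizers (C t) \<and> fspan G = spacetime_stabilizers (C t) \<and>
        (\<forall>g\<in>G. \<exists>p\<in>grid (D + 1). \<forall>x\<in>fsupp (C t) g. grid_dist_le (D + 1) (emb x) p (int (generator_radius c))))"
    using inj_on_spacetime_embedding[OF conjunct1[OF place] conjunct2[OF place]] spacetime_embedding_grid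
      G fspan_stab_image[OF circ L span] stab_local
    by (intro exI[of _ "spacetime_embedding D (pos t)"] conjI exI[of _ "stab (C t) ` ?L"]) auto
qed

end
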